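(* Let $\Delta$ be an abstract polyhedral complex with a recession fan. Then the tropical function field $\operatorname{Rat}(|\Delta|)$ is finitely generated as a semifield over $\mathbb T\mathbb Q$.
   Context: Abstract polyhedral complex with recession fan. Let $V_f\neq\emptyset$ and $V_\infty$ be disjoint finite sets. Let $\Pi$ be a finite poset with a map $\zeta\colon\Pi\to2^{V_f\cup V_\infty}$ such that: (1) $\Pi$ has a minimum $\hat0$ with $\zeta(\hat0)=\emptyset$; (2) for each $x\in V_f\cup V_\infty$ there is a unique $\tau\in\Pi$ with $\zeta(\tau)=\{x\}$; (3) for each $\tau$, $\zeta$ restricts to a bijection from the interval $[\hat0,\tau]$ onto the poset of subsets of $\zeta(\tau)$. Then $\Delta=\{\tau\in\Pi:\zeta(\tau)\cap V_f\neq\emptyset\}$ is an abstract polyhedral complex with recession fan $\Upsilon=\Pi\setminus\Delta$. To $\tau\in\Delta$ with $\zeta(\tau)=A\cup B$ ($A\subseteq V_f$, $B\subseteq V_\infty$) attach $\Theta_\tau=\sigma^A\times\mathbb R^B_{\ge0}\subseteq\mathbb R^{A\cup B}$, $\sigma^A=\{u\in\mathbb R^A_{\ge0}:\sum u_v=1\}$, with integral structure from $\mathbb Z^{A\cup B}$; for $\tau\preceq\eta$, $\Theta_\tau$ is glued as the corresponding face of $\Theta_\eta$; the result is the support $|\Delta|$. Similarly $|\Upsilon|$ is obtained by gluing cones $\mathbb R^{\zeta(\tau)}_{\ge0}$, $\tau\in\Upsilon$, and the recession cone of $\Theta_\tau$ is the cone of the element of $\Upsilon$ below $\tau$ with $\zeta$-value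 $\zeta(\tau)\cap V_\infty$. A half-line $\{p+tw:t\ge 0\}\subseteq\Theta_\tau$ with $0\ne w\in\mathbb R^{B}_{\ge0}$ determines the half-line $\mathbb R_{\ge0}w$ of $|\Upsilon|$ in that cone; two half-lines of $|\Delta|$ are parallel if they determine the same half-line of $|\Upsilon|$. The slope near infinity of a piecewise affine $F$ along $\{p+tw\}$ is $\frac{d}{dt}F(p+tw)$ for $t\gg0$. An integral $\mathbb Q$-affine function on a polyhedron in $\mathbb R^N$ is the restriction of $u\mapsto\langle m,u\rangle+\gamma$ with $m\in\mathbb Z^N$, $\gamma\in\mathbb Q$. $\operatorname{Rat}(|\Delta|)$ consists of $\infty$ and all continuous $F\colon|\Delta|\to\mathbb R$ which are integral $\mathbb Q$-affine on each piece of some subdivision of the $\Theta_\tau$ into integral $\mathbb Q$-affine polyhedra compatible along faces, and which have the same slope near infinity along any two parallel half-lines; it is a semifield with $F\oplus G=\min(F,G)$, $F\odot G=F+G$. $\mathbb T\mathbb Q=\mathbb Q\cup\{\infty\}$ with $\oplus=\min$, $\odot=+$; it embeds in $\operatorname{Rat}(|\Delta|)$ as constants. A semifield $S$ over $\mathbb T\mathbb Q$ is finitely generated if there are $s_1,\dots,s_r\in S$ such that every element of $S$ is of the form $p(s_1,\dots,s_r)\odot q(s_1,\dots,s_r)^{-1}$ with $p,q$ tropical polynomials (finite $\oplus$-sums of terms $a\odot s_1^{\odot i_1}\odot\cdots\odot s_r^{\odot i_r}$, $a\in\mathbb T\mathbb Q$), $q\neq\infty$. *)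

theory Defs
  imports "HOL-Analysis.Analysis"
begin

text \<open>Abstract polyhedral complex with recession fan.
  Vertices live in a finite type 'v; V_f, V_inf are disjoint subsets.
  The finite poset Pi is the finite ordered type 'p (Pi = UNIV).\<close>

definition apc_data :: "'v set \<Rightarrow> 'v set \<Rightarrow> ('p::{finite,order} \<Rightarrow> 'v set) \<Rightarrow> bool" where
  "apc_data Vf Vinf zeta \<longleftrightarrow>
     Vf \<noteq> {} \<and> Vf \<inter> Vinf = {} \<and>
     (\<forall>\<tau>. zeta \<tau> \<subseteq> Vf \<union> Vinf) \<and>
     (\<exists>z. zeta z = {} \<and> (\<forall>\<tau>. z \<le> \<tau>)) \<and>
     (\<forall>x\<in>Vf \<union> Vinf. \<exists>!\<tau>. zeta \<tau> = {x}) \<and>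
     (\<forall>\<tau>. bij_betw zeta {\<sigma>. \<sigma> \<le> \<tau>} (Pow (zeta \<tau>)) \<and>
          (\<forall>\<sigma> \<sigma>'. \<sigma> \<le> \<tau> \<longrightarrow> \<sigma>' \<le> \<tau> \<longrightarrow> (\<sigma> \<le> \<sigma>' \<longleftrightarrow> zeta \<sigma> \<subseteq> zeta \<sigma>')))"

text \<open>The complex Delta (its recession fan is the complement).\<close>
definition cDelta :: "'v set \<Rightarrow> ('p \<Rightarrow> 'v set) \<Rightarrow> 'p set" where
  "cDelta Vf zeta = {\<tau>. zeta \<tau> \<inter> Vf \<noteq> {}}"

text \<open>Theta_tau = sigma^A x R^B_{>=0}, embedded in real^'v by extension by zero.\<close>
definition Theta :: "'v set \<Rightarrow> ('p \<Rightarrow> 'v set) \<Rightarrow> 'p \<Rightarrow> (real^'v::finite) set" where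
  "Theta Vf zeta \<tau> = {u. (\<forall>j. j \<notin> zeta \<tau> \<longrightarrow> u$j = 0) \<and> (\<forall>j. 0 \<le> u$j) \<and>
                          (\<Sum>j\<in>zeta \<tau> \<inter> Vf. u$j) = 1}"

definition int_Q_polyhedron :: "'v set \<Rightarrow> (real^'v::finite) set \<Rightarrow> bool" where
  "int_Q_polyhedron S P \<longleftrightarrow>
     (\<exists>H :: ((int^'v) \<times> rat) set. finite H \<and>
        P = {x. (\<forall>j. j \<notin> S \<longrightarrow> x$j = 0) \<and>
                (\<forall>(m,g)\<in>H. 0 \<le> (\<Sum>j\<in>S. of_int (m$j) * x$j) + of_rat g)})"

definition int_Q_affine_on :: "'v set \<Rightarrow> (real^'v::finite) set \<Rightarrow> (real^'v \<Rightarrow> real) \<Rightarrow> bool" where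
  "int_Q_affine_on S P f \<longleftrightarrow>
     (\<exists>(m::int^'v) (g::rat). \<forall>x\<in>P. f x = (\<Sum>j\<in>S. of_int (m$j) * x$j) + of_rat g)"

definition poly_subdivision :: "'v set \<Rightarrow> (real^'v::finite) set \<Rightarrow> (real^'v) set set \<Rightarrow> bool" where
  "poly_subdivision S X C \<longleftrightarrow>
     finite C \<and> (\<forall>P\<in>C. int_Q_polyhedron S P) \<and> \<Union>C = X \<and>
     (\<forall>P\<in>C. \<forall>Q. Q face_of P \<longrightarrow> Q \<in> C) \<and>
     (\<forall>P\<in>C. \<forall>Q\<in>C. (P \<inter> Q) face_of P \<and> (P \<inter> Q) face_of Q)"

definition slope_at_infinity :: "(real^'v::finite \<Rightarrow> real) \<Rightarrow> real^'v \<Rightarrow> real^'v \<Rightarrow> real \<Rightarrow> bool" where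
  "slope_at_infinity g p w s \<longleftrightarrow>
     (\<forall>\<^sub>F t in at_top. ((\<lambda>t. g (p + t *\<^sub>R w)) has_real_derivative s) (at t))"

definition rec_dir :: "'v set \<Rightarrow> ('p \<Rightarrow> 'v set) \<Rightarrow> 'p \<Rightarrow> real^'v::finite \<Rightarrow> bool" where
  "rec_dir Vinf zeta \<tau> w \<longleftrightarrow> w \<noteq> 0 \<and> (\<forall>j. 0 \<le> w$j \<and> (j \<notin> zeta \<tau> \<inter> Vinf \<longrightarrow> w$j = 0))"

text \<open>Half-lines {p+tw} in Theta_tau and {p'+tw} in Theta_tau' (same direction w) determine
  the same half-line of |Upsilon|: the point w of the cones of tau and tau' is identified,
  i.e. there is a common face kappa in Upsilon of both carrying w.\<close>
definition same_fan_dir :: "'v set \<Rightarrow> ('p::order \<Rightarrow> 'v set) \<Rightarrow> 'p \<Rightarrow> 'p \<Rightarrow> real^'v::finite \<Rightarrow> bool" where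
  "same_fan_dir Vf zeta \<tau> \<tau>' w \<longleftrightarrow>
     (\<exists>\<kappa>. \<kappa> \<le> \<tau> \<and> \<kappa> \<le> \<tau>' \<and> zeta \<kappa> \<inter> Vf = {} \<and> (\<forall>j. w$j \<noteq> 0 \<longrightarrow> j \<in> zeta \<kappa>))"

text \<open>Finite (real-valued) elements of Rat(|Delta|), as compatible families f_tau on Theta_tau.\<close>
definition rat_fun :: "'v set \<Rightarrow> 'v set \<Rightarrow> ('p::{finite,order} \<Rightarrow> 'v set) \<Rightarrow>
                        ('p \<Rightarrow> real^'v::finite \<Rightarrow> real) \<Rightarrow> bool" where
  "rat_fun Vf Vinf zeta f \<longleftrightarrow>
     (\<forall>\<sigma>\<in>cDelta Vf zeta. \<forall>\<tau>\<in>cDelta Vf zeta. \<sigma> \<le> \<tau> \<longrightarrow>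
        (\<forall>u\<in>Theta Vf zeta \<sigma>. f \<sigma> u = f \<tau> u)) \<and>
     (\<forall>\<tau>\<in>cDelta Vf zeta. continuous_on (Theta Vf zeta \<tau>) (f \<tau>)) \<and>
     (\<exists>C :: 'p \<Rightarrow> (real^'v) set set.
        (\<forall>\<tau>\<in>cDelta Vf zeta. poly_subdivision (zeta \<tau>) (Theta Vf zeta \<tau>) (C \<tau>) \<and>
            (\<forall>P\<in>C \<tau>. int_Q_affine_on (zeta \<tau>) P (f \<tau>))) \<and>
        (\<forall>\<sigma>\<in>cDelta Vf zeta. \<forall>\<tau>\<in>cDelta Vf zeta. \<sigma> \<le> \<tau> \<longrightarrow>
            C \<sigma> = {P\<in>C \<tau>. P \<subseteq> Theta Vf zeta \<sigma>})) \<and>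
     (\<forall>\<tau>\<in>cDelta Vf zeta. \<forall>\<tau>'\<in>cDelta Vf zeta. \<forall>p\<in>Theta Vf zeta \<tau>. \<forall>p'\<in>Theta Vf zeta \<tau>'. \<forall>w s s'.
        rec_dir Vinf zeta \<tau> w \<and> rec_dir Vinf zeta \<tau>' w \<and> same_fan_dir Vf zeta \<tau> \<tau>' w \<and>
        slope_at_infinity (f \<tau>) p w s \<and> slope_at_infinity (f \<tau>') p' w s' \<longrightarrow> s = s')"

text \<open>Elements of the semifield Rat(|Delta|): the constant infinity, or a finite rat_fun,
  as ereal-valued families (values only matter on the points (tau,u), u in Theta tau).\<close>
definition RatD :: "'v set \<Rightarrow> 'v set \<Rightarrow> ('p::{finite,order} \<Rightarrow> 'v set) \<Rightarrow>
                    ('p \<Rightarrow> real^'v::finite \<Rightarrow> ereal) set" where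
  "RatD Vf Vinf zeta = {F.
     (\<forall>\<tau>\<in>cDelta Vf zeta. \<forall>u\<in>Theta Vf zeta \<tau>. F \<tau> u = \<infinity>) \<or>
     (\<exists>f. rat_fun Vf Vinf zeta f \<and>
          (\<forall>\<tau>\<in>cDelta Vf zeta. \<forall>u\<in>Theta Vf zeta \<tau>. F \<tau> u = ereal (f \<tau> u)))}"

text \<open>Tropical polynomial over TQ in r variables: list of terms a \<odot> s_1^{e 0} \<odot> ... with a in Q
  (terms with coefficient infinity are neutral for \<oplus> and omitted); evaluated at a list of
  elements, pointwise, with \<oplus> = min and \<odot> = +.\<close>
definition trop_eval :: "(rat \<times> (nat \<Rightarrow> nat)) list \<Rightarrow> ('p \<Rightarrow> 'x \<Rightarrow> ereal) list \<Rightarrow> 'p \<Rightarrow> 'x \<Rightarrow> ereal" where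
  "trop_eval P ss \<tau> u =
     foldr (\<lambda>(a, e) acc. min (ereal (real_of_rat a) + (\<Sum>j<length ss. ereal (real (e j)) * (ss ! j) \<tau> u)) acc)
           P \<infinity>"

end

theory Submission
  imports Defs
begin

text \<open>The generators are the functions \<open>face_min \<rho>\<close>, the minimum of the coordinates indexed by a face
  \<open>\<rho>\<close>; for a vertex this is a single coordinate. On one cell \<open>\<Theta> \<sigma>\<close> a continuous piecewise
  integral-affine \<open>f\<close> is a maximum of minima of its finitely many affine pieces (Ovchinnikov), and each
  piece is a tropical expression in the coordinates. To glue these local representations \<open>M\<^sub>\<sigma>\<close>, subtract
  a large multiple of the penalty \<open>\<psi>\<^sub>\<sigma>\<close>, the sum of the generators of the faces not below \<open>\<sigma>\<close>, which
  vanishes on \<open>\<Theta> \<sigma>\<close>: then \<open>f = max\<^sub>\<sigma> (M\<^sub>\<sigma> - K \<psi>\<^sub>\<sigma>)\<close> on every cell. A single \<open>K\<close> works because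
  \<open>M\<^sub>\<sigma>\<close> and \<open>M\<^sub>\<eta>\<close> agree on common faces and are Lipschitz, and because towards infinity their
  difference grows at most linearly: by a linear programming argument this reduces to the equality of
  slopes of \<open>f\<close> along parallel half-lines.\<close>

locale polyhedral_complex =
  fixes Vf Vinf :: "'v::finite set" and zeta :: "'p::{finite,order} \<Rightarrow> 'v set"
  assumes complex_data: "apc_data Vf Vinf zeta"
begin

abbreviation "V \<equiv> Vf \<union> Vinf"
abbreviation "\<Delta> \<equiv> cDelta Vf zeta"
abbreviation "\<Theta> \<equiv> Theta Vf zeta"

lemma Vf_nonempty: "Vf \<noteq> {}"
  using complex_data unfolding apc_data_def by (elim conjE) fast

lemma zeta_subset: "zeta \<tau> \<subseteq> V"
  using complex_data unfolding apc_data_def by (elim conjE allE)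

lemma bottom_ex: "\<exists>z. zeta z = {} \<and> (\<forall>\<tau>. z \<le> \<tau>)"
  using complex_data unfolding apc_data_def by (elim conjE)

lemma vertex_unique: "x \<in> V \<Longrightarrow> \<exists>!\<tau>. zeta \<tau> = {x}"
  using complex_data unfolding apc_data_def by (elim conjE) (rule bspec)

lemma zeta_bij_interval: "bij_betw zeta {\<sigma>. \<sigma> \<le> \<tau>} (Pow (zeta \<tau>))"
  using complex_data unfolding apc_data_def by (elim conjE allE)

lemma le_iff_zeta_subset: "\<sigma> \<le> \<tau> \<Longrightarrow> \<sigma>' \<le> \<tau> \<Longrightarrow> (\<sigma> \<le> \<sigma>' \<longleftrightarrow> zeta \<sigma> \<subseteq> zeta \<sigma>')"
  using complex_data unfolding apc_data_def by (elim conjE allE impE) 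

lemma zeta_mono: "\<sigma> \<le> \<tau> \<Longrightarrow> zeta \<sigma> \<subseteq> zeta \<tau>"
  using le_iff_zeta_subset[of \<sigma> \<tau> \<tau>] by simp

lemma face_ex: assumes "J \<subseteq> zeta \<tau>" shows "\<exists>\<sigma>\<le>\<tau>. zeta \<sigma> = J"
proof -
  have "J \<in> zeta ` {\<sigma>. \<sigma> \<le> \<tau>}" using zeta_bij_interval[of \<tau>] assms unfolding bij_betw_def by auto
  then show ?thesis by auto
qed

lemma face_unique: "\<sigma> \<le> \<tau> \<Longrightarrow> \<sigma>' \<le> \<tau> \<Longrightarrow> zeta \<sigma> = zeta \<sigma>' \<Longrightarrow> \<sigma> = \<sigma>'"
  using le_iff_zeta_subset[of \<sigma> \<tau> \<sigma>'] le_iff_zeta_subset[of \<sigma>' \<tau> \<sigma>] by auto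

lemma vertex_le: assumes "x \<in> zeta \<tau>" "zeta \<rho> = {x}" shows "\<rho> \<le> \<tau>"
proof -
  obtain \<sigma> where "\<sigma> \<le> \<tau>" "zeta \<sigma> = {x}" using face_ex[of "{x}" \<tau>] assms by auto
  moreover have "x \<in> V" using assms zeta_subset by blast
  ultimately have "\<rho> = \<sigma>" using vertex_unique[of x] assms(2) by auto
  then show ?thesis using \<open>\<sigma> \<le> \<tau>\<close> by simp
qed

lemma ThetaD:
  assumes "u \<in> \<Theta> \<tau>"
  shows "\<And>j. j \<notin> zeta \<tau> \<Longrightarrow> u$j = 0" "\<And>j. 0 \<le> u$j" "(\<Sum>j\<in>zeta \<tau> \<inter> Vf. u$j) = 1"
  using assms unfolding Theta_def by auto

lemma sum_Vf_eq_Int: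
  assumes "\<And>j. j \<notin> zeta \<tau> \<Longrightarrow> u$j = 0"
  shows "(\<Sum>j\<in>Vf. u$j) = (\<Sum>j\<in>zeta \<tau> \<inter> Vf. u$j)"
  by (rule sum.mono_neutral_right) (use assms in auto)

lemma sum_Vf: "u \<in> \<Theta> \<tau> \<Longrightarrow> (\<Sum>j\<in>Vf. u$j) = 1"
  using sum_Vf_eq_Int[OF ThetaD(1)] ThetaD(3) by simp

lemma ThetaI:
  assumes "\<And>j. j \<notin> zeta \<tau> \<Longrightarrow> u$j = 0" "\<And>j. 0 \<le> u$j" "(\<Sum>j\<in>Vf. u$j) = 1"
  shows "u \<in> \<Theta> \<tau>"
  using assms sum_Vf_eq_Int[OF assms(1)] unfolding Theta_def by simp

lemma Theta_mono: assumes "\<sigma> \<le> \<tau>" shows "\<Theta> \<sigma> \<subseteq> \<Theta> \<tau>"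
proof
  fix u assume u: "u \<in> \<Theta> \<sigma>"
  show "u \<in> \<Theta> \<tau>"
    by (rule ThetaI) (use ThetaD[OF u] sum_Vf[OF u] zeta_mono[OF assms] in auto)
qed

lemma convex_Theta: "convex (\<Theta> \<tau>)"
proof (rule convexI)
  fix x y :: "real^'v" and a b :: real
  assume x: "x \<in> \<Theta> \<tau>" and y: "y \<in> \<Theta> \<tau>" and ab: "0 \<le> a" "0 \<le> b" "a + b = 1"
  have "(\<Sum>j\<in>Vf. (a *\<^sub>R x + b *\<^sub>R y) $ j) = a * (\<Sum>j\<in>Vf. x$j) + b * (\<Sum>j\<in>Vf. y$j)"
    by (simp add: sum.distrib sum_distrib_left)
  then show "a *\<^sub>R x + b *\<^sub>R y \<in> \<Theta> \<tau>"
    by (intro ThetaI) (use ThetaD[OF x] ThetaD[OF y] sum_Vf[OF x] sum_Vf[OF y] ab in auto)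
qed

lemma in_Delta: "\<tau> \<in> \<Delta> \<longleftrightarrow> zeta \<tau> \<inter> Vf \<noteq> {}"
  unfolding cDelta_def by simp

lemma Theta_nonempty: assumes "\<tau> \<in> \<Delta>" shows "\<exists>u. u \<in> \<Theta> \<tau>"
proof -
  obtain a where a: "a \<in> zeta \<tau>" "a \<in> Vf" using assms in_Delta by auto
  have "(\<chi> j. if j = a then 1 else 0) \<in> \<Theta> \<tau>"
    by (intro ThetaI) (use a in \<open>auto simp: sum.delta\<close>)
  then show ?thesis by blast
qed

lemma Delta_if_Theta: "u \<in> \<Theta> \<tau> \<Longrightarrow> \<tau> \<in> \<Delta>"
  using ThetaD(3) in_Delta by fastforce

lemma Delta_nonempty: "\<Delta> \<noteq> {}"
proof -
  obtain a where a: "a \<in> Vf" using Vf_nonempty by auto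
  then obtain \<tau> where "zeta \<tau> = {a}" using vertex_unique[of a] by auto
  then show ?thesis using a in_Delta by auto
qed

end

section \<open>Tropical rational expressions\<close>

type_synonym trop_poly = "(rat \<times> (nat \<Rightarrow> nat)) list"

type_synonym 'v piece = "(int^'v) \<times> rat"

abbreviation ereal_list :: "('p \<Rightarrow> 'x \<Rightarrow> real) list \<Rightarrow> ('p \<Rightarrow> 'x \<Rightarrow> ereal) list" where
  "ereal_list gs \<equiv> map (\<lambda>g \<eta> u. ereal (g \<eta> u)) gs"

definition trop_term :: "('p \<Rightarrow> 'x \<Rightarrow> real) list \<Rightarrow> rat \<times> (nat \<Rightarrow> nat) \<Rightarrow> 'p \<Rightarrow> 'x \<Rightarrow> real" where
  "trop_term gs t \<eta> u = real_of_rat (fst t) + (\<Sum>j<length gs. real (snd t j) * (gs!j) \<eta> u)"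

text \<open>The real value of a tropical polynomial; it is meaningful only for nonempty lists, since
  \<open>Min {}\<close> is unspecified.\<close>

definition trop_min :: "trop_poly \<Rightarrow> ('p \<Rightarrow> 'x \<Rightarrow> real) list \<Rightarrow> 'p \<Rightarrow> 'x \<Rightarrow> real" where
  "trop_min P gs \<eta> u = Min ((\<lambda>t. trop_term gs t \<eta> u) ` set P)"

definition trop_mult :: "trop_poly \<Rightarrow> trop_poly \<Rightarrow> trop_poly" where
  "trop_mult P Q = concat (map (\<lambda>x. map (\<lambda>y. (fst x + fst y, \<lambda>j. snd x j + snd y j)) Q) P)"

lemma trop_eval_Nil: "trop_eval [] ss \<eta> u = \<infinity>"
  unfolding trop_eval_def by simp

lemma ereal_trop_term:
  "ereal (real_of_rat a) + (\<Sum>j<length gs. ereal (real (e j)) * (ereal_list gs ! j) \<eta> u)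
   = ereal (trop_term gs (a, e) \<eta> u)"
proof -
  have "(\<Sum>j<length gs. ereal (real (e j)) * (ereal_list gs ! j) \<eta> u)
      = (\<Sum>j<length gs. ereal (real (e j) * (gs ! j) \<eta> u))"
    by (rule sum.cong) auto
  also have "\<dots> = ereal (\<Sum>j<length gs. real (e j) * (gs ! j) \<eta> u)" by (rule sum_ereal)
  finally show ?thesis unfolding trop_term_def by simp
qed

lemma trop_eval_eq_trop_min:
  "P \<noteq> [] \<Longrightarrow> trop_eval P (ereal_list gs) \<eta> u = ereal (trop_min P gs \<eta> u)"
proof (induction P)
  case (Cons t P)
  obtain a e where t: "t = (a, e)" by (cases t)
  have "trop_eval (t # P) (ereal_list gs) \<eta> u
        = min (ereal (trop_term gs t \<eta> u)) (trop_eval P (ereal_list gs) \<eta> u)"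
    unfolding trop_eval_def t using ereal_trop_term[of a e gs \<eta> u] by simp
  moreover have "trop_min (t # P) gs \<eta> u = min (trop_term gs t \<eta> u) (trop_min P gs \<eta> u)" if "P \<noteq> []"
    unfolding trop_min_def using that by (simp add: Min_insert)
  ultimately show ?case
    using Cons.IH by (cases "P = []") (simp_all add: trop_eval_Nil trop_min_def)
qed simp

lemma Min_add_product:
  fixes F :: "'a \<Rightarrow> real" and G :: "'b \<Rightarrow> real"
  assumes "finite A" "A \<noteq> {}" "finite B" "B \<noteq> {}"
  shows "Min ((\<lambda>(x,y). F x + G y) ` (A \<times> B)) = Min (F ` A) + Min (G ` B)"
proof (rule antisym)
  have "Min (F ` A) \<in> F ` A" "Min (G ` B) \<in> G ` B" using assms by simp_all
  then obtain x0 y0 where x0: "x0 \<in> A" "F x0 = Min (F ` A)" and y0: "y0 \<in> B" "G y0 = Min (G ` B)"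
    by (metis imageE)
  have "(F x0 + G y0) \<in> (\<lambda>(x,y). F x + G y) ` (A \<times> B)" using x0 y0 by force
  then show "Min ((\<lambda>(x,y). F x + G y) ` (A \<times> B)) \<le> Min (F ` A) + Min (G ` B)"
    using assms x0 y0 by (simp add: Min_le)
  show "Min (F ` A) + Min (G ` B) \<le> Min ((\<lambda>(x,y). F x + G y) ` (A \<times> B))"
    using assms by (auto simp: Min_ge_iff intro: add_mono)
qed

lemma trop_min_mult:
  assumes "P \<noteq> []" "Q \<noteq> []"
  shows "trop_min (trop_mult P Q) gs \<eta> u = trop_min P gs \<eta> u + trop_min Q gs \<eta> u"
proof -
  have "set (trop_mult P Q) = (\<lambda>(x,y). (fst x + fst y, \<lambda>j. snd x j + snd y j)) ` (set P \<times> set Q)"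
    unfolding trop_mult_def by auto
  then have "(\<lambda>t. trop_term gs t \<eta> u) ` set (trop_mult P Q)
      = (\<lambda>(x,y). trop_term gs x \<eta> u + trop_term gs y \<eta> u) ` (set P \<times> set Q)"
    unfolding image_image
    by (simp add: image_image case_prod_beta trop_term_def of_rat_add sum.distrib algebra_simps)
  then show ?thesis unfolding trop_min_def using assms by (simp add: Min_add_product)
qed

lemma trop_mult_nonempty: "P \<noteq> [] \<Longrightarrow> Q \<noteq> [] \<Longrightarrow> trop_mult P Q \<noteq> []"
  unfolding trop_mult_def by (cases P; cases Q) auto

lemma trop_min_append:
  "P \<noteq> [] \<Longrightarrow> Q \<noteq> [] \<Longrightarrow> trop_min (P @ Q) gs \<eta> u = min (trop_min P gs \<eta> u) (trop_min Q gs \<eta> u)"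
  unfolding trop_min_def by (simp add: image_Un Min_Un)

lemma trop_min_const: "trop_min [(c, \<lambda>_. 0)] gs \<eta> u = real_of_rat c"
  unfolding trop_min_def trop_term_def by simp

lemma trop_min_var:
  assumes "j < length gs"
  shows "trop_min [(0, \<lambda>i. if i = j then 1 else 0)] gs \<eta> u = (gs ! j) \<eta> u"
proof -
  have "(\<Sum>i<length gs. real (if i = j then 1 else 0) * (gs ! i) \<eta> u) = (gs ! j) \<eta> u"
    using assms by (simp add: of_bool_def[symmetric] sum.delta)
  then show ?thesis unfolding trop_min_def trop_term_def by simp
qed

text \<open>By \<open>trop_closure_diff_rep\<close>, every element of \<open>trop_closure gs\<close> is a difference \<open>p - q\<close> of
  tropical polynomials in \<open>gs\<close>, i.e. lies in the semifield generated by \<open>gs\<close>.\<close>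

inductive_set trop_closure :: "('p \<Rightarrow> 'x \<Rightarrow> real) list \<Rightarrow> ('p \<Rightarrow> 'x \<Rightarrow> real) set" for gs where
  gen: "j < length gs \<Longrightarrow> gs ! j \<in> trop_closure gs"
| const: "(\<lambda>\<eta> u. real_of_rat c) \<in> trop_closure gs"
| add: "f \<in> trop_closure gs \<Longrightarrow> g \<in> trop_closure gs \<Longrightarrow> (\<lambda>\<eta> u. f \<eta> u + g \<eta> u) \<in> trop_closure gs"
| uminus: "f \<in> trop_closure gs \<Longrightarrow> (\<lambda>\<eta> u. - f \<eta> u) \<in> trop_closure gs"
| min: "f \<in> trop_closure gs \<Longrightarrow> g \<in> trop_closure gs \<Longrightarrow> (\<lambda>\<eta> u. min (f \<eta> u) (g \<eta> u)) \<in> trop_closure gs"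

lemma trop_closure_diff_rep:
  assumes "f \<in> trop_closure gs"
  shows "\<exists>P Q. P \<noteq> [] \<and> Q \<noteq> [] \<and> (\<forall>\<eta> u. f \<eta> u = trop_min P gs \<eta> u - trop_min Q gs \<eta> u)"
  using assms
proof induction
  case (gen j)
  show ?case
    by (rule exI[of _ "[(0, \<lambda>i. if i = j then 1 else 0)]"], rule exI[of _ "[(0, \<lambda>_. 0)]"])
       (simp add: trop_min_var[OF gen] trop_min_const[of 0, simplified])
next
  case (const c)
  show ?case
    by (rule exI[of _ "[(c, \<lambda>_. 0)]"], rule exI[of _ "[(0, \<lambda>_. 0)]"])
       (simp add: trop_min_const trop_min_const[of 0, simplified])
next
  case (add f g)
  then obtain P1 Q1 P2 Q2 where h: "P1 \<noteq> []" "Q1 \<noteq> []" "P2 \<noteq> []" "Q2 \<noteq> []"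
    "\<forall>\<eta> u. f \<eta> u = trop_min P1 gs \<eta> u - trop_min Q1 gs \<eta> u"
    "\<forall>\<eta> u. g \<eta> u = trop_min P2 gs \<eta> u - trop_min Q2 gs \<eta> u" by blast
  show ?case
    by (rule exI[of _ "trop_mult P1 P2"], rule exI[of _ "trop_mult Q1 Q2"])
       (use h in \<open>simp add: trop_mult_nonempty trop_min_mult\<close>)
next
  case (uminus f)
  then show ?case by (metis minus_diff_eq)
next
  case (min f g)
  then obtain P1 Q1 P2 Q2 where h: "P1 \<noteq> []" "Q1 \<noteq> []" "P2 \<noteq> []" "Q2 \<noteq> []"
    "\<forall>\<eta> u. f \<eta> u = trop_min P1 gs \<eta> u - trop_min Q1 gs \<eta> u"
    "\<forall>\<eta> u. g \<eta> u = trop_min P2 gs \<eta> u - trop_min Q2 gs \<eta> u" by blast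
  \<comment> \<open>\<open>min (p1 - q1) (p2 - q2) = min (p1 + q2) (p2 + q1) - (q1 + q2)\<close>\<close>
  show ?case
    by (rule exI[of _ "trop_mult P1 Q2 @ trop_mult P2 Q1"], rule exI[of _ "trop_mult Q1 Q2"])
       (use h in \<open>simp add: trop_mult_nonempty trop_min_mult trop_min_append min_def\<close>)
qed

lemma trop_closure_cong: "f \<in> trop_closure gs \<Longrightarrow> (\<And>\<eta> u. g \<eta> u = f \<eta> u) \<Longrightarrow> g \<in> trop_closure gs"
  by (metis ext)

lemma trop_closure_zero: "(\<lambda>\<eta> u. 0) \<in> trop_closure gs"
  using trop_closure.const[of 0 gs] by simp

lemma trop_closure_diff:
  "f \<in> trop_closure gs \<Longrightarrow> g \<in> trop_closure gs \<Longrightarrow> (\<lambda>\<eta> u. f \<eta> u - g \<eta> u) \<in> trop_closure gs"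
  by (rule trop_closure_cong[OF trop_closure.add[OF _ trop_closure.uminus]]) simp_all

lemma trop_closure_max:
  "f \<in> trop_closure gs \<Longrightarrow> g \<in> trop_closure gs \<Longrightarrow> (\<lambda>\<eta> u. max (f \<eta> u) (g \<eta> u)) \<in> trop_closure gs"
proof -
  assume "f \<in> trop_closure gs" "g \<in> trop_closure gs"
  then have "(\<lambda>\<eta> u. - min (- f \<eta> u) (- g \<eta> u)) \<in> trop_closure gs"
    by (intro trop_closure.uminus trop_closure.min)
  then show ?thesis by (rule trop_closure_cong) (simp add: max_def min_def)
qed

lemma trop_closure_sum:
  "finite A \<Longrightarrow> (\<And>a. a \<in> A \<Longrightarrow> f a \<in> trop_closure gs) \<Longrightarrow> (\<lambda>\<eta> u. \<Sum>a\<in>A. f a \<eta> u) \<in> trop_closure gs"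
proof (induction A rule: finite_induct)
  case (insert x F)
  then have "(\<lambda>\<eta> u. f x \<eta> u + (\<Sum>a\<in>F. f a \<eta> u)) \<in> trop_closure gs" by (intro trop_closure.add) auto
  then show ?case by (rule trop_closure_cong) (use insert in simp)
qed (simp add: trop_closure_zero)

lemma trop_closure_Max:
  "finite A \<Longrightarrow> A \<noteq> {} \<Longrightarrow> (\<And>a. a \<in> A \<Longrightarrow> f a \<in> trop_closure gs) \<Longrightarrow>
   (\<lambda>\<eta> u. Max ((\<lambda>a. f a \<eta> u) ` A)) \<in> trop_closure gs"
proof (induction A rule: finite_ne_induct)
  case (insert x F)
  then have "(\<lambda>\<eta> u. max (f x \<eta> u) (Max ((\<lambda>a. f a \<eta> u) ` F))) \<in> trop_closure gs"
    by (intro trop_closure_max) auto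
  then show ?case by (rule trop_closure_cong) (use insert in simp)
qed simp

lemma trop_closure_Min:
  "finite A \<Longrightarrow> A \<noteq> {} \<Longrightarrow> (\<And>a. a \<in> A \<Longrightarrow> f a \<in> trop_closure gs) \<Longrightarrow>
   (\<lambda>\<eta> u. Min ((\<lambda>a. f a \<eta> u) ` A)) \<in> trop_closure gs"
proof (induction A rule: finite_ne_induct)
  case (insert x F)
  then have "(\<lambda>\<eta> u. min (f x \<eta> u) (Min ((\<lambda>a. f a \<eta> u) ` F))) \<in> trop_closure gs"
    by (intro trop_closure.min) auto
  then show ?case by (rule trop_closure_cong) (use insert in simp)
qed simp

lemma trop_closure_of_nat_mult: "f \<in> trop_closure gs \<Longrightarrow> (\<lambda>\<eta> u. real n * f \<eta> u) \<in> trop_closure gs"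
proof (induction n)
  case (Suc n)
  then have "(\<lambda>\<eta> u. f \<eta> u + real n * f \<eta> u) \<in> trop_closure gs" by (intro trop_closure.add) auto
  then show ?case by (rule trop_closure_cong) (simp add: algebra_simps)
qed (simp add: trop_closure_zero)

lemma trop_closure_of_int_mult:
  assumes "f \<in> trop_closure gs" shows "(\<lambda>\<eta> u. real_of_int k * f \<eta> u) \<in> trop_closure gs"
proof (cases "k \<ge> 0")
  case True
  show ?thesis
    by (rule trop_closure_cong[OF trop_closure_of_nat_mult[OF assms, of "nat k"]]) (use True in simp)
next
  case False
  show ?thesis
    by (rule trop_closure_cong[OF trop_closure.uminus[OF trop_closure_of_nat_mult[OF assms, of "nat (-k)"]]])
       (use False in simp)
qed

lemma convex_common_strict_point:
  fixes Q :: "'a::real_vector set" and g :: "'k \<Rightarrow> 'a \<Rightarrow> real"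
  assumes "finite K" "convex Q" "q0 \<in> Q"
    and aff: "\<And>k x y u. g k ((1 - u) *\<^sub>R x + u *\<^sub>R y) = (1 - u) * g k x + u * g k y"
    and le: "\<And>k y. k \<in> K \<Longrightarrow> y \<in> Q \<Longrightarrow> g k y \<le> 0"
    and ex: "\<And>k. k \<in> K \<Longrightarrow> \<exists>y\<in>Q. g k y < 0"
  shows "\<exists>q\<in>Q. \<forall>k\<in>K. g k q < 0"
  using assms(1) le ex
proof (induction K rule: finite_induct)
  case (insert k F)
  then obtain qF where qF: "qF \<in> Q" "\<forall>k'\<in>F. g k' qF < 0" by blast
  obtain y where y: "y \<in> Q" "g k y < 0" using insert.prems(2) by blast
  let ?q = "(1 - 1/2::real) *\<^sub>R qF + (1/2::real) *\<^sub>R y"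
  have "?q \<in> Q" by (rule convexD[OF assms(2) qF(1) y(1)]) simp_all
  moreover have "g k' ?q < 0" if k': "k' \<in> insert k F" for k'
    using aff[of k' "1/2" qF y] insert.prems(1)[OF k'] k' qF y by fastforce
  ultimately show ?case by blast
qed (use assms(3) in blast)

lemma finite_strict_ineqs_perturb:
  fixes a b :: "'k \<Rightarrow> real"
  assumes "finite K" "\<And>k. k \<in> K \<Longrightarrow> a k < 0"
  shows "\<exists>e>0. \<forall>k\<in>K. a k + e * b k < 0"
proof -
  have "\<forall>\<^sub>F e in at_right 0. \<forall>k\<in>K. a k + e * b k < 0"
  proof (rule eventually_ball_finite[OF assms(1)], rule ballI)
    fix k assume "k \<in> K"
    have "((\<lambda>e. a k + e * b k) \<longlongrightarrow> a k + 0 * b k) (at_right 0)" by (intro tendsto_intros)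
    then show "\<forall>\<^sub>F e in at_right 0. a k + e * b k < 0"
      using assms(2)[OF \<open>k \<in> K\<close>] by (auto dest: order_tendstoD(2))
  qed
  then have "\<forall>\<^sub>F e in at_right (0::real). 0 < e \<and> (\<forall>k\<in>K. a k + e * b k < 0)"
    by (intro eventually_conj) (simp_all add: eventually_at_right_less)
  then show ?thesis using eventually_happens'[OF trivial_limit_at_right_real] by blast
qed

lemma face_of_mem_extension:
  fixes x q :: "'a::real_vector"
  assumes "Q face_of P" "q \<in> Q" "x \<in> P" "x \<noteq> q" "0 < e" "q + e *\<^sub>R (q - x) \<in> P"
  shows "x \<in> Q"
proof -
  define z where "z = q + e *\<^sub>R (q - x)"
  have "(1 - 1 / (1 + e)) *\<^sub>R x + (1 / (1 + e)) *\<^sub>R z = (1 / (1 + e)) *\<^sub>R ((1 + e) *\<^sub>R q)"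
    unfolding z_def using assms(5) by (simp add: algebra_simps field_simps)
  then have "q = (1 - 1 / (1 + e)) *\<^sub>R x + (1 / (1 + e)) *\<^sub>R z" using assms(5) by simp
  moreover have "x \<noteq> z"
  proof
    assume "x = z"
    then have "(1 + e) *\<^sub>R (q - x) = 0" unfolding z_def by (simp add: algebra_simps)
    then show False using assms(4,5) by simp
  qed
  ultimately have "q \<in> open_segment x z"
    unfolding in_segment using assms(5) by (intro conjI exI[of _ "1 / (1 + e)"]) auto
  then show ?thesis using assms(1-3,6) unfolding face_of_def z_def by blast
qed

lemma mem_face_of_ineqs:
  fixes K :: "('a::real_inner \<times> real) set"
  defines "P \<equiv> {x. \<forall>(a,b)\<in>K. a \<bullet> x + b \<le> 0}"
  assumes "finite K" "Q face_of P" "Q \<noteq> {}" "x \<in> P"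
    and eqs: "\<forall>(a,b)\<in>K. (\<forall>y\<in>Q. a \<bullet> y + b = 0) \<longrightarrow> a \<bullet> x + b = 0"
  shows "x \<in> Q"
proof -
  have QP: "Q \<subseteq> P" and cQ: "convex Q" using assms(3) face_of_imp_subset face_of_imp_convex by auto
  obtain q0 where q0: "q0 \<in> Q" using assms(4) by auto
  define K1 where "K1 = {k\<in>K. \<not> (\<forall>y\<in>Q. fst k \<bullet> y + snd k = 0)}"
  have fK1: "finite K1" using assms(2) unfolding K1_def by simp
  have K1_le: "fst k \<bullet> y + snd k \<le> 0" if "k \<in> K1" "y \<in> Q" for k y
    using QP that unfolding K1_def P_def by (auto simp: case_prod_beta)
  have "\<exists>q\<in>Q. \<forall>k\<in>K1. fst k \<bullet> q + snd k < 0"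
  proof (rule convex_common_strict_point[OF fK1 cQ q0, where g="\<lambda>k y. fst k \<bullet> y + snd k"])
    show "\<And>k x y u. fst k \<bullet> ((1 - u) *\<^sub>R x + u *\<^sub>R y) + snd k = (1 - u) * (fst k \<bullet> x + snd k) + u * (fst k \<bullet> y + snd k)"
      by (simp add: inner_add_right algebra_simps)
    show "\<exists>y\<in>Q. fst k \<bullet> y + snd k < 0" if "k \<in> K1" for k
      using that K1_le[OF that] unfolding K1_def by (force simp: order_le_less)
  qed (use K1_le in blast)
  then obtain q where q: "q \<in> Q" "\<And>k. k \<in> K1 \<Longrightarrow> fst k \<bullet> q + snd k < 0" by auto
  show ?thesis
  proof (cases "x = q")
    case False
    \<comment> \<open>push \<open>q\<close> slightly away from \<open>x\<close> without leaving \<open>P\<close>\<close>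
    obtain e where e: "0 < e" "\<And>k. k \<in> K1 \<Longrightarrow>
        fst k \<bullet> q + snd k + e * ((fst k \<bullet> q + snd k) - (fst k \<bullet> x + snd k)) < 0"
      using finite_strict_ineqs_perturb[OF fK1, of "\<lambda>k. fst k \<bullet> q + snd k"
          "\<lambda>k. (fst k \<bullet> q + snd k) - (fst k \<bullet> x + snd k)"] q(2) by blast
    define z where "z = q + e *\<^sub>R (q - x)"
    have zP: "z \<in> P"
      unfolding P_def
    proof (safe)
      fix a b assume ab: "(a, b) \<in> K"
      have zi: "a \<bullet> z + b = (a \<bullet> q + b) + e * ((a \<bullet> q + b) - (a \<bullet> x + b))"
        unfolding z_def by (simp add: inner_add_right inner_diff_right algebra_simps)
      show "a \<bullet> z + b \<le> 0"
      proof (cases "(a,b) \<in> K1")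
        case False
        then have "\<forall>y\<in>Q. a \<bullet> y + b = 0" using ab unfolding K1_def by auto
        moreover from this have "a \<bullet> x + b = 0" using eqs ab by auto
        ultimately show ?thesis using zi q(1) by simp
      qed (use e(2) zi in fastforce)
    qed
    then show ?thesis using face_of_mem_extension[OF assms(3) q(1) assms(5) False e(1)] unfolding z_def by blast
  qed (use q in simp)
qed

lemma face_of_Int_zero_ineqs:
  fixes S :: "'a::real_inner set"
  assumes "convex S" "finite D" "\<And>d x. d \<in> D \<Longrightarrow> x \<in> S \<Longrightarrow> 0 \<le> a d \<bullet> x"
  shows "S \<inter> {x. \<forall>d\<in>D. a d \<bullet> x = 0} face_of S"
  using assms(2,3)
proof (induction D rule: finite_induct)
  case empty then show ?case using face_of_refl[OF assms(1)] by simp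
next
  case (insert d D)
  have 1: "S \<inter> {x. \<forall>d\<in>D. a d \<bullet> x = 0} face_of S" using insert by auto
  have 2: "S \<inter> {x. a d \<bullet> x = 0} face_of S"
    by (rule face_of_Int_supporting_hyperplane_ge[OF assms(1)]) (use insert in auto)
  have "S \<inter> {x. \<forall>d\<in>insert d D. a d \<bullet> x = 0} = (S \<inter> {x. \<forall>d\<in>D. a d \<bullet> x = 0}) \<inter> (S \<inter> {x. a d \<bullet> x = 0})"
    by auto
  then show ?case using face_of_Int[OF 1 2] by simp
qed

lemma finite_total_preorder_min:
  assumes "finite Z" "Z \<noteq> {}" "\<And>i j. i \<in> Z \<Longrightarrow> j \<in> Z \<Longrightarrow> R i j \<or> R j i"
    "\<And>i j k. R i j \<Longrightarrow> R j k \<Longrightarrow> R i k" "\<And>i. R i i"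
  shows "\<exists>m\<in>Z. \<forall>j\<in>Z. R m j"
  using assms(1,2,3)
proof (induction Z rule: finite_ne_induct)
  case (singleton x) then show ?case using assms(5) by auto
next
  case (insert x F)
  then obtain m where m: "m \<in> F" "\<forall>j\<in>F. R m j" by blast
  show ?case
  proof (cases "R x m")
    case True then show ?thesis using m assms(4,5) by blast
  next
    case False then have "R m x" using insert.prems m by blast
    then show ?thesis using m by blast
  qed
qed

lemma eventually_min_affine_at_top:
  fixes p w :: "'j \<Rightarrow> real"
  assumes "finite Z" "Z \<noteq> {}"
  shows "\<exists>j0\<in>Z. w j0 = Min (w ` Z) \<and> (\<forall>\<^sub>F t in at_top. \<forall>j\<in>Z. p j0 + t * w j0 \<le> p j + t * w j)"
proof -
  define \<beta> where "\<beta> = Min (w ` Z)"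
  define Z0 where "Z0 = {j\<in>Z. w j = \<beta>}"
  have "\<beta> \<in> w ` Z" unfolding \<beta>_def using assms by (intro Min_in) auto
  then have Z0ne: "Z0 \<noteq> {}" unfolding Z0_def by auto
  have fZ0: "finite Z0" using assms(1) unfolding Z0_def by simp
  have "Min (p ` Z0) \<in> p ` Z0" using Z0ne fZ0 by (intro Min_in) auto
  then obtain j0 where j0: "j0 \<in> Z0" "p j0 = Min (p ` Z0)" by auto
  have wb: "\<And>j. j \<in> Z \<Longrightarrow> \<beta> \<le> w j" unfolding \<beta>_def using assms by auto
  have "\<forall>\<^sub>F t in at_top. \<forall>j\<in>Z. p j0 + t * w j0 \<le> p j + t * w j"
  proof (rule eventually_ball_finite[OF assms(1)], rule ballI)
    fix j assume j: "j \<in> Z"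
    show "\<forall>\<^sub>F t in at_top. p j0 + t * w j0 \<le> p j + t * w j"
    proof (cases "w j = \<beta>")
      case True
      then have "j \<in> Z0" using j unfolding Z0_def by auto
      then have "p j0 \<le> p j" using j0 fZ0 by auto
      then show ?thesis using True j0(1) unfolding Z0_def by auto
    next
      case False
      then have wpos: "w j - \<beta> > 0" using wb[OF j] by simp
      have "\<forall>\<^sub>F t in at_top. (p j0 - p j) / (w j - \<beta>) \<le> t" by (rule eventually_ge_at_top)
      then show ?thesis
      proof (rule eventually_mono)
        fix t assume "(p j0 - p j) / (w j - \<beta>) \<le> t"
        then have "p j0 - p j \<le> t * (w j - \<beta>)" using wpos by (simp add: field_simps)
        then show "p j0 + t * w j0 \<le> p j + t * w j" using j0(1) unfolding Z0_def by (simp add: algebra_simps)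
      qed
    qed
  qed
  then show ?thesis using j0(1) unfolding Z0_def \<beta>_def by auto
qed


section \<open>The generators and the arrangement subdivision\<close>

lemma continuous_on_Min_coord:
  assumes "finite Z" "Z \<noteq> {}"
  shows "continuous_on S (\<lambda>u::real^'n. Min ((\<lambda>j. u$j) ` Z))"
  using assms
proof (induction Z rule: finite_ne_induct)
  case (singleton x) then show ?case by (simp add: continuous_intros)
next
  case (insert x F)
  have "continuous_on S (\<lambda>u::real^'n. min (u$x) (Min ((\<lambda>j. u$j) ` F)))"
    using insert by (intro continuous_on_min continuous_intros) auto
  then show ?case using insert by (simp add: Min_insert)
qed

definition real_vec :: "int^'v \<Rightarrow> real^'v" where "real_vec m = (\<chi> j. real_of_int (m$j))"

lemma real_vec_inner: "real_vec m \<bullet> x = (\<Sum>j\<in>UNIV. real_of_int (m$j) * x$j)"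
  unfolding real_vec_def inner_vec_def by simp

lemma real_vec_neg: "real_vec (- m) \<bullet> x = - (real_vec m \<bullet> x)"
  unfolding real_vec_inner by (simp add: sum_negf)

lemma real_vec_axis: "real_vec (axis i 1) \<bullet> x = x$i"
proof -
  have "(\<Sum>j\<in>UNIV. real_of_int (axis i 1 $ j) * x$j) = (\<Sum>j\<in>UNIV. if j = i then x$j else 0)"
    by (rule sum.cong) (auto simp: axis_def)
  then show ?thesis unfolding real_vec_inner by simp
qed

lemma real_vec_diff_axis: "real_vec (axis i 1 - axis j 1) \<bullet> x = x$i - x$j"
proof -
  have "real_vec (axis i 1 - axis j 1) \<bullet> x = (\<Sum>k\<in>UNIV. real_of_int (axis i 1 $ k) * x$k) - (\<Sum>k\<in>UNIV. real_of_int (axis j 1 $ k) * x$k)"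
    unfolding real_vec_inner by (simp add: sum_subtractf algebra_simps)
  then show ?thesis using real_vec_axis[of i x] real_vec_axis[of j x] unfolding real_vec_inner by simp
qed

lemma sum_support_UNIV:
  assumes "\<And>j. j \<notin> S \<Longrightarrow> x$j = 0"
  shows "(\<Sum>j\<in>S. c j * x$j) = (\<Sum>j\<in>UNIV. c j * (x::real^'v::finite)$j)"
  by (rule sum.mono_neutral_left) (use assms in auto)

lemma convex_ineqs_le_zero: "convex {x::'a::real_inner. \<forall>(a,b)\<in>K. a \<bullet> x + b \<le> 0}"
proof -
  have "{x::'a. \<forall>(a,b)\<in>K. a \<bullet> x + b \<le> 0} = (\<Inter>k\<in>K. {x. fst k \<bullet> x \<le> - snd k})"
    by (force simp: case_prod_beta add.commute le_minus_iff)
  then show ?thesis by (simp add: convex_INT convex_halfspace_le)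
qed

context polyhedral_complex begin

definition face_min :: "'p \<Rightarrow> 'p \<Rightarrow> real^'v \<Rightarrow> real" where
  "face_min \<rho> \<eta> u = (if \<rho> \<le> \<eta> then Min ((\<lambda>j. u$j) ` zeta \<rho>) else 0)"

lemma Min_coord_nonneg: assumes "u \<in> \<Theta> \<eta>" "zeta \<rho> \<noteq> {}" shows "0 \<le> Min ((\<lambda>j. u$j) ` zeta \<rho>)"
  using assms ThetaD(2)[OF assms(1)] by (subst Min_ge_iff) auto

lemma face_min_nonneg: assumes "u \<in> \<Theta> \<eta>" "zeta \<rho> \<noteq> {}" shows "0 \<le> face_min \<rho> \<eta> u"
  unfolding face_min_def using Min_coord_nonneg[OF assms] by simp

lemma face_min_ge: assumes "\<rho> \<le> \<eta>" "zeta \<rho> \<noteq> {}" "\<And>j. j \<in> zeta \<rho> \<Longrightarrow> t \<le> u$j"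
  shows "t \<le> face_min \<rho> \<eta> u"
  using assms unfolding face_min_def by (simp add: Min_ge_iff)

lemma face_min_restrict:
  assumes "\<sigma> \<le> \<tau>" "u \<in> \<Theta> \<sigma>" "zeta \<rho> \<noteq> {}"
  shows "face_min \<rho> \<sigma> u = face_min \<rho> \<tau> u"
proof (cases "\<rho> \<le> \<sigma>")
  case True
  then have "\<rho> \<le> \<tau>" using assms(1) by (rule order_trans)
  then show ?thesis using True unfolding face_min_def by simp
next
  case False
  show ?thesis
  proof (cases "\<rho> \<le> \<tau>")
    case True
    have "\<not> zeta \<rho> \<subseteq> zeta \<sigma>" using le_iff_zeta_subset[OF True assms(1)] False by blast
    then obtain j where j: "j \<in> zeta \<rho>" "j \<notin> zeta \<sigma>" by auto
    have "u$j = 0" using ThetaD(1)[OF assms(2) j(2)] .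
    moreover have "Min ((\<lambda>j. u$j) ` zeta \<rho>) \<le> u$j" by (rule Min_le) (use j(1) in auto)
    ultimately have "Min ((\<lambda>j. u$j) ` zeta \<rho>) \<le> 0" by simp
    moreover have "u \<in> \<Theta> \<tau>" using Theta_mono[OF assms(1)] assms(2) by auto
    then have "0 \<le> Min ((\<lambda>j. u$j) ` zeta \<rho>)" using Min_coord_nonneg assms(3) by blast
    ultimately show ?thesis using True False unfolding face_min_def by simp
  next
    case False
    then have "\<not> \<rho> \<le> \<sigma>" using assms(1) order_trans by blast
    then show ?thesis using False unfolding face_min_def by simp
  qed
qed

lemma continuous_on_face_min: assumes "zeta \<rho> \<noteq> {}" shows "continuous_on S (face_min \<rho> \<tau>)"
proof (cases "\<rho> \<le> \<tau>")
  case True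
  then have "face_min \<rho> \<tau> = (\<lambda>u. Min ((\<lambda>j. u$j) ` zeta \<rho>))" unfolding face_min_def by auto
  then show ?thesis using continuous_on_Min_coord[OF finite assms] by simp
next
  case False
  then have "face_min \<rho> \<tau> = (\<lambda>u. 0)" unfolding face_min_def by auto
  then show ?thesis by simp
qed

text \<open>Every \<open>\<Theta> \<tau>\<close> is subdivided by the hyperplanes \<open>u\<^sub>i = u\<^sub>j\<close> and \<open>u\<^sub>j = 0\<close>. A cell is cut
  out by a choice of one of the two half-spaces for each normal (a sign pattern); on it the order
  of the coordinates is fixed, so every \<open>face_min\<close> is affine there.\<close>

definition arr_normals :: "(int^'v) set" where
  "arr_normals = (\<lambda>(i,j). axis i 1 - axis j 1) ` UNIV \<union> (\<lambda>j. axis j 1) ` UNIV \<union> (\<lambda>j. - axis j 1) ` UNIV"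

lemma finite_arr_normals: "finite arr_normals" unfolding arr_normals_def by simp

lemma arr_normals_diff: "axis i 1 - axis j 1 \<in> arr_normals" unfolding arr_normals_def by auto
lemma arr_normals_axis: "axis j 1 \<in> arr_normals" unfolding arr_normals_def by auto
lemma arr_normals_neg_axis: "- axis j 1 \<in> arr_normals" unfolding arr_normals_def by auto

lemma arr_normals_neg: assumes "m \<in> arr_normals" shows "- m \<in> arr_normals"
proof -
  consider (1) i j where "m = axis i 1 - axis j 1" | (2) j where "m = axis j 1" | (3) j where "m = - axis j 1"
    using assms unfolding arr_normals_def by auto
  then show ?thesis
  proof cases
    case 1
    have "- m = axis j 1 - axis i 1" using 1 by simp
    then show ?thesis using arr_normals_diff by simp
  next
    case 2 then show ?thesis using arr_normals_neg_axis by simp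
  next
    case 3 then show ?thesis using arr_normals_axis by simp
  qed
qed

definition arr_cell :: "'p \<Rightarrow> (int^'v) set \<Rightarrow> (real^'v) set" where
  "arr_cell \<tau> E = \<Theta> \<tau> \<inter> {x. \<forall>m\<in>E. real_vec m \<bullet> x \<le> 0}"

definition sign_pattern :: "(int^'v) set \<Rightarrow> bool" where
  "sign_pattern E \<longleftrightarrow> E \<subseteq> arr_normals \<and> (\<forall>m\<in>arr_normals. m \<in> E \<or> - m \<in> E)"

definition arr_cells :: "'p \<Rightarrow> (real^'v) set set" where
  "arr_cells \<tau> = {arr_cell \<tau> E | E. sign_pattern E} \<union> {{}}"

definition Vf_ind :: "real^'v" where "Vf_ind = (\<chi> j. if j \<in> Vf then 1 else 0)"

lemma Vf_ind_inner: "Vf_ind \<bullet> x = (\<Sum>j\<in>Vf. x$j)"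
proof -
  have "Vf_ind \<bullet> x = (\<Sum>j\<in>UNIV. if j \<in> Vf then x$j else 0)" unfolding Vf_ind_def inner_vec_def
    by (rule sum.cong) auto
  also have "\<dots> = (\<Sum>j\<in>Vf. x$j)" by (simp add: sum.If_cases)
  finally show ?thesis .
qed

definition arr_cell_ineqs :: "'p \<Rightarrow> (int^'v) set \<Rightarrow> ((real^'v) \<times> real) set" where
  "arr_cell_ineqs \<tau> E = (\<lambda>j. (- axis j 1, 0)) ` UNIV \<union> (\<lambda>j. (axis j 1, 0)) ` (- zeta \<tau>) \<union> {(Vf_ind, -1), (- Vf_ind, 1)}
     \<union> (\<lambda>m. (real_vec m, 0)) ` E"

lemma finite_arr_cell_ineqs: "finite E \<Longrightarrow> finite (arr_cell_ineqs \<tau> E)" unfolding arr_cell_ineqs_def by simp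

lemma arr_cell_eq_ineqs: "arr_cell \<tau> E = {x. \<forall>(a,b)\<in>arr_cell_ineqs \<tau> E. a \<bullet> x + b \<le> 0}"
proof (intro set_eqI iffI)
  fix x assume x: "x \<in> arr_cell \<tau> E"
  then have xT: "x \<in> \<Theta> \<tau>" unfolding arr_cell_def by auto
  show "x \<in> {x. \<forall>(a,b)\<in>arr_cell_ineqs \<tau> E. a \<bullet> x + b \<le> 0}"
    using x ThetaD[OF xT] sum_Vf[OF xT]
    unfolding arr_cell_ineqs_def arr_cell_def by (auto simp: inner_axis' Vf_ind_inner)
next
  fix x assume x: "x \<in> {x. \<forall>(a,b)\<in>arr_cell_ineqs \<tau> E. a \<bullet> x + b \<le> 0}"
  have memb: "\<And>a b. (a,b) \<in> arr_cell_ineqs \<tau> E \<Longrightarrow> a \<bullet> x + b \<le> 0" using x by auto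
  have 1: "\<And>j. 0 \<le> x$j"
  proof -
    fix j
    have "(- axis j 1, 0) \<in> arr_cell_ineqs \<tau> E" unfolding arr_cell_ineqs_def by auto
    from memb[OF this] show "0 \<le> x$j" by (simp add: inner_axis')
  qed
  have 2: "\<And>j. j \<notin> zeta \<tau> \<Longrightarrow> x$j = 0"
  proof -
    fix j assume j: "j \<notin> zeta \<tau>"
    have "(axis j 1, 0) \<in> arr_cell_ineqs \<tau> E" unfolding arr_cell_ineqs_def using j by auto
    from memb[OF this] have "x$j \<le> 0" by (simp add: inner_axis')
    then show "x$j = 0" using 1[of j] by simp
  qed
  have "(Vf_ind, -1) \<in> arr_cell_ineqs \<tau> E" "(-Vf_ind, 1) \<in> arr_cell_ineqs \<tau> E" unfolding arr_cell_ineqs_def by auto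
  from memb[OF this(1)] memb[OF this(2)] have 3: "(\<Sum>j\<in>Vf. x$j) = 1" by (simp add: Vf_ind_inner)
  have "x \<in> \<Theta> \<tau>" using 1 2 3 by (intro ThetaI)
  moreover have "\<forall>m\<in>E. real_vec m \<bullet> x \<le> 0"
  proof
    fix m assume "m \<in> E"
    then have "(real_vec m, 0) \<in> arr_cell_ineqs \<tau> E" unfolding arr_cell_ineqs_def by auto
    from memb[OF this] show "real_vec m \<bullet> x \<le> 0" by simp
  qed
  ultimately show "x \<in> arr_cell \<tau> E" unfolding arr_cell_def by auto
qed

lemma convex_arr_cell: "convex (arr_cell \<tau> E)"
  unfolding arr_cell_eq_ineqs by (rule convex_ineqs_le_zero)

lemma sign_pattern_finite: "sign_pattern E \<Longrightarrow> finite E"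
  unfolding sign_pattern_def using finite_arr_normals finite_subset by blast

lemma arr_cell_tight_ineq:
  assumes E: "sign_pattern E" and QC: "Q \<subseteq> arr_cell \<tau> E"
    and x: "x \<in> arr_cell \<tau> {m \<in> arr_normals. \<forall>y\<in>Q. real_vec m \<bullet> y \<le> 0}"
    and ab: "(a, b) \<in> arr_cell_ineqs \<tau> E" and eq: "\<forall>y\<in>Q. a \<bullet> y + b = 0"
  shows "a \<bullet> x + b = 0"
proof -
  define E' where "E' = {m \<in> arr_normals. \<forall>y\<in>Q. real_vec m \<bullet> y \<le> 0}"
  have xT: "x \<in> \<Theta> \<tau>" and xE': "\<forall>m\<in>E'. real_vec m \<bullet> x \<le> 0" using x unfolding arr_cell_def E'_def by auto
  have "E \<subseteq> E'" using QC E unfolding E'_def arr_cell_def sign_pattern_def by auto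
  have case1: "a \<bullet> x + b = 0" if "a = - axis j 1" "b = 0" for j
  proof -
    have "axis j 1 \<in> E'" unfolding E'_def using eq that arr_normals_axis by (auto simp: real_vec_axis inner_axis')
    then have "x$j \<le> 0" using xE' by (auto simp: real_vec_axis)
    then show ?thesis using ThetaD(2)[OF xT, of j] that by (simp add: inner_axis')
  qed
  have case2: "a \<bullet> x + b = 0" if "a = axis j 1" "b = 0" "j \<notin> zeta \<tau>" for j
    using that ThetaD(1)[OF xT] by (simp add: inner_axis')
  have case3: "a \<bullet> x + b = 0" if "a = Vf_ind \<and> b = -1 \<or> a = - Vf_ind \<and> b = 1"
    using that sum_Vf[OF xT] by (auto simp: Vf_ind_inner)
  have case4: "a \<bullet> x + b = 0" if "a = real_vec m" "b = 0" "m \<in> E" for m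
  proof -
    have "- m \<in> arr_normals" using arr_normals_neg that(3) E unfolding sign_pattern_def by auto
    then have "- m \<in> E'" unfolding E'_def using eq that by (auto simp: real_vec_neg)
    then have "real_vec (-m) \<bullet> x \<le> 0" using xE' by auto
    moreover have "real_vec m \<bullet> x \<le> 0" using xE' \<open>E \<subseteq> E'\<close> that(3) by auto
    ultimately show ?thesis using that by (simp add: real_vec_neg)
  qed
  show ?thesis using ab unfolding arr_cell_ineqs_def using case1 case2 case3 case4 by blast
qed

lemma arr_cell_face:
  assumes E: "sign_pattern E" and Q: "Q face_of arr_cell \<tau> E"
  shows "Q \<in> arr_cells \<tau>"
proof (cases "Q = {}")
  case True then show ?thesis unfolding arr_cells_def by auto
next
  case False
  \<comment> \<open>\<open>Q\<close> is the cell of the sign pattern of all normals whose inequality holds on \<open>Q\<close>\<close>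
  define E' where "E' = {m \<in> arr_normals. \<forall>y\<in>Q. real_vec m \<bullet> y \<le> 0}"
  have QC: "Q \<subseteq> arr_cell \<tau> E" using Q face_of_imp_subset by blast
  have EE': "E \<subseteq> E'" using QC E unfolding E'_def arr_cell_def sign_pattern_def by auto
  have "sign_pattern E'" using E EE' unfolding sign_pattern_def E'_def by blast
  moreover have "Q = arr_cell \<tau> E'"
  proof
    show "Q \<subseteq> arr_cell \<tau> E'" using QC unfolding arr_cell_def E'_def by auto
    show "arr_cell \<tau> E' \<subseteq> Q"
    proof
      fix x assume x: "x \<in> arr_cell \<tau> E'"
      have "x \<in> arr_cell \<tau> E" using x EE' unfolding arr_cell_def by auto
      then show "x \<in> Q"
        using mem_face_of_ineqs[where K="arr_cell_ineqs \<tau> E" and Q=Q and x=x]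
          finite_arr_cell_ineqs[OF sign_pattern_finite[OF E]] Q False
          arr_cell_tight_ineq[OF E QC x[unfolded E'_def]] unfolding arr_cell_eq_ineqs by blast
    qed
  qed
  ultimately show ?thesis unfolding arr_cells_def by auto
qed

lemma arr_cell_Int_face_of:
  assumes E: "sign_pattern E" and E': "sign_pattern E'"
  shows "(arr_cell \<tau> E \<inter> arr_cell \<tau> E') face_of arr_cell \<tau> E"
proof -
  define D where "D = E' - E"
  have eq: "arr_cell \<tau> E \<inter> arr_cell \<tau> E' = arr_cell \<tau> E \<inter> {x. \<forall>m\<in>D. real_vec m \<bullet> x = 0}"
  proof (intro set_eqI iffI)
    fix x assume x: "x \<in> arr_cell \<tau> E \<inter> arr_cell \<tau> E'"
    have "\<forall>m\<in>D. real_vec m \<bullet> x = 0"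
    proof
      fix m assume m: "m \<in> D"
      then have "real_vec m \<bullet> x \<le> 0" using x unfolding D_def arr_cell_def by auto
      moreover have "- m \<in> E" using m E E' unfolding D_def sign_pattern_def by auto
      then have "real_vec (-m) \<bullet> x \<le> 0" using x unfolding arr_cell_def by auto
      ultimately show "real_vec m \<bullet> x = 0" by (simp add: real_vec_neg)
    qed
    then show "x \<in> arr_cell \<tau> E \<inter> {x. \<forall>m\<in>D. real_vec m \<bullet> x = 0}" using x by auto
  next
    fix x assume x: "x \<in> arr_cell \<tau> E \<inter> {x. \<forall>m\<in>D. real_vec m \<bullet> x = 0}"
    then show "x \<in> arr_cell \<tau> E \<inter> arr_cell \<tau> E'" unfolding arr_cell_def D_def by force
  qed
  have "arr_cell \<tau> E \<inter> {x. \<forall>m\<in>D. real_vec m \<bullet> x = 0} face_of arr_cell \<tau> E"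
  proof (rule face_of_Int_zero_ineqs[OF convex_arr_cell])
    show "finite D" using sign_pattern_finite[OF E'] unfolding D_def by simp
    fix d x assume d: "d \<in> D" and x: "x \<in> arr_cell \<tau> E"
    have "- d \<in> E" using d E E' unfolding D_def sign_pattern_def by auto
    then have "real_vec (-d) \<bullet> x \<le> 0" using x unfolding arr_cell_def by auto
    then show "0 \<le> real_vec d \<bullet> x" by (simp add: real_vec_neg)
  qed
  then show ?thesis using eq by simp
qed

lemma arr_cells_Int:
  assumes "P \<in> arr_cells \<tau>" "Q \<in> arr_cells \<tau>"
  shows "(P \<inter> Q) face_of P \<and> (P \<inter> Q) face_of Q"
proof (cases "P = {} \<or> Q = {}")
  case True then show ?thesis by auto
next
  case False
  then obtain E E' where "sign_pattern E" "sign_pattern E'" "P = arr_cell \<tau> E" "Q = arr_cell \<tau> E'"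
    using assms unfolding arr_cells_def by auto
  then show ?thesis using arr_cell_Int_face_of[of E E' \<tau>] arr_cell_Int_face_of[of E' E \<tau>] by (simp add: Int_commute)
qed

lemma arr_cells_face: assumes "P \<in> arr_cells \<tau>" "Q face_of P" shows "Q \<in> arr_cells \<tau>"
proof (cases "P = {}")
  case True
  then have "Q = {}" using assms(2) face_of_imp_subset by blast
  then show ?thesis unfolding arr_cells_def by auto
next
  case False
  then obtain E where "sign_pattern E" "P = arr_cell \<tau> E" using assms unfolding arr_cells_def by auto
  then show ?thesis using arr_cell_face assms(2) by auto
qed

lemma sum_support_eq_inner:
  assumes "\<And>j. j \<notin> S \<Longrightarrow> x$j = 0"
  shows "(\<Sum>j\<in>S. real_of_int (m$j) * x$j) = real_vec m \<bullet> x"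
  unfolding real_vec_inner by (rule sum_support_UNIV[OF assms])

lemma int_Q_polyhedron_real_vec:
  fixes P :: "(real^'v) set"
  assumes "finite H"
    and P: "\<And>x. x \<in> P \<longleftrightarrow> (\<forall>j. j \<notin> S \<longrightarrow> x$j = 0) \<and> (\<forall>(m,g)\<in>H. 0 \<le> real_vec m \<bullet> x + of_rat g)"
  shows "int_Q_polyhedron S P"
proof -
  have "x \<in> P \<longleftrightarrow> (\<forall>j. j \<notin> S \<longrightarrow> x$j = 0) \<and> (\<forall>(m,g)\<in>H. 0 \<le> (\<Sum>j\<in>S. of_int (m$j) * x$j) + of_rat g)"
    for x :: "real^'v"
  proof (cases "\<forall>j. j \<notin> S \<longrightarrow> x$j = 0")
    case True
    then have "(\<Sum>j\<in>S. of_int (m$j) * x$j) = real_vec m \<bullet> x" for m by (intro sum_support_eq_inner) auto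
    then show ?thesis using P[of x] True by simp
  qed (use P in auto)
  then have "P = {x. (\<forall>j. j \<notin> S \<longrightarrow> x$j = 0) \<and> (\<forall>(m,g)\<in>H. 0 \<le> (\<Sum>j\<in>S. of_int (m$j) * x$j) + of_rat g)}"
    by blast
  then show ?thesis unfolding int_Q_polyhedron_def using assms(1) by blast
qed

lemma arr_cell_int_Q_polyhedron:
  assumes "sign_pattern E" shows "int_Q_polyhedron (zeta \<tau>) (arr_cell \<tau> E)"
proof (rule int_Q_polyhedron_real_vec)
  define ivf :: "int^'v" where "ivf = (\<chi> j. if j \<in> Vf then 1 else 0)"
  have rvivf: "real_vec ivf = Vf_ind" unfolding real_vec_def ivf_def Vf_ind_def by (simp add: vec_eq_iff)
  define H :: "('v piece) set" where "H = (\<lambda>j. (axis j 1, 0)) ` UNIV \<union> {(ivf, -1), (-ivf, 1)} \<union> (\<lambda>m. (-m, 0)) ` E"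
  show "finite H" using sign_pattern_finite[OF assms] unfolding H_def by simp
  fix x :: "real^'v"
  have "(\<forall>(m,g)\<in>H. 0 \<le> real_vec m \<bullet> x + of_rat g) \<longleftrightarrow>
      (\<forall>j. 0 \<le> real_vec (axis j 1) \<bullet> x) \<and> 0 \<le> real_vec ivf \<bullet> x - 1 \<and> 0 \<le> real_vec (-ivf) \<bullet> x + 1 \<and>
      (\<forall>m\<in>E. 0 \<le> real_vec (-m) \<bullet> x)"
    unfolding H_def by (simp add: ball_Un) blast
  also have "\<dots> \<longleftrightarrow> (\<forall>j. 0 \<le> x$j) \<and> (\<Sum>j\<in>Vf. x$j) = 1 \<and> (\<forall>m\<in>E. real_vec m \<bullet> x \<le> 0)"
    by (auto simp: real_vec_axis real_vec_neg rvivf Vf_ind_inner)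
  finally have H: "(\<forall>(m,g)\<in>H. 0 \<le> real_vec m \<bullet> x + of_rat g) \<longleftrightarrow>
      (\<forall>j. 0 \<le> x$j) \<and> (\<Sum>j\<in>Vf. x$j) = 1 \<and> (\<forall>m\<in>E. real_vec m \<bullet> x \<le> 0)" .
  show "x \<in> arr_cell \<tau> E \<longleftrightarrow> (\<forall>j. j \<notin> zeta \<tau> \<longrightarrow> x$j = 0) \<and> (\<forall>(m,g)\<in>H. 0 \<le> real_vec m \<bullet> x + of_rat g)"
    unfolding arr_cell_def H using ThetaI[of \<tau> x] ThetaD[of x \<tau>] sum_Vf[of x \<tau>] by blast
qed

lemma int_Q_polyhedron_empty: "int_Q_polyhedron (S::'v set) {}"
proof -
  have "{} = {x::real^'v. (\<forall>j. j \<notin> S \<longrightarrow> x$j = 0) \<and>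
                (\<forall>(m,g)\<in>{(0::int^'v, -1::rat)}. 0 \<le> (\<Sum>j\<in>S. of_int (m$j) * x$j) + of_rat g)}"
    by auto
  then show ?thesis unfolding int_Q_polyhedron_def by blast
qed

lemma arr_cells_int_Q_polyhedron: "P \<in> arr_cells \<tau> \<Longrightarrow> int_Q_polyhedron (zeta \<tau>) P"
  unfolding arr_cells_def using arr_cell_int_Q_polyhedron int_Q_polyhedron_empty by auto

lemma finite_arr_cells: "finite (arr_cells \<tau>)"
proof -
  have "arr_cells \<tau> \<subseteq> (arr_cell \<tau>) ` Pow arr_normals \<union> {{}}" unfolding arr_cells_def sign_pattern_def by auto
  then show ?thesis using finite_arr_normals by (meson finite_Un finite_Pow_iff finite_imageI finite.emptyI finite_insert finite_subset)
qed

lemma Union_arr_cells: "\<Union> (arr_cells \<tau>) = \<Theta> \<tau>"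
proof
  show "\<Union> (arr_cells \<tau>) \<subseteq> \<Theta> \<tau>" unfolding arr_cells_def arr_cell_def by auto
  show "\<Theta> \<tau> \<subseteq> \<Union> (arr_cells \<tau>)"
  proof
    fix x assume x: "x \<in> \<Theta> \<tau>"
    define E where "E = {m\<in>arr_normals. real_vec m \<bullet> x \<le> 0}"
    have "sign_pattern E" unfolding sign_pattern_def E_def using arr_normals_neg by (auto simp: real_vec_neg)
    moreover have "x \<in> arr_cell \<tau> E" using x unfolding arr_cell_def E_def by auto
    ultimately show "x \<in> \<Union> (arr_cells \<tau>)" unfolding arr_cells_def by blast
  qed
qed

lemma arr_cells_subdivision: "poly_subdivision (zeta \<tau>) (\<Theta> \<tau>) (arr_cells \<tau>)"
  unfolding poly_subdivision_def using finite_arr_cells arr_cells_int_Q_polyhedron Union_arr_cells arr_cells_face arr_cells_Int by blast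

lemma arr_cell_of_face:
  assumes "\<sigma> \<le> \<tau>" "sign_pattern E"
  shows "\<exists>E'. sign_pattern E' \<and> arr_cell \<tau> E' = arr_cell \<sigma> E"
proof -
  define E' where "E' = E \<union> (\<lambda>j. axis j 1) ` (- zeta \<sigma>)"
  have "sign_pattern E'" using assms(2) arr_normals_axis unfolding sign_pattern_def E'_def by auto
  moreover have "arr_cell \<tau> E' = arr_cell \<sigma> E"
  proof (intro set_eqI iffI)
    fix x assume x: "x \<in> arr_cell \<tau> E'"
    then have xT: "x \<in> \<Theta> \<tau>" unfolding arr_cell_def by auto
    have "x$j = 0" if "j \<notin> zeta \<sigma>" for j
    proof -
      have "real_vec (axis j 1) \<bullet> x \<le> 0" using x that unfolding arr_cell_def E'_def by auto
      then show "x$j = 0" using ThetaD(2)[OF xT, of j] by (simp add: real_vec_axis)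
    qed
    then have "x \<in> \<Theta> \<sigma>" using ThetaD(2)[OF xT] sum_Vf[OF xT] by (intro ThetaI)
    then show "x \<in> arr_cell \<sigma> E" using x unfolding arr_cell_def E'_def by auto
  next
    fix x assume x: "x \<in> arr_cell \<sigma> E"
    then have xS: "x \<in> \<Theta> \<sigma>" unfolding arr_cell_def by auto
    then have "x \<in> \<Theta> \<tau>" using Theta_mono[OF assms(1)] by auto
    moreover have "\<forall>m\<in>E'. real_vec m \<bullet> x \<le> 0"
      using x ThetaD(1)[OF xS] unfolding arr_cell_def E'_def by (auto simp: real_vec_axis)
    ultimately show "x \<in> arr_cell \<tau> E'" unfolding arr_cell_def by auto
  qed
  ultimately show ?thesis by blast
qed

lemma arr_cells_restrict:
  assumes "\<sigma> \<le> \<tau>"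
  shows "arr_cells \<sigma> = {P \<in> arr_cells \<tau>. P \<subseteq> \<Theta> \<sigma>}"
proof
  show "arr_cells \<sigma> \<subseteq> {P \<in> arr_cells \<tau>. P \<subseteq> \<Theta> \<sigma>}"
  proof
    fix P assume P: "P \<in> arr_cells \<sigma>"
    then have "P \<subseteq> \<Theta> \<sigma>" unfolding arr_cells_def arr_cell_def by auto
    moreover have "P \<in> arr_cells \<tau>"
      using P arr_cell_of_face[OF assms] unfolding arr_cells_def by fastforce
    ultimately show "P \<in> {P \<in> arr_cells \<tau>. P \<subseteq> \<Theta> \<sigma>}" by blast
  qed
  show "{P \<in> arr_cells \<tau>. P \<subseteq> \<Theta> \<sigma>} \<subseteq> arr_cells \<sigma>"
  proof
    fix P assume P: "P \<in> {P \<in> arr_cells \<tau>. P \<subseteq> \<Theta> \<sigma>}"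
    show "P \<in> arr_cells \<sigma>"
    proof (cases "P = {}")
      case False
      then obtain E where E: "sign_pattern E" "P = arr_cell \<tau> E" using P unfolding arr_cells_def by auto
      have "P = arr_cell \<sigma> E" using P E(2) Theta_mono[OF assms] unfolding arr_cell_def by auto
      then show ?thesis using E(1) unfolding arr_cells_def by auto
    qed (simp add: arr_cells_def)
  qed
qed

lemma arr_cell_min_coord:
  assumes E: "sign_pattern E" and Z: "finite Z" "Z \<noteq> {}"
  shows "\<exists>j0\<in>Z. \<forall>j\<in>Z. \<forall>x\<in>arr_cell \<tau> E. x$j0 \<le> x$j"
proof -
  define R where "R i j \<longleftrightarrow> (\<forall>x\<in>arr_cell \<tau> E. x$i \<le> x$j)" for i j
  have "R i j \<or> R j i" for i j
  proof -
    have "axis i 1 - axis j 1 \<in> E \<or> - (axis i 1 - axis j 1) \<in> E"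
      using E arr_normals_diff unfolding sign_pattern_def by blast
    then show ?thesis
      unfolding R_def arr_cell_def by (auto simp: real_vec_neg real_vec_diff_axis)
  qed
  moreover have "R i j \<Longrightarrow> R j k \<Longrightarrow> R i k" "R i i" for i j k unfolding R_def by (auto intro: order_trans)
  ultimately show ?thesis using finite_total_preorder_min[OF Z, of R] unfolding R_def by blast
qed

lemma face_min_affine_on_arr_cells:
  assumes "zeta \<rho> \<noteq> {}" "P \<in> arr_cells \<tau>"
  shows "int_Q_affine_on (zeta \<tau>) P (face_min \<rho> \<tau>)"
proof (cases "P = {} \<or> \<not> \<rho> \<le> \<tau>")
  case True
  then have "\<forall>x\<in>P. face_min \<rho> \<tau> x = (\<Sum>j\<in>zeta \<tau>. of_int ((0::int^'v)$j) * x$j) + of_rat 0"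
    unfolding face_min_def by auto
  then show ?thesis unfolding int_Q_affine_on_def by blast
next
  case False
  then have rt: "\<rho> \<le> \<tau>" and "P \<noteq> {}" by auto
  then obtain E where E: "sign_pattern E" "P = arr_cell \<tau> E" using assms(2) unfolding arr_cells_def by auto
  obtain j0 where j0: "j0 \<in> zeta \<rho>" "\<And>j x. j \<in> zeta \<rho> \<Longrightarrow> x \<in> P \<Longrightarrow> x$j0 \<le> x$j"
    using arr_cell_min_coord[OF E(1) finite assms(1)] E(2) by blast
  have j0t: "j0 \<in> zeta \<tau>" using j0(1) zeta_mono[OF rt] by auto
  have "face_min \<rho> \<tau> x = (\<Sum>j\<in>zeta \<tau>. of_int ((axis j0 1 :: int^'v)$j) * x$j) + of_rat 0" if x: "x \<in> P" for x
  proof -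
    have "face_min \<rho> \<tau> x = x$j0" unfolding face_min_def using rt j0 x by (auto intro!: Min_eqI)
    moreover have "(\<Sum>j\<in>zeta \<tau>. of_int ((axis j0 1 :: int^'v)$j) * x$j) = (\<Sum>j\<in>zeta \<tau>. if j = j0 then x$j else 0)"
      by (rule sum.cong) (auto simp: axis_def)
    ultimately show ?thesis using j0t by simp
  qed
  then show ?thesis unfolding int_Q_affine_on_def by blast
qed

end

lemma slope_at_infinity_affine:
  assumes aff: "\<And>t. t \<ge> T \<Longrightarrow> g (p + t *\<^sub>R w) = a + t * b"
  shows "slope_at_infinity g p w b"
  unfolding slope_at_infinity_def
  using eventually_gt_at_top[of T]
proof (rule eventually_mono)
  fix t assume t: "T < t"
  have "((\<lambda>t. a + t * b) has_real_derivative b) (at t)" by (auto intro!: derivative_eq_intros)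
  then show "((\<lambda>t. g (p + t *\<^sub>R w)) has_real_derivative b) (at t)"
    by (rule has_field_derivative_transform_within_open[where S="{T<..}"]) (use t aff in auto)
qed

lemma slope_at_infinity_affine_unique:
  assumes aff: "\<And>t. t \<ge> T \<Longrightarrow> g (p + t *\<^sub>R w) = a + t * b"
    and sl: "slope_at_infinity g p w s"
  shows "s = b"
proof -
  have "\<forall>\<^sub>F t in at_top. ((\<lambda>t. g (p + t *\<^sub>R w)) has_real_derivative s) (at t)"
    using sl unfolding slope_at_infinity_def .
  moreover have "\<forall>\<^sub>F t in at_top. T < t" by (rule eventually_gt_at_top)
  ultimately have "\<forall>\<^sub>F t in at_top. ((\<lambda>t. g (p + t *\<^sub>R w)) has_real_derivative s) (at t) \<and> T < t"
    by (rule eventually_conj)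
  then obtain t where t: "((\<lambda>t. g (p + t *\<^sub>R w)) has_real_derivative s) (at t)" "T < t"
    using eventually_happens'[OF trivial_limit_at_top_linorder] by blast
  have "((\<lambda>t. a + t * b) has_real_derivative b) (at t)"
    by (auto intro!: derivative_eq_intros)
  then have "((\<lambda>t. g (p + t *\<^sub>R w)) has_real_derivative b) (at t)"
    by (rule has_field_derivative_transform_within_open[where S="{T<..}"]) (use t(2) aff in auto)
  then show ?thesis using t(1) DERIV_unique by blast
qed

context polyhedral_complex begin

lemma face_min_slope:
  assumes z: "zeta \<rho> \<noteq> {}" and sl: "slope_at_infinity (face_min \<rho> \<tau>) p w s"
  shows "s = (if \<rho> \<le> \<tau> then Min ((\<lambda>j. w$j) ` zeta \<rho>) else 0)"
proof (cases "\<rho> \<le> \<tau>")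
  case True
  obtain j0 where j0: "j0 \<in> zeta \<rho>" "w$j0 = Min ((\<lambda>j. w$j) ` zeta \<rho>)"
    "\<forall>\<^sub>F t in at_top. \<forall>j\<in>zeta \<rho>. p$j0 + t * w$j0 \<le> p$j + t * w$j"
    using eventually_min_affine_at_top[OF finite z, of "\<lambda>j. w$j" "\<lambda>j. p$j"] by blast
  then obtain T where T: "\<And>t. t \<ge> T \<Longrightarrow> \<forall>j\<in>zeta \<rho>. p$j0 + t * w$j0 \<le> p$j + t * w$j"
    unfolding eventually_at_top_linorder by blast
  have "\<And>t. t \<ge> T \<Longrightarrow> face_min \<rho> \<tau> (p + t *\<^sub>R w) = p$j0 + t * w$j0"
    unfolding face_min_def using True T j0(1) by (auto intro!: Min_eqI)
  from slope_at_infinity_affine_unique[OF this sl] show ?thesis using True j0(2) by simp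
next
  case False
  have "\<And>t. t \<ge> 0 \<Longrightarrow> face_min \<rho> \<tau> (p + t *\<^sub>R w) = 0 + t * 0" unfolding face_min_def using False by simp
  from slope_at_infinity_affine_unique[OF this sl] show ?thesis using False by simp
qed

lemma face_min_slopes_agree:
  assumes z: "zeta \<rho> \<noteq> {}"
    and w: "rec_dir Vinf zeta \<tau> w" "rec_dir Vinf zeta \<tau>' w" and sf: "same_fan_dir Vf zeta \<tau> \<tau>' w"
    and s: "slope_at_infinity (face_min \<rho> \<tau>) p w s" and s': "slope_at_infinity (face_min \<rho> \<tau>') p' w s'"
  shows "s = s'"
proof -
  have s1: "s = (if \<rho> \<le> \<tau> then Min ((\<lambda>j. w$j) ` zeta \<rho>) else 0)" by (rule face_min_slope[OF z s])
  have s2: "s' = (if \<rho> \<le> \<tau>' then Min ((\<lambda>j. w$j) ` zeta \<rho>) else 0)" by (rule face_min_slope[OF z s'])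
  obtain \<kappa> where k: "\<kappa> \<le> \<tau>" "\<kappa> \<le> \<tau>'" "\<And>j. w$j \<noteq> 0 \<Longrightarrow> j \<in> zeta \<kappa>"
    using sf unfolding same_fan_dir_def by blast
  have wnn: "\<And>j. 0 \<le> w$j" using w(1) unfolding rec_dir_def by auto
  \<comment> \<open>a positive slope forces \<open>zeta \<rho> \<subseteq> zeta \<kappa>\<close>, hence \<open>\<rho> \<le> \<kappa>\<close>\<close>
  have key: "Min ((\<lambda>j. w$j) ` zeta \<rho>) = 0" if "\<rho> \<le> a" "\<not> \<rho> \<le> b" "\<kappa> \<le> a" "\<kappa> \<le> b" for a b
  proof (rule ccontr)
    assume ne: "Min ((\<lambda>j. w$j) ` zeta \<rho>) \<noteq> 0"
    have "0 \<le> Min ((\<lambda>j. w$j) ` zeta \<rho>)" using z wnn by (simp add: Min_ge_iff)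
    then have pos: "0 < Min ((\<lambda>j. w$j) ` zeta \<rho>)" using ne by simp
    have "zeta \<rho> \<subseteq> zeta \<kappa>"
    proof
      fix j assume j: "j \<in> zeta \<rho>"
      have "Min ((\<lambda>j. w$j) ` zeta \<rho>) \<le> w$j" by (rule Min_le) (use j in auto)
      then show "j \<in> zeta \<kappa>" using pos k(3) by force
    qed
    then have "\<rho> \<le> \<kappa>" using le_iff_zeta_subset[OF that(1) that(3)] by simp
    then show False using that(2,4) order_trans by blast
  qed
  show ?thesis
  proof (cases "\<rho> \<le> \<tau>"; cases "\<rho> \<le> \<tau>'")
    assume "\<rho> \<le> \<tau>" "\<rho> \<le> \<tau>'" then show ?thesis using s1 s2 by simp
  next
    assume "\<rho> \<le> \<tau>" "\<not> \<rho> \<le> \<tau>'" then show ?thesis using s1 s2 key[of \<tau> \<tau>'] k by simp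
  next
    assume "\<not> \<rho> \<le> \<tau>" "\<rho> \<le> \<tau>'" then show ?thesis using s1 s2 key[of \<tau>' \<tau>] k by simp
  next
    assume "\<not> \<rho> \<le> \<tau>" "\<not> \<rho> \<le> \<tau>'" then show ?thesis using s1 s2 by simp
  qed
qed

lemma face_min_rat_fun:
  assumes z: "zeta \<rho> \<noteq> {}"
  shows "rat_fun Vf Vinf zeta (face_min \<rho>)"
  unfolding rat_fun_def
proof (intro conjI)
  show "\<forall>\<sigma>\<in>\<Delta>. \<forall>\<tau>\<in>\<Delta>. \<sigma> \<le> \<tau> \<longrightarrow> (\<forall>u\<in>\<Theta> \<sigma>. face_min \<rho> \<sigma> u = face_min \<rho> \<tau> u)"
    using face_min_restrict[OF _ _ z] by blast
  show "\<forall>\<tau>\<in>\<Delta>. continuous_on (\<Theta> \<tau>) (face_min \<rho> \<tau>)" using continuous_on_face_min[OF z] by blast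
  show "\<exists>C. (\<forall>\<tau>\<in>\<Delta>. poly_subdivision (zeta \<tau>) (\<Theta> \<tau>) (C \<tau>) \<and>
            (\<forall>P\<in>C \<tau>. int_Q_affine_on (zeta \<tau>) P (face_min \<rho> \<tau>))) \<and>
        (\<forall>\<sigma>\<in>\<Delta>. \<forall>\<tau>\<in>\<Delta>. \<sigma> \<le> \<tau> \<longrightarrow> C \<sigma> = {P\<in>C \<tau>. P \<subseteq> \<Theta> \<sigma>})"
    by (rule exI[of _ arr_cells]) (use arr_cells_subdivision face_min_affine_on_arr_cells[OF z] arr_cells_restrict in blast)
  show "\<forall>\<tau>\<in>\<Delta>. \<forall>\<tau>'\<in>\<Delta>. \<forall>p\<in>\<Theta> \<tau>. \<forall>p'\<in>\<Theta> \<tau>'. \<forall>w s s'.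
        rec_dir Vinf zeta \<tau> w \<and> rec_dir Vinf zeta \<tau>' w \<and> same_fan_dir Vf zeta \<tau> \<tau>' w \<and>
        slope_at_infinity (face_min \<rho> \<tau>) p w s \<and> slope_at_infinity (face_min \<rho> \<tau>') p' w s' \<longrightarrow> s = s'"
    using face_min_slopes_agree[OF z] by blast
qed

lemma face_min_in_RatD:
  assumes z: "zeta \<rho> \<noteq> {}"
  shows "(\<lambda>\<eta> u. ereal (face_min \<rho> \<eta> u)) \<in> RatD Vf Vinf zeta"
  unfolding RatD_def using face_min_rat_fun[OF z] by blast

end

section \<open>Piecewise affine functions: the max-min form on a cell\<close>

lemma finite_affine_crossings:
  fixes al be :: "'i \<Rightarrow> real"
  assumes "finite I"
  shows "finite {t. \<exists>i\<in>I. \<exists>j\<in>I. (al i, be i) \<noteq> (al j, be j) \<and> al i + be i * t = al j + be j * t}"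
proof -
  have "{t. \<exists>i\<in>I. \<exists>j\<in>I. (al i, be i) \<noteq> (al j, be j) \<and> al i + be i * t = al j + be j * t}
        \<subseteq> (\<lambda>(i,j). (al j - al i) / (be i - be j)) ` (I \<times> I)"
  proof
    fix t assume "t \<in> {t. \<exists>i\<in>I. \<exists>j\<in>I. (al i, be i) \<noteq> (al j, be j) \<and> al i + be i * t = al j + be j * t}"
    then obtain i j where ij: "i \<in> I" "j \<in> I" "(al i, be i) \<noteq> (al j, be j)" "al i + be i * t = al j + be j * t" by auto
    have "be i \<noteq> be j" using ij(3,4) by auto
    then have "t = (al j - al i) / (be i - be j)" using ij(4) by (simp add: field_simps)
    then show "t \<in> (\<lambda>(i,j). (al j - al i) / (be i - be j)) ` (I \<times> I)" using ij(1,2) by force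
  qed
  then show ?thesis using assms finite_subset by blast
qed

lemma finite_gap_right:
  fixes X :: "real set"
  assumes "finite X" "a < b"
  shows "\<exists>\<delta>>0. a + \<delta> \<le> b \<and> (\<forall>t\<in>X. a < t \<longrightarrow> a + \<delta> < t)"
proof -
  define Y where "Y = insert b {t\<in>X. a < t}"
  have fY: "finite Y" and bY: "b \<in> Y" and XY: "\<And>t. t \<in> X \<Longrightarrow> a < t \<Longrightarrow> t \<in> Y"
    using assms(1) unfolding Y_def by auto
  have m1: "a < Min Y" using fY assms(2) by (subst Min_gr_iff) (auto simp: Y_def)
  have m2: "Min Y \<le> b" and m3: "\<And>t. t \<in> X \<Longrightarrow> a < t \<Longrightarrow> Min Y \<le> t"
    using Min_le[OF fY] bY XY by auto
  show ?thesis
  proof (intro exI[of _ "(Min Y - a) / 2"] conjI ballI impI)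
    show "0 < (Min Y - a) / 2" using m1 by simp
    show "a + (Min Y - a) / 2 \<le> b" using m1 m2 by argo
    show "a + (Min Y - a) / 2 < t" if "t \<in> X" "a < t" for t using m1 m3[OF that] by argo
  qed
qed

lemma pw_affine_connected_single_piece:
  fixes g :: "real \<Rightarrow> real" and al be :: "'i \<Rightarrow> real"
  assumes fI: "finite I" and cg: "continuous_on C g" and C: "closed C" and S: "connected S" "S \<subseteq> C"
    and cov: "\<And>t. t \<in> S \<Longrightarrow> \<exists>i\<in>I. g t = al i + be i * t"
    and no_cross: "\<And>t i j. t \<in> S \<Longrightarrow> i \<in> I \<Longrightarrow> j \<in> I \<Longrightarrow> al i + be i * t = al j + be j * t \<Longrightarrow>
      (al i, be i) = (al j, be j)"
    and k: "k \<in> I" "s \<in> S" "g s = al k + be k * s"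
  shows "S \<subseteq> {t \<in> C. g t - (al k + be k * t) = 0}"
proof -
  define A where "A = {t \<in> C. g t - (al k + be k * t) = 0}"
  define B where "B = (\<Union>j\<in>{j\<in>I. (al j, be j) \<noteq> (al k, be k)}. {t \<in> C. g t - (al j + be j * t) = 0})"
  have cl: "closed {t \<in> C. g t - (al j + be j * t) = 0}" for j
    by (rule continuous_closed_preimage_constant) (auto intro!: continuous_intros cg C)
  have "closed B" unfolding B_def by (rule closed_Union) (use fI cl in auto)
  moreover have "A \<inter> B \<inter> S = {}" using no_cross k(1) unfolding A_def B_def by fastforce
  moreover have "S \<subseteq> A \<union> B"
  proof
    fix t assume t: "t \<in> S"
    obtain i where i: "i \<in> I" "g t = al i + be i * t" using cov[OF t] by blast
    then show "t \<in> A \<union> B" using t S(2) unfolding A_def B_def by (cases "(al i, be i) = (al k, be k)") auto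
  qed
  moreover have "A \<inter> S \<noteq> {}" using k S(2) unfolding A_def by auto
  ultimately show ?thesis using connected_closedD[OF S(1), of A B] cl[of k] unfolding A_def by auto
qed

lemma pw_affine_right_piece:
  fixes g :: "real \<Rightarrow> real" and al be :: "'i \<Rightarrow> real"
  assumes fI: "finite I" and cg: "continuous_on {0..1} g"
    and cov: "\<And>t. t \<in> {0..1} \<Longrightarrow> \<exists>i\<in>I. g t = al i + be i * t"
    and a: "0 \<le> a" "a < 1"
  shows "\<exists>\<delta>>0. a + \<delta> \<le> 1 \<and> (\<exists>i\<in>I. \<forall>s\<in>{a..a+\<delta>}. g s = al i + be i * s)"
proof -
  define X where "X = {t. \<exists>i\<in>I. \<exists>j\<in>I. (al i, be i) \<noteq> (al j, be j) \<and> al i + be i * t = al j + be j * t}"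
  have "finite X" unfolding X_def by (rule finite_affine_crossings[OF fI])
  then obtain \<delta> where dpos: "\<delta> > 0" and d1: "a + \<delta> \<le> 1" and gap: "\<And>t. t \<in> X \<Longrightarrow> a < t \<Longrightarrow> a + \<delta> < t"
    using finite_gap_right[of X a 1] a by blast
  define S where "S = {a<..a+\<delta>}"
  have S01: "S \<subseteq> {0..1}" unfolding S_def using a d1 by auto
  have s0: "a + \<delta> \<in> S" unfolding S_def using dpos by auto
  then obtain i0 where i0: "i0 \<in> I" "g (a + \<delta>) = al i0 + be i0 * (a + \<delta>)" using cov S01 by blast
  have "S \<subseteq> {t \<in> {0..1}. g t - (al i0 + be i0 * t) = 0}"
  proof (rule pw_affine_connected_single_piece[where al=al and be=be and g=g and k=i0 and s="a + \<delta>"])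
    show "connected S" unfolding S_def by (simp add: connected_Ioc)
    show "\<And>t. t \<in> S \<Longrightarrow> \<exists>i\<in>I. g t = al i + be i * t" using cov S01 by blast
    show "(al i, be i) = (al j, be j)" if "t \<in> S" "i \<in> I" "j \<in> I" "al i + be i * t = al j + be j * t" for t i j
      using that gap[of t] unfolding X_def S_def by force
  qed (use fI cg S01 i0 s0 in simp_all)
  then have "closure S \<subseteq> {t \<in> {0..1}. g t - (al i0 + be i0 * t) = 0}"
    by (rule closure_minimal) (rule continuous_closed_preimage_constant; auto intro!: continuous_intros cg)
  then have "\<forall>s\<in>{a..a+\<delta>}. g s = al i0 + be i0 * s" unfolding S_def using dpos by (auto simp: closure_greaterThanAtMost)
  then show ?thesis using dpos d1 i0(1) by blast
qed

lemma Max_affine_convex: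
  fixes al be :: "'i \<Rightarrow> real"
  assumes "finite D" "D \<noteq> {}" "0 \<le> l" "l \<le> 1"
  shows "Max ((\<lambda>i. al i + be i * ((1 - l) * x + l * y)) ` D)
    \<le> (1 - l) * Max ((\<lambda>i. al i + be i * x) ` D) + l * Max ((\<lambda>i. al i + be i * y) ` D)"
proof -
  have "Max ((\<lambda>i. al i + be i * ((1 - l) * x + l * y)) ` D) \<in> (\<lambda>i. al i + be i * ((1 - l) * x + l * y)) ` D"
    using assms(1,2) by simp
  then obtain i where i: "i \<in> D" "Max ((\<lambda>i. al i + be i * ((1 - l) * x + l * y)) ` D) = al i + be i * ((1 - l) * x + l * y)"
    by auto
  have "al i + be i * ((1 - l) * x + l * y) = (1 - l) * (al i + be i * x) + l * (al i + be i * y)"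
    by (simp add: algebra_simps)
  also have "\<dots> \<le> (1 - l) * Max ((\<lambda>i. al i + be i * x) ` D) + l * Max ((\<lambda>i. al i + be i * y) ` D)"
    using assms i(1) by (intro add_mono mult_left_mono) auto
  finally show ?thesis using i(2) by simp
qed

lemma Max_affine_below_line:
  fixes al be :: "'i \<Rightarrow> real"
  assumes D: "finite D" "D \<noteq> {}" and a: "0 \<le> a" "0 < \<delta>"
    and below: "Max ((\<lambda>i. al i + be i * 0) ` D) < c" "Max ((\<lambda>i. al i + be i * (a + \<delta>)) ` D) < c + d * (a + \<delta>)"
  shows "Max ((\<lambda>i. al i + be i * a) ` D) < c + d * a"
proof -
  define l where "l = a / (a + \<delta>)"
  have l: "0 \<le> l" "l \<le> 1" "(1 - l) * 0 + l * (a + \<delta>) = a"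
    unfolding l_def using a by (auto simp: field_simps)
  have "Max ((\<lambda>i. al i + be i * a) ` D)
      \<le> (1 - l) * Max ((\<lambda>i. al i + be i * 0) ` D) + l * Max ((\<lambda>i. al i + be i * (a + \<delta>)) ` D)"
    using Max_affine_convex[OF D l(1,2), of al be 0 "a + \<delta>"] l(3) by simp
  also have "\<dots> < (1 - l) * c + l * (c + d * (a + \<delta>))"
  proof -
    have "(1 - l) * (Max ((\<lambda>i. al i + be i * 0) ` D) - c)
        + l * (Max ((\<lambda>i. al i + be i * (a + \<delta>)) ` D) - (c + d * (a + \<delta>))) < 0"
      using below l by (intro convex_bound_lt) auto
    then show ?thesis by (simp add: right_diff_distrib)
  qed
  also have "\<dots> = c + d * (l * (a + \<delta>))" by (simp add: algebra_simps)
  finally show ?thesis using l(3) by simp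
qed

lemma closed_last_point:
  fixes T :: "real set"
  assumes "closed T" "0 \<in> T" "1 \<notin> T" "T \<subseteq> {0..1}"
  shows "\<exists>a\<in>T. a < 1 \<and> (\<forall>t\<in>T. t \<le> a)"
proof -
  have bdd: "bdd_above T" using bdd_above_Icc[of 0 "1::real"] assms(4) by (rule bdd_above_mono)
  then have "Sup T \<in> T" using assms(1,2) by (intro closed_contains_Sup) auto
  moreover have "Sup T \<le> 1" using \<open>Sup T \<in> T\<close> assms(4) by auto
  moreover have "\<forall>t\<in>T. t \<le> Sup T" using bdd by (simp add: cSup_upper)
  ultimately show ?thesis using assms(3) by (metis order_le_less)
qed

text \<open>The one-dimensional case of Ovchinnikov's max-min representation.\<close>

lemma pw_affine_segment_piece:
  fixes g :: "real \<Rightarrow> real" and al be :: "'i \<Rightarrow> real"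
  assumes fI: "finite I" and cg: "continuous_on {0..1} g"
    and cov: "\<And>t. t \<in> {0..1} \<Longrightarrow> \<exists>i\<in>I. g t = al i + be i * t"
  shows "\<exists>i\<in>I. al i \<le> g 0 \<and> g 1 \<le> al i + be i"
proof (rule ccontr)
  assume contra: "\<not> (\<exists>i\<in>I. al i \<le> g 0 \<and> g 1 \<le> al i + be i)"
  define D where "D = {i\<in>I. al i \<le> g 0}"
  have fD: "finite D" using fI unfolding D_def by simp
  obtain i00 where i00: "i00 \<in> I" "g 0 = al i00 + be i00 * 0" using cov[of 0] by auto
  have Dne: "D \<noteq> {}" using i00 unfolding D_def by auto
  have D1: "\<And>i. i \<in> D \<Longrightarrow> al i + be i < g 1" using contra unfolding D_def by force
  \<comment> \<open>\<open>\<psi>\<close> is the upper envelope of the pieces lying below \<open>g\<close> at \<open>0\<close>; it meets \<open>g\<close> at \<open>0\<close> but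
     lies strictly below it at \<open>1\<close>. Let \<open>a\<close> be the last point where \<open>g \<le> \<psi>\<close>.\<close>
  define \<psi> where "\<psi> t = Max ((\<lambda>i. al i + be i * t) ` D)" for t
  have \<psi>_ge: "\<And>i t. i \<in> D \<Longrightarrow> al i + be i * t \<le> \<psi> t" unfolding \<psi>_def using fD by auto
  have \<psi>_attained: "\<exists>i\<in>D. \<psi> t = al i + be i * t" for t
  proof -
    have "\<psi> t \<in> (\<lambda>i. al i + be i * t) ` D" unfolding \<psi>_def using fD Dne by simp
    then show ?thesis by auto
  qed
  have \<psi>0: "\<psi> 0 = g 0" using \<psi>_attained[of 0] \<psi>_ge[of i00 0] i00 unfolding D_def by force
  have \<psi>1: "\<psi> 1 < g 1" using \<psi>_attained[of 1] D1 by auto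
  define T where "T = \<Union> ((\<lambda>i. {0..1} \<inter> (\<lambda>t. g t - (al i + be i * t)) -` {..0}) ` D)"
  have ci: "closed ({0..1} \<inter> (\<lambda>t. g t - (al i + be i * t)) -` {..0})" for i
    by (rule continuous_closed_preimage) (auto intro!: continuous_intros cg)
  have cT: "closed T" unfolding T_def by (rule closed_Union) (use fD ci in auto)
  have T_iff: "t \<in> T \<longleftrightarrow> t \<in> {0..1} \<and> g t \<le> \<psi> t" for t
  proof -
    obtain i where "i \<in> D" "\<psi> t = al i + be i * t" using \<psi>_attained by blast
    then show ?thesis using \<psi>_ge[of _ t] unfolding T_def by (auto intro: order_trans)
  qed
  have "0 \<in> T" "1 \<notin> T" "T \<subseteq> {0..1}" using T_iff \<psi>0 \<psi>1 by auto
  then obtain a where aT: "a \<in> T" and a1: "a < 1" and a_ge: "\<And>t. t \<in> T \<Longrightarrow> t \<le> a"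
    using closed_last_point[OF cT] by blast
  have a0: "0 \<le> a" using a_ge[OF \<open>0 \<in> T\<close>] .
  obtain \<delta> k where dk: "\<delta> > 0" "a + \<delta> \<le> 1" "k \<in> I" "\<And>s. s \<in> {a..a+\<delta>} \<Longrightarrow> g s = al k + be k * s"
    using pw_affine_right_piece[OF fI cg cov a0 a1] by blast
  have "a + \<delta> \<notin> T" using a_ge[of "a + \<delta>"] dk(1) by linarith
  then have ad: "\<psi> (a + \<delta>) < al k + be k * (a + \<delta>)" using T_iff dk a0 by auto
  then have "k \<notin> D" using \<psi>_ge[of k "a + \<delta>"] by auto
  then have k0: "\<psi> 0 < al k" using dk(3) \<psi>0 unfolding D_def by auto
  have ga: "al k + be k * a \<le> \<psi> a" using aT T_iff dk(4)[of a] dk(1) by auto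
  \<comment> \<open>but \<open>\<psi>\<close> is convex, while the piece \<open>k\<close> dominates it at \<open>0\<close> and at \<open>a + \<delta>\<close>\<close>
  have "\<psi> a < al k + be k * a"
    using Max_affine_below_line[OF fD Dne a0 dk(1)] k0 ad unfolding \<psi>_def by simp
  then show False using ga by simp
qed

definition aff :: "'v::finite piece \<Rightarrow> real^'v \<Rightarrow> real" where
  "aff i x = real_vec (fst i) \<bullet> x + real_of_rat (snd i)"

lemma aff_comb: "aff i ((1 - t) *\<^sub>R x + t *\<^sub>R y) = aff i x + (aff i y - aff i x) * t"
  unfolding aff_def by (simp add: inner_add_right algebra_simps)

lemma aff_ray: "aff i (p + t *\<^sub>R d) = aff i p + t * (real_vec (fst i) \<bullet> d)"
  unfolding aff_def by (simp add: inner_add_right algebra_simps)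

definition max_min :: "'s set \<Rightarrow> ('s \<Rightarrow> 'i set) \<Rightarrow> ('i \<Rightarrow> real) \<Rightarrow> real" where
  "max_min A B h = Max ((\<lambda>a. Min (h ` B a)) ` A)"

locale rat_function = polyhedral_complex Vf Vinf zeta
  for Vf Vinf :: "'v::finite set" and zeta :: "'p::{finite,order} \<Rightarrow> 'v set" +
  fixes f :: "'p \<Rightarrow> real^'v \<Rightarrow> real"
  assumes rat_fun: "rat_fun Vf Vinf zeta f"
begin

lemma f_restrict: "\<sigma> \<in> \<Delta> \<Longrightarrow> \<tau> \<in> \<Delta> \<Longrightarrow> \<sigma> \<le> \<tau> \<Longrightarrow> u \<in> \<Theta> \<sigma> \<Longrightarrow> f \<sigma> u = f \<tau> u"
  using rat_fun[unfolded rat_fun_def, THEN conjunct1] by blast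

lemma continuous_on_f: "\<tau> \<in> \<Delta> \<Longrightarrow> continuous_on (\<Theta> \<tau>) (f \<tau>)"
  using rat_fun[unfolded rat_fun_def, THEN conjunct2, THEN conjunct1] by blast

lemma f_subdivision:
  assumes "\<tau> \<in> \<Delta>"
  obtains C where "poly_subdivision (zeta \<tau>) (\<Theta> \<tau>) C" "\<And>P. P \<in> C \<Longrightarrow> int_Q_affine_on (zeta \<tau>) P (f \<tau>)"
proof -
  obtain C' where C': "\<forall>\<tau>\<in>\<Delta>. poly_subdivision (zeta \<tau>) (\<Theta> \<tau>) (C' \<tau>) \<and>
      (\<forall>P\<in>C' \<tau>. int_Q_affine_on (zeta \<tau>) P (f \<tau>))"
    using rat_fun[unfolded rat_fun_def, THEN conjunct2, THEN conjunct2, THEN conjunct1] by (elim exE conjE)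
  show thesis using that bspec[OF C' assms] by blast
qed

lemma f_slopes_agree:
  "\<tau> \<in> \<Delta> \<Longrightarrow> \<tau>' \<in> \<Delta> \<Longrightarrow> p \<in> \<Theta> \<tau> \<Longrightarrow> p' \<in> \<Theta> \<tau>' \<Longrightarrow>
   rec_dir Vinf zeta \<tau> w \<Longrightarrow> rec_dir Vinf zeta \<tau>' w \<Longrightarrow> same_fan_dir Vf zeta \<tau> \<tau>' w \<Longrightarrow>
   slope_at_infinity (f \<tau>) p w s \<Longrightarrow> slope_at_infinity (f \<tau>') p' w s' \<Longrightarrow> s = s'"
  using rat_fun[unfolded rat_fun_def, THEN conjunct2, THEN conjunct2, THEN conjunct2] by blast

lemma int_Q_affine_on_aff:
  assumes "int_Q_affine_on (zeta \<tau>) P h" "P \<subseteq> \<Theta> \<tau>"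
  shows "\<exists>i. \<forall>x\<in>P. h x = aff i x"
proof -
  obtain m g where mg: "\<forall>x\<in>P. h x = (\<Sum>j\<in>zeta \<tau>. of_int (m $ j) * x$j) + of_rat g"
    using assms(1) unfolding int_Q_affine_on_def by blast
  have "h x = aff (m, g) x" if "x \<in> P" for x
  proof -
    have "x \<in> \<Theta> \<tau>" using assms(2) that by blast
    then have "(\<Sum>j\<in>zeta \<tau>. of_int (m$j) * x$j) = real_vec m \<bullet> x" by (intro sum_support_eq_inner ThetaD(1))
    then show ?thesis using mg that unfolding aff_def by simp
  qed
  then show ?thesis by blast
qed

lemma f_finitely_many_pieces:
  assumes "\<tau> \<in> \<Delta>"
  shows "\<exists>I. finite I \<and> (\<forall>x\<in>\<Theta> \<tau>. \<exists>i\<in>I. f \<tau> x = aff i x)"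
proof -
  obtain C where C: "poly_subdivision (zeta \<tau>) (\<Theta> \<tau>) C" "\<And>P. P \<in> C \<Longrightarrow> int_Q_affine_on (zeta \<tau>) P (f \<tau>)"
    using f_subdivision[OF assms] by blast
  have fC: "finite C" and UC: "\<Union> C = \<Theta> \<tau>" using C(1) unfolding poly_subdivision_def by blast+
  have "\<forall>P\<in>C. \<exists>i. \<forall>x\<in>P. f \<tau> x = aff i x"
    using int_Q_affine_on_aff[OF C(2)] UC by blast
  then obtain h where h: "\<forall>P\<in>C. \<forall>x\<in>P. f \<tau> x = aff (h P) x" by (rule bchoice[THEN exE])
  have "\<forall>x\<in>\<Theta> \<tau>. \<exists>i\<in>h ` C. f \<tau> x = aff i x" using h UC by blast
  then show ?thesis using fC by blast
qed

definition pieces :: "'p \<Rightarrow> 'v piece set" where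
  "pieces \<tau> = (SOME I. finite I \<and> (\<forall>x\<in>\<Theta> \<tau>. \<exists>i\<in>I. f \<tau> x = aff i x))"

lemma pieces:
  assumes "\<tau> \<in> \<Delta>"
  shows "finite (pieces \<tau>)" "\<And>x. x \<in> \<Theta> \<tau> \<Longrightarrow> \<exists>i\<in>pieces \<tau>. f \<tau> x = aff i x"
  using someI_ex[OF f_finitely_many_pieces[OF assms]] unfolding pieces_def by blast+

lemma piece_below_above:
  assumes \<tau>: "\<tau> \<in> \<Delta>" and x: "x \<in> \<Theta> \<tau>" and y: "y \<in> \<Theta> \<tau>"
  shows "\<exists>i\<in>pieces \<tau>. aff i x \<le> f \<tau> x \<and> f \<tau> y \<le> aff i y"
proof -
  define g where "g t = f \<tau> ((1 - t) *\<^sub>R x + t *\<^sub>R y)" for t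
  have seg: "\<And>t. t \<in> {0..1} \<Longrightarrow> (1 - t) *\<^sub>R x + t *\<^sub>R y \<in> \<Theta> \<tau>"
    using convexD[OF convex_Theta x y] by auto
  have c1: "continuous_on {0..1} (\<lambda>t::real. (1 - t) *\<^sub>R x + t *\<^sub>R y)"
    by (intro continuous_intros)
  have c2: "(\<lambda>t::real. (1 - t) *\<^sub>R x + t *\<^sub>R y) ` {0..1} \<subseteq> \<Theta> \<tau>" using seg by blast
  have cg: "continuous_on {0..1} g" unfolding g_def
    by (rule continuous_on_compose2[OF continuous_on_f[OF \<tau>] c1 c2])
  have cov: "\<exists>i\<in>pieces \<tau>. g t = aff i x + (aff i y - aff i x) * t" if t: "t \<in> {0..1}" for t
  proof -
    obtain i where "i \<in> pieces \<tau>" "f \<tau> ((1 - t) *\<^sub>R x + t *\<^sub>R y) = aff i ((1 - t) *\<^sub>R x + t *\<^sub>R y)"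
      using pieces(2)[OF \<tau> seg[OF t]] by blast
    then show ?thesis unfolding g_def aff_comb by blast
  qed
  obtain i where i: "i \<in> pieces \<tau>" "aff i x \<le> g 0" "g 1 \<le> aff i x + (aff i y - aff i x)"
    using pw_affine_segment_piece[OF pieces(1)[OF \<tau>] cg cov] by blast
  then show ?thesis unfolding g_def by auto
qed

definition pieces_above :: "'p \<Rightarrow> real^'v \<Rightarrow> 'v piece set" where
  "pieces_above \<tau> y = {i \<in> pieces \<tau>. f \<tau> y \<le> aff i y}"

definition piece_families :: "'p \<Rightarrow> 'v piece set set" where
  "piece_families \<tau> = pieces_above \<tau> ` \<Theta> \<tau>"

definition max_min_form :: "'p \<Rightarrow> real^'v \<Rightarrow> real" where
  "max_min_form \<tau> x = max_min (piece_families \<tau>) id (\<lambda>i. aff i x)"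

lemma piece_families_props:
  assumes \<tau>: "\<tau> \<in> \<Delta>"
  shows "finite (piece_families \<tau>)" "piece_families \<tau> \<noteq> {}" "\<And>S. S \<in> piece_families \<tau> \<Longrightarrow> finite S \<and> S \<noteq> {} \<and> S \<subseteq> pieces \<tau>"
proof -
  have "piece_families \<tau> \<subseteq> Pow (pieces \<tau>)" unfolding piece_families_def pieces_above_def by auto
  then show "finite (piece_families \<tau>)" using pieces(1)[OF \<tau>] finite_subset by blast
  show "piece_families \<tau> \<noteq> {}" using Theta_nonempty[OF \<tau>] unfolding piece_families_def by auto
  fix S assume "S \<in> piece_families \<tau>"
  then obtain y where y: "y \<in> \<Theta> \<tau>" "S = pieces_above \<tau> y" unfolding piece_families_def by auto
  obtain i where "i \<in> pieces \<tau>" "f \<tau> y = aff i y" using pieces(2)[OF \<tau> y(1)] by blast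
  then have "i \<in> S" using y unfolding pieces_above_def by auto
  moreover have "S \<subseteq> pieces \<tau>" using y unfolding pieces_above_def by auto
  moreover then have "finite S" using pieces(1)[OF \<tau>] by (rule finite_subset)
  ultimately show "finite S \<and> S \<noteq> {} \<and> S \<subseteq> pieces \<tau>" by blast
qed

lemma max_min_form_eq:
  assumes \<tau>: "\<tau> \<in> \<Delta>" and x: "x \<in> \<Theta> \<tau>"
  shows "max_min_form \<tau> x = f \<tau> x"
proof (rule antisym)
  note P = piece_families_props[OF \<tau>]
  show "max_min_form \<tau> x \<le> f \<tau> x"
    unfolding max_min_form_def max_min_def
  proof (subst Max_le_iff)
    show "finite ((\<lambda>a. Min ((\<lambda>i. aff i x) ` id a)) ` piece_families \<tau>)" using P by simp
    show "(\<lambda>a. Min ((\<lambda>i. aff i x) ` id a)) ` piece_families \<tau> \<noteq> {}" using P by simp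
    show "\<forall>a\<in>(\<lambda>a. Min ((\<lambda>i. aff i x) ` id a)) ` piece_families \<tau>. a \<le> f \<tau> x"
    proof
      fix v assume "v \<in> (\<lambda>a. Min ((\<lambda>i. aff i x) ` id a)) ` piece_families \<tau>"
      then obtain y where y: "y \<in> \<Theta> \<tau>" "v = Min ((\<lambda>i. aff i x) ` pieces_above \<tau> y)" unfolding piece_families_def by auto
      obtain i where i: "i \<in> pieces \<tau>" "aff i x \<le> f \<tau> x" "f \<tau> y \<le> aff i y" using piece_below_above[OF \<tau> x y(1)] by blast
      have iS: "i \<in> pieces_above \<tau> y" using i unfolding pieces_above_def by auto
      have "pieces_above \<tau> y \<in> piece_families \<tau>" using y(1) unfolding piece_families_def by auto
      then have "finite (pieces_above \<tau> y)" using P(3) by blast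
      then have "v \<le> aff i x" using y(2) iS by auto
      then show "v \<le> f \<tau> x" using i(2) by simp
    qed
  qed
  show "f \<tau> x \<le> max_min_form \<tau> x"
  proof -
    have S: "pieces_above \<tau> x \<in> piece_families \<tau>" using x unfolding piece_families_def by auto
    then have fS: "finite (pieces_above \<tau> x)" "pieces_above \<tau> x \<noteq> {}" using P(3) by auto
    have "f \<tau> x \<le> Min ((\<lambda>i. aff i x) ` pieces_above \<tau> x)" using fS unfolding pieces_above_def by (subst Min_ge_iff) auto
    also have "\<dots> \<le> max_min_form \<tau> x" unfolding max_min_form_def max_min_def using S P by (intro Max_ge) auto
    finally show ?thesis .
  qed
qed

end

section \<open>Linear functionals on polyhedra\<close>

definition ineq_set :: "('a::real_inner \<times> real) set \<Rightarrow> 'a set" where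
  "ineq_set K = {x. \<forall>(a,b)\<in>K. b \<le> a \<bullet> x}"

definition eq_set :: "('a::real_inner \<times> real) set \<Rightarrow> 'a set" where
  "eq_set E = {x. \<forall>(a,b)\<in>E. a \<bullet> x = b}"

lemma ineq_set_Un: "ineq_set (K1 \<union> K2) = ineq_set K1 \<inter> ineq_set K2"
  unfolding ineq_set_def by auto

lemma convex_ineq_set: "convex (ineq_set K)"
proof -
  have "ineq_set K = (\<Inter>k\<in>K. {x. snd k \<le> fst k \<bullet> x})" unfolding ineq_set_def by force
  then show ?thesis by (simp add: convex_INT convex_halfspace_ge)
qed

lemma ray_in_ineq_set:
  assumes "x \<in> ineq_set K" "\<forall>(a,b)\<in>K. 0 \<le> a \<bullet> d" "0 \<le> t"
  shows "x + t *\<^sub>R d \<in> ineq_set K"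
  using assms unfolding ineq_set_def by (fastforce simp: inner_add_right intro: add_increasing2)

lemma linear_bounded_on_eq_set_or_dir:
  "(\<exists>B. \<forall>x\<in>eq_set E. c \<bullet> x \<le> B) \<or> (\<exists>d. (\<forall>(a,b)\<in>E. a \<bullet> d = 0) \<and> 0 < c \<bullet> d)"
proof (cases "\<exists>d. (\<forall>(a,b)\<in>E. a \<bullet> d = 0) \<and> c \<bullet> d \<noteq> 0")
  case True
  then obtain d where d: "\<forall>(a,b)\<in>E. a \<bullet> d = 0" "c \<bullet> d \<noteq> 0" by blast
  then have "(\<forall>(a,b)\<in>E. a \<bullet> (- d) = 0) \<and> 0 < c \<bullet> (- d) \<or> 0 < c \<bullet> d" by auto
  then show ?thesis using d(1) by blast
next
  case False
  show ?thesis
  proof (cases "eq_set E = {}")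
    case False
    then obtain x0 where x0: "x0 \<in> eq_set E" by auto
    have "c \<bullet> x \<le> c \<bullet> x0" if "x \<in> eq_set E" for x
    proof -
      have "\<forall>(a,b)\<in>E. a \<bullet> (x - x0) = 0" using that x0 unfolding eq_set_def by (auto simp: inner_diff_right)
      then have "c \<bullet> (x - x0) = 0" using \<open>\<not> (\<exists>d. _)\<close> by blast
      then show ?thesis by (simp add: inner_diff_right)
    qed
    then show ?thesis by blast
  qed auto
qed

text \<open>Push each point along \<open>d\<close> until the constraint \<open>(ak, bk)\<close> becomes tight.\<close>

lemma linear_bound_push_to_constraint:
  fixes ak :: "'a::real_inner"
  assumes B: "\<forall>x\<in>eq_set (insert (ak, bk) E) \<inter> ineq_set K. c \<bullet> x \<le> B"
    and d: "\<forall>(a,b)\<in>E. a \<bullet> d = 0" "\<forall>(a,b)\<in>K. 0 \<le> a \<bullet> d" "0 < c \<bullet> d" "ak \<bullet> d < 0"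
    and x: "x \<in> eq_set E \<inter> ineq_set (insert (ak, bk) K)"
  shows "c \<bullet> x \<le> B"
proof -
  define t where "t = (ak \<bullet> x - bk) / (- (ak \<bullet> d))"
  have "bk \<le> ak \<bullet> x" using x unfolding ineq_set_def by auto
  then have t0: "0 \<le> t" unfolding t_def using d(4) by (intro divide_nonneg_pos) auto
  define y where "y = x + t *\<^sub>R d"
  have "t * (ak \<bullet> d) = - (ak \<bullet> x - bk)" unfolding t_def using d(4) by (simp add: field_simps)
  then have "ak \<bullet> y = bk" unfolding y_def by (simp add: inner_add_right)
  moreover have "y \<in> eq_set E"
    unfolding eq_set_def
  proof safe
    fix a b assume "(a, b) \<in> E"
    then have "a \<bullet> x = b" "a \<bullet> d = 0" using x d(1) unfolding eq_set_def by auto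
    then show "a \<bullet> y = b" unfolding y_def by (simp add: inner_add_right)
  qed
  moreover have "y \<in> ineq_set K"
    unfolding y_def by (rule ray_in_ineq_set[OF _ d(2) t0]) (use x in \<open>auto simp: ineq_set_def\<close>)
  ultimately have "c \<bullet> y \<le> B" using B unfolding eq_set_def by auto
  moreover have "c \<bullet> x \<le> c \<bullet> y" unfolding y_def using t0 d(3) by (simp add: inner_add_right)
  ultimately show ?thesis by simp
qed

lemma linear_bounded_or_ascent_dir_eq:
  fixes K :: "('a::real_inner \<times> real) set"
  assumes "finite K"
  shows "(\<exists>B. \<forall>x\<in>eq_set E \<inter> ineq_set K. c \<bullet> x \<le> B) \<or>
         (\<exists>d. (\<forall>(a,b)\<in>E. a \<bullet> d = 0) \<and> (\<forall>(a,b)\<in>K. 0 \<le> a \<bullet> d) \<and> 0 < c \<bullet> d)"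
  using assms
proof (induction K arbitrary: E rule: finite_induct)
  case empty
  then show ?case using linear_bounded_on_eq_set_or_dir[of E c] by (auto simp: ineq_set_def)
next
  case (insert k K)
  obtain ak bk where k: "k = (ak, bk)" by (cases k)
  from insert.IH[of E] show ?case
  proof
    assume "\<exists>B. \<forall>x\<in>eq_set E \<inter> ineq_set K. c \<bullet> x \<le> B"
    moreover have "ineq_set (insert k K) \<subseteq> ineq_set K" unfolding ineq_set_def by auto
    ultimately show ?thesis by blast
  next
    assume "\<exists>d. (\<forall>(a,b)\<in>E. a \<bullet> d = 0) \<and> (\<forall>(a,b)\<in>K. 0 \<le> a \<bullet> d) \<and> 0 < c \<bullet> d"
    then obtain d where d: "\<forall>(a,b)\<in>E. a \<bullet> d = 0" "\<forall>(a,b)\<in>K. 0 \<le> a \<bullet> d" "0 < c \<bullet> d" by blast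
    show ?thesis
    proof (cases "0 \<le> ak \<bullet> d")
      case True
      then show ?thesis using d k by auto
    next
      case False
      from insert.IH[of "insert k E"] show ?thesis
      proof
        assume "\<exists>B. \<forall>x\<in>eq_set (insert k E) \<inter> ineq_set K. c \<bullet> x \<le> B"
        then obtain B where B: "\<forall>x\<in>eq_set (insert (ak, bk) E) \<inter> ineq_set K. c \<bullet> x \<le> B"
          unfolding k by blast
        have "\<forall>x\<in>eq_set E \<inter> ineq_set (insert k K). c \<bullet> x \<le> B"
          using linear_bound_push_to_constraint[OF B d] False unfolding k by simp
        then show ?thesis by blast
      next
        assume "\<exists>d. (\<forall>(a,b)\<in>insert k E. a \<bullet> d = 0) \<and> (\<forall>(a,b)\<in>K. 0 \<le> a \<bullet> d) \<and> 0 < c \<bullet> d"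
        then obtain d' where "\<forall>(a,b)\<in>insert k E. a \<bullet> d' = 0" "\<forall>(a,b)\<in>K. 0 \<le> a \<bullet> d'" "0 < c \<bullet> d'"
          by blast
        then have "(\<forall>(a,b)\<in>E. a \<bullet> d' = 0) \<and> (\<forall>(a,b)\<in>insert k K. 0 \<le> a \<bullet> d') \<and> 0 < c \<bullet> d'"
          unfolding k by simp
        then show ?thesis by blast
      qed
    qed
  qed
qed

lemma linear_bounded_or_ascent_dir:
  fixes K :: "('a::real_inner \<times> real) set"
  assumes "finite K"
  shows "(\<exists>B. \<forall>x\<in>ineq_set K. c \<bullet> x \<le> B) \<or> (\<exists>d. (\<forall>(a,b)\<in>K. 0 \<le> a \<bullet> d) \<and> 0 < c \<bullet> d)"
  using linear_bounded_or_ascent_dir_eq[OF assms, where E="{}" and c=c] unfolding eq_set_def by auto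

lemma linear_bound_beyond_slab:
  fixes c ell :: "'a::real_inner"
  assumes S: "convex S" "x0 \<in> S" "x \<in> S" and far: "ell \<bullet> x0 + 1 < ell \<bullet> x"
    and C: "\<And>z. z \<in> S \<Longrightarrow> ell \<bullet> z \<le> ell \<bullet> x0 + 1 \<Longrightarrow> c \<bullet> z \<le> C"
  shows "c \<bullet> x \<le> c \<bullet> x0 + (ell \<bullet> x - ell \<bullet> x0) * (C - c \<bullet> x0)"
proof -
  define r where "r = ell \<bullet> x - ell \<bullet> x0"
  have r1: "1 < r" using far unfolding r_def by simp
  define z where "z = (1 - 1/r) *\<^sub>R x0 + (1/r) *\<^sub>R x"
  have zS: "z \<in> S" unfolding z_def by (rule convexD[OF S]) (use r1 in auto)
  have "ell \<bullet> z = (1 - 1/r) * (ell \<bullet> x0) + (1/r) * (ell \<bullet> x0 + r)"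
    unfolding z_def r_def by (simp add: inner_add_right)
  moreover have "(1 - 1/r) * a + (1/r) * (a + r) = a + 1" for a using r1 by (simp add: field_simps)
  ultimately have "ell \<bullet> z = ell \<bullet> x0 + 1" by simp
  then have "(1 - 1/r) * (c \<bullet> x0) + (1/r) * (c \<bullet> x) \<le> C"
    using C[OF zS] unfolding z_def by (simp add: inner_add_right)
  then have "r * ((1 - 1/r) * (c \<bullet> x0) + (1/r) * (c \<bullet> x)) \<le> r * C"
    using r1 by (intro mult_left_mono) auto
  then show ?thesis using r1 unfolding r_def[symmetric] by (simp add: algebra_simps)
qed

lemma linear_growth_bound:
  fixes K :: "('a::real_inner \<times> real) set"
  assumes fK: "finite K"
    and norec: "\<And>d. ineq_set K \<noteq> {} \<Longrightarrow> (\<forall>(a,b)\<in>K. 0 \<le> a \<bullet> d) \<Longrightarrow> ell \<bullet> d \<le> 0 \<Longrightarrow> c \<bullet> d \<le> 0"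
  shows "\<exists>A. \<forall>x\<in>ineq_set K. 0 \<le> ell \<bullet> x \<longrightarrow> c \<bullet> x \<le> A + A * (ell \<bullet> x)"
proof (cases "ineq_set K = {}")
  case False
  then obtain x0 where x0: "x0 \<in> ineq_set K" by auto
  define R0 where "R0 = ell \<bullet> x0"
  define K' where "K' = insert (- ell, - (R0 + 1)) K"
  have K'_iff: "x \<in> ineq_set K' \<longleftrightarrow> x \<in> ineq_set K \<and> ell \<bullet> x \<le> R0 + 1" for x
    unfolding K'_def ineq_set_def by auto
  have "\<not> (\<exists>d. (\<forall>(a,b)\<in>K'. 0 \<le> a \<bullet> d) \<and> 0 < c \<bullet> d)"
    using norec False unfolding K'_def by fastforce
  then obtain C where C: "\<forall>x\<in>ineq_set K'. c \<bullet> x \<le> C"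
    using linear_bounded_or_ascent_dir[of K' c] fK unfolding K'_def by auto
  have Cx0: "c \<bullet> x0 \<le> C" using C K'_iff x0 unfolding R0_def by auto
  define B where "B = C - c \<bullet> x0"
  define A where "A = \<bar>C\<bar> + \<bar>c \<bullet> x0 - R0 * B\<bar> + B"
  have "c \<bullet> x \<le> A + A * (ell \<bullet> x)" if x: "x \<in> ineq_set K" and e0: "0 \<le> ell \<bullet> x" for x
  proof -
    have B0: "0 \<le> B" using Cx0 unfolding B_def by simp
    have "c \<bullet> x \<le> \<bar>C\<bar> + \<bar>c \<bullet> x0 - R0 * B\<bar> + B * (ell \<bullet> x)"
    proof (cases "ell \<bullet> x \<le> R0 + 1")
      case True
      then have "c \<bullet> x \<le> C" using C K'_iff x by auto
      moreover have "0 \<le> B * (ell \<bullet> x)" using B0 e0 by simp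
      ultimately show ?thesis by linarith
    next
      case False
      have "c \<bullet> x \<le> c \<bullet> x0 + (ell \<bullet> x - R0) * B"
        using linear_bound_beyond_slab[OF convex_ineq_set x0 x, of ell c C] False C K'_iff
        unfolding R0_def B_def by auto
      then show ?thesis by (simp add: algebra_simps)
    qed
    moreover have "B * (ell \<bullet> x) \<le> A * (ell \<bullet> x)" using B0 e0 unfolding A_def by (simp add: mult_right_mono)
    ultimately show ?thesis using B0 unfolding A_def by linarith
  qed
  then show ?thesis by blast
qed auto


lemma finite_uniform_bound:
  fixes F G :: "'x \<Rightarrow> 'y \<Rightarrow> real"
  assumes "finite X" "\<And>x. x \<in> X \<Longrightarrow> \<exists>A. \<forall>y\<in>S x. F x y \<le> A * G x y"
    and G: "\<And>x y. x \<in> X \<Longrightarrow> y \<in> S x \<Longrightarrow> 0 \<le> G x y"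
  shows "\<exists>A\<ge>0. \<forall>x\<in>X. \<forall>y\<in>S x. F x y \<le> A * G x y"
proof -
  have "\<forall>x\<in>X. \<exists>A. \<forall>y\<in>S x. F x y \<le> A * G x y" using assms(2) by blast
  then obtain h where h: "\<forall>x\<in>X. \<forall>y\<in>S x. F x y \<le> h x * G x y" by (rule bchoice[THEN exE])
  define A where "A = Max (insert 0 (h ` X))"
  have hA: "h x \<le> A" if "x \<in> X" for x using that assms(1) unfolding A_def by simp
  have "0 \<le> A" unfolding A_def using assms(1) by simp
  moreover have "F x y \<le> A * G x y" if xy: "x \<in> X" "y \<in> S x" for x y
  proof -
    have "F x y \<le> h x * G x y" using h xy by blast
    also have "\<dots> \<le> A * G x y" using hA[OF xy(1)] G[OF xy] by (rule mult_right_mono)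
    finally show ?thesis .
  qed
  ultimately show ?thesis by blast
qed

lemma abs_affine_le_linear:
  fixes K :: "('a::real_inner \<times> real) set"
  assumes fK: "finite K" and ell1: "\<And>y. y \<in> ineq_set K \<Longrightarrow> 1 \<le> ell \<bullet> y"
    and norec: "\<And>d. ineq_set K \<noteq> {} \<Longrightarrow> (\<forall>(a,b)\<in>K. 0 \<le> a \<bullet> d) \<Longrightarrow> ell \<bullet> d \<le> 0 \<Longrightarrow> c \<bullet> d = 0"
  shows "\<exists>A. \<forall>y\<in>ineq_set K. \<bar>c \<bullet> y + e\<bar> \<le> A * (ell \<bullet> y)"
proof -
  obtain A1 where A1: "\<forall>x\<in>ineq_set K. 0 \<le> ell \<bullet> x \<longrightarrow> c \<bullet> x \<le> A1 + A1 * (ell \<bullet> x)"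
    using linear_growth_bound[OF fK, of ell c] norec by force
  obtain A2 where A2: "\<forall>x\<in>ineq_set K. 0 \<le> ell \<bullet> x \<longrightarrow> (- c) \<bullet> x \<le> A2 + A2 * (ell \<bullet> x)"
    using linear_growth_bound[OF fK, of ell "- c"] norec by force
  have "\<bar>c \<bullet> y + e\<bar> \<le> (\<bar>e\<bar> + 2 * \<bar>A1\<bar> + 2 * \<bar>A2\<bar>) * (ell \<bullet> y)" if y: "y \<in> ineq_set K" for y
  proof -
    have l1: "1 \<le> ell \<bullet> y" using ell1[OF y] .
    have b1: "c \<bullet> y \<le> A1 + A1 * (ell \<bullet> y)" and b2: "- (c \<bullet> y) \<le> A2 + A2 * (ell \<bullet> y)"
      using A1 A2 y l1 by auto
    have "A1 * (ell \<bullet> y) \<le> \<bar>A1\<bar> * (ell \<bullet> y)" "A2 * (ell \<bullet> y) \<le> \<bar>A2\<bar> * (ell \<bullet> y)"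
      using l1 by (simp_all add: mult_right_mono)
    moreover have "\<bar>A1\<bar> \<le> \<bar>A1\<bar> * (ell \<bullet> y)" "\<bar>A2\<bar> \<le> \<bar>A2\<bar> * (ell \<bullet> y)" "\<bar>e\<bar> \<le> \<bar>e\<bar> * (ell \<bullet> y)"
      using l1 by (simp_all add: mult_le_cancel_left1)
    moreover have "(\<bar>e\<bar> + 2 * \<bar>A1\<bar> + 2 * \<bar>A2\<bar>) * (ell \<bullet> y)
        = \<bar>e\<bar> * (ell \<bullet> y) + 2 * (\<bar>A1\<bar> * (ell \<bullet> y)) + 2 * (\<bar>A2\<bar> * (ell \<bullet> y))"
      by (simp add: algebra_simps)
    ultimately show ?thesis using b1 b2 abs_ge_self[of A1] abs_ge_self[of A2] abs_ge_self[of e]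
        abs_ge_minus_self[of e] zero_le_mult_iff[of "\<bar>A1\<bar>" "ell \<bullet> y"] zero_le_mult_iff[of "\<bar>A2\<bar>" "ell \<bullet> y"] l1
      by (intro abs_leI) linarith+
  qed
  then show ?thesis by blast
qed

lemma eventually_Min_affine:
  fixes \<alpha> \<beta> :: "'i \<Rightarrow> real"
  assumes "finite A" "A \<noteq> {}"
  shows "\<exists>a. \<forall>\<^sub>F t in at_top. Min ((\<lambda>i. \<alpha> i + t * \<beta> i) ` A) = a + t * Min (\<beta> ` A)"
proof -
  obtain j0 where j0: "j0 \<in> A" "\<beta> j0 = Min (\<beta> ` A)" "\<forall>\<^sub>F t in at_top. \<forall>j\<in>A. \<alpha> j0 + t * \<beta> j0 \<le> \<alpha> j + t * \<beta> j"
    using eventually_min_affine_at_top[OF assms, of \<beta> \<alpha>] by blast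
  have "\<forall>\<^sub>F t in at_top. Min ((\<lambda>i. \<alpha> i + t * \<beta> i) ` A) = \<alpha> j0 + t * Min (\<beta> ` A)"
    using j0(3)
  proof (rule eventually_mono)
    fix t assume h: "\<forall>j\<in>A. \<alpha> j0 + t * \<beta> j0 \<le> \<alpha> j + t * \<beta> j"
    have "Min ((\<lambda>i. \<alpha> i + t * \<beta> i) ` A) = \<alpha> j0 + t * \<beta> j0"
    proof (rule Min_eqI)
      show "finite ((\<lambda>i. \<alpha> i + t * \<beta> i) ` A)" using assms(1) by simp
      show "\<And>y. y \<in> (\<lambda>i. \<alpha> i + t * \<beta> i) ` A \<Longrightarrow> \<alpha> j0 + t * \<beta> j0 \<le> y" using h by blast
      show "\<alpha> j0 + t * \<beta> j0 \<in> (\<lambda>i. \<alpha> i + t * \<beta> i) ` A" using j0(1) by (rule imageI)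
    qed
    then show "Min ((\<lambda>i. \<alpha> i + t * \<beta> i) ` A) = \<alpha> j0 + t * Min (\<beta> ` A)" using j0(2) by simp
  qed
  then show ?thesis by blast
qed

lemma Max_eq_uminus_Min:
  fixes g :: "'i \<Rightarrow> real"
  assumes "finite A" "A \<noteq> {}"
  shows "Max (g ` A) = - Min ((\<lambda>i. - g i) ` A)"
proof -
  have "Min ((\<lambda>i. - g i) ` A) \<in> (\<lambda>i. - g i) ` A" using assms by (intro Min_in) auto
  then obtain i0 where i0: "i0 \<in> A" "Min ((\<lambda>i. - g i) ` A) = - g i0" by auto
  have "\<And>j. j \<in> A \<Longrightarrow> - g i0 \<le> - g j"
  proof -
    fix j assume j: "j \<in> A"
    have "Min ((\<lambda>i. - g i) ` A) \<le> - g j" by (rule Min_le) (use assms(1) j in auto)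
    then show "- g i0 \<le> - g j" using i0(2) by simp
  qed
  then have "Max (g ` A) = g i0" using i0(1) assms(1) by (intro Max_eqI) auto
  then show ?thesis using i0(2) by simp
qed

lemma eventually_Max_affine:
  fixes \<alpha> \<beta> :: "'i \<Rightarrow> real"
  assumes "finite A" "A \<noteq> {}"
  shows "\<exists>a. \<forall>\<^sub>F t in at_top. Max ((\<lambda>i. \<alpha> i + t * \<beta> i) ` A) = a + t * Max (\<beta> ` A)"
proof -
  obtain a where a: "\<forall>\<^sub>F t in at_top. Min ((\<lambda>i. - \<alpha> i + t * - \<beta> i) ` A) = a + t * Min ((\<lambda>i. - \<beta> i) ` A)"
    using eventually_Min_affine[OF assms, of "\<lambda>i. - \<alpha> i" "\<lambda>i. - \<beta> i"] by blast
  have neg1: "\<And>t. Max ((\<lambda>i. \<alpha> i + t * \<beta> i) ` A) = - Min ((\<lambda>i. - \<alpha> i + t * - \<beta> i) ` A)"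
    using Max_eq_uminus_Min[OF assms] by simp
  have neg2: "Max (\<beta> ` A) = - Min ((\<lambda>i. - \<beta> i) ` A)"
    using Max_eq_uminus_Min[OF assms] by simp
  have "\<forall>\<^sub>F t in at_top. Max ((\<lambda>i. \<alpha> i + t * \<beta> i) ` A) = (- a) + t * Max (\<beta> ` A)"
    using a by (rule eventually_mono) (simp add: neg1 neg2)
  then show ?thesis by blast
qed

lemma eventually_max_min_affine:
  fixes \<alpha> \<beta> :: "'i \<Rightarrow> real" and B :: "'s \<Rightarrow> 'i set"
  assumes "finite A" "A \<noteq> {}" "\<And>a. a \<in> A \<Longrightarrow> finite (B a) \<and> B a \<noteq> {}"
  shows "\<exists>c. \<forall>\<^sub>F t in at_top. max_min A B (\<lambda>i. \<alpha> i + t * \<beta> i) = c + t * max_min A B \<beta>"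
proof -
  have "\<forall>a\<in>A. \<exists>c. \<forall>\<^sub>F t in at_top. Min ((\<lambda>i. \<alpha> i + t * \<beta> i) ` B a) = c + t * Min (\<beta> ` B a)"
  proof
    fix a assume a: "a \<in> A"
    have "finite (B a)" "B a \<noteq> {}" using assms(3)[OF a] by auto
    then show "\<exists>c. \<forall>\<^sub>F t in at_top. Min ((\<lambda>i. \<alpha> i + t * \<beta> i) ` B a) = c + t * Min (\<beta> ` B a)"
      by (rule eventually_Min_affine)
  qed
  then have "\<exists>c. \<forall>a\<in>A. \<forall>\<^sub>F t in at_top. Min ((\<lambda>i. \<alpha> i + t * \<beta> i) ` B a) = c a + t * Min (\<beta> ` B a)"
    by (rule bchoice)
  then obtain c where c: "\<forall>a\<in>A. \<forall>\<^sub>F t in at_top. Min ((\<lambda>i. \<alpha> i + t * \<beta> i) ` B a) = c a + t * Min (\<beta> ` B a)"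
    by blast
  have ev1: "\<forall>\<^sub>F t in at_top. \<forall>a\<in>A. Min ((\<lambda>i. \<alpha> i + t * \<beta> i) ` B a) = c a + t * Min (\<beta> ` B a)"
    using eventually_ball_finite[OF assms(1) c] .
  obtain c0 where c0: "\<forall>\<^sub>F t in at_top. Max ((\<lambda>a. c a + t * Min (\<beta> ` B a)) ` A) = c0 + t * Max ((\<lambda>a. Min (\<beta> ` B a)) ` A)"
    using eventually_Max_affine[OF assms(1,2), of c "\<lambda>a. Min (\<beta> ` B a)"] by blast
  have "\<forall>\<^sub>F t in at_top. max_min A B (\<lambda>i. \<alpha> i + t * \<beta> i) = c0 + t * max_min A B \<beta>"
    using eventually_conj[OF ev1 c0]
  proof (rule eventually_mono)
    fix t assume h: "(\<forall>a\<in>A. Min ((\<lambda>i. \<alpha> i + t * \<beta> i) ` B a) = c a + t * Min (\<beta> ` B a)) \<and>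
       Max ((\<lambda>a. c a + t * Min (\<beta> ` B a)) ` A) = c0 + t * Max ((\<lambda>a. Min (\<beta> ` B a)) ` A)"
    have e: "(\<lambda>a. Min ((\<lambda>i. \<alpha> i + t * \<beta> i) ` B a)) ` A = (\<lambda>a. c a + t * Min (\<beta> ` B a)) ` A"
      using h by (intro image_cong) auto
    have "Max ((\<lambda>a. c a + t * Min (\<beta> ` B a)) ` A) = c0 + t * Max ((\<lambda>a. Min (\<beta> ` B a)) ` A)" using h by blast
    then show "max_min A B (\<lambda>i. \<alpha> i + t * \<beta> i) = c0 + t * max_min A B \<beta>"
      using e by (simp add: max_min_def)
  qed
  then show ?thesis by blast
qed

lemma eventually_affine_eq_slope:
  assumes "\<forall>\<^sub>F t in at_top. (a::real) + t * s = a' + t * s'"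
  shows "s = s'"
proof -
  obtain T where T: "\<And>t. t \<ge> T \<Longrightarrow> a + t * s = a' + t * s'" using assms unfolding eventually_at_top_linorder by blast
  have e1: "a + T * s = a' + T * s'" using T by simp
  have e2: "a + (T + 1) * s = a' + (T + 1) * s'" using T by simp
  have "(a + (T + 1) * s) - (a + T * s) = (a' + (T + 1) * s') - (a' + T * s')" using e1 e2 by simp
  then show ?thesis by (simp add: algebra_simps)
qed


section \<open>Bounded difference of max-min forms near infinity\<close>

text \<open>A region \<open>(S, c, \<beta>)\<close> of \<open>max_min_form \<tau>\<close> is where the family \<open>S\<close> attains the maximum with
  minimizing piece \<open>c \<in> S\<close>, and \<open>\<beta> S'\<close> is a minimizing piece of every family \<open>S'\<close>. It is a polyhedron,
  on which \<open>max_min_form \<tau> = aff c\<close>, and finitely many regions cover \<open>\<Theta> \<tau>\<close>.\<close>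

type_synonym 'v region = "'v piece set \<times> 'v piece \<times> ('v piece set \<Rightarrow> 'v piece)"

context rat_function begin

definition region_ineqs :: "'p \<Rightarrow> 'v region \<Rightarrow> ((real^'v) \<times> real) set" where
  "region_ineqs \<tau> r = (case r of (S, c, \<beta>) \<Rightarrow>
     (\<lambda>i. (real_vec (fst i) - real_vec (fst c), real_of_rat (snd c) - real_of_rat (snd i))) ` S \<union>
     (\<lambda>S'. (real_vec (fst c) - real_vec (fst (\<beta> S')), real_of_rat (snd (\<beta> S')) - real_of_rat (snd c))) `
       piece_families \<tau>)"

definition regions :: "'p \<Rightarrow> 'v region set" where
  "regions \<tau> = {(S, c, \<beta>). S \<in> piece_families \<tau> \<and> c \<in> S \<and> \<beta> \<in> PiE (piece_families \<tau>) id}"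

lemma finite_regions: assumes "\<tau> \<in> \<Delta>" shows "finite (regions \<tau>)"
proof -
  have "regions \<tau> \<subseteq> piece_families \<tau> \<times> (\<Union> (piece_families \<tau>)) \<times> PiE (piece_families \<tau>) id" unfolding regions_def by auto
  moreover have "finite (piece_families \<tau> \<times> (\<Union> (piece_families \<tau>)) \<times> PiE (piece_families \<tau>) id)"
    using piece_families_props[OF assms] by (intro finite_cartesian_product finite_PiE) auto
  ultimately show ?thesis using finite_subset by blast
qed

lemma finite_region_ineqs: assumes "\<tau> \<in> \<Delta>" "r \<in> regions \<tau>" shows "finite (region_ineqs \<tau> r)"
proof -
  have "finite (fst r)" using assms piece_families_props[OF assms(1)] unfolding regions_def by auto
  then show ?thesis unfolding region_ineqs_def using piece_families_props[OF assms(1)] by (cases r) simp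
qed

lemma aff_le_iff: "(real_of_rat (snd c) - real_of_rat (snd i) \<le> (real_vec (fst i) - real_vec (fst c)) \<bullet> y) \<longleftrightarrow> aff c y \<le> aff i y"
  unfolding aff_def by (auto simp: inner_diff_left)

lemma mem_region_ineqs_iff:
  assumes "r = (S, c, \<beta>)"
  shows "y \<in> ineq_set (region_ineqs \<tau> r) \<longleftrightarrow> (\<forall>i\<in>S. aff c y \<le> aff i y) \<and> (\<forall>S'\<in>piece_families \<tau>. aff (\<beta> S') y \<le> aff c y)"
proof
  assume y: "y \<in> ineq_set (region_ineqs \<tau> r)"
  have m: "\<And>a b. (a,b) \<in> region_ineqs \<tau> r \<Longrightarrow> b \<le> a \<bullet> y" using y unfolding ineq_set_def by auto
  have "\<forall>i\<in>S. aff c y \<le> aff i y"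
  proof
    fix i assume "i \<in> S"
    then have "(real_vec (fst i) - real_vec (fst c), real_of_rat (snd c) - real_of_rat (snd i)) \<in> region_ineqs \<tau> r"
      unfolding region_ineqs_def assms by auto
    from m[OF this] show "aff c y \<le> aff i y" using aff_le_iff by blast
  qed
  moreover have "\<forall>S'\<in>piece_families \<tau>. aff (\<beta> S') y \<le> aff c y"
  proof
    fix S' assume "S' \<in> piece_families \<tau>"
    then have "(real_vec (fst c) - real_vec (fst (\<beta> S')), real_of_rat (snd (\<beta> S')) - real_of_rat (snd c)) \<in> region_ineqs \<tau> r"
      unfolding region_ineqs_def assms by auto
    from m[OF this] show "aff (\<beta> S') y \<le> aff c y" using aff_le_iff by blast
  qed
  ultimately show "(\<forall>i\<in>S. aff c y \<le> aff i y) \<and> (\<forall>S'\<in>piece_families \<tau>. aff (\<beta> S') y \<le> aff c y)" ..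
next
  assume h: "(\<forall>i\<in>S. aff c y \<le> aff i y) \<and> (\<forall>S'\<in>piece_families \<tau>. aff (\<beta> S') y \<le> aff c y)"
  show "y \<in> ineq_set (region_ineqs \<tau> r)" unfolding ineq_set_def
  proof (safe)
    fix a b assume ab: "(a, b) \<in> region_ineqs \<tau> r"
    then consider (1) i where "i \<in> S" "a = real_vec (fst i) - real_vec (fst c)" "b = real_of_rat (snd c) - real_of_rat (snd i)"
      | (2) S' where "S' \<in> piece_families \<tau>" "a = real_vec (fst c) - real_vec (fst (\<beta> S'))" "b = real_of_rat (snd (\<beta> S')) - real_of_rat (snd c)"
      unfolding region_ineqs_def assms by auto
    then show "b \<le> a \<bullet> y"
    proof cases
      case 1 then show ?thesis using h aff_le_iff by blast
    next
      case 2 then show ?thesis using h aff_le_iff by blast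
    qed
  qed
qed

lemma max_min_form_on_region:
  assumes \<tau>: "\<tau> \<in> \<Delta>" and r: "r \<in> regions \<tau>" and y: "y \<in> ineq_set (region_ineqs \<tau> r)"
  shows "max_min_form \<tau> y = aff (fst (snd r)) y"
proof -
  obtain S c \<beta> where rr: "r = (S, c, \<beta>)" by (cases r) auto
  have S: "S \<in> piece_families \<tau>" "c \<in> S" "\<beta> \<in> PiE (piece_families \<tau>) id" using r rr unfolding regions_def by auto
  have y1: "\<forall>i\<in>S. aff c y \<le> aff i y" and y2: "\<forall>S'\<in>piece_families \<tau>. aff (\<beta> S') y \<le> aff c y" using y mem_region_ineqs_iff[OF rr] by auto
  note P = piece_families_props[OF \<tau>]
  have minS: "Min ((\<lambda>i. aff i y) ` S) = aff c y" using P(3)[OF S(1)] S(2) y1 by (intro Min_eqI) auto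
  have "Max ((\<lambda>a. Min ((\<lambda>i. aff i y) ` id a)) ` piece_families \<tau>) = aff c y"
  proof (rule Max_eqI)
    show "finite ((\<lambda>a. Min ((\<lambda>i. aff i y) ` id a)) ` piece_families \<tau>)" using P by simp
    show "aff c y \<in> (\<lambda>a. Min ((\<lambda>i. aff i y) ` id a)) ` piece_families \<tau>" using minS S(1) by force
    fix v assume "v \<in> (\<lambda>a. Min ((\<lambda>i. aff i y) ` id a)) ` piece_families \<tau>"
    then obtain S' where S': "S' \<in> piece_families \<tau>" "v = Min ((\<lambda>i. aff i y) ` S')" by auto
    have "\<beta> S' \<in> S'" using S(3) S'(1) by (auto simp: PiE_def Pi_def)
    then have "v \<le> aff (\<beta> S') y" using S' P(3)[OF S'(1)] by auto
    then show "v \<le> aff c y" using y2 S'(1) by auto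
  qed
  then show ?thesis unfolding max_min_form_def max_min_def rr by simp
qed

lemma regions_cover:
  assumes \<tau>: "\<tau> \<in> \<Delta>"
  shows "\<exists>r\<in>regions \<tau>. y \<in> ineq_set (region_ineqs \<tau> r)"
proof -
  note P = piece_families_props[OF \<tau>]
  define F where "F S = Min ((\<lambda>i. aff i y) ` S)" for S
  have "Max (F ` piece_families \<tau>) \<in> F ` piece_families \<tau>" using P by (intro Max_in) auto
  then obtain S where S: "S \<in> piece_families \<tau>" "F S = Max (F ` piece_families \<tau>)" by auto
  have "F S \<in> (\<lambda>i. aff i y) ` S" unfolding F_def using P(3)[OF S(1)] by (intro Min_in) auto
  then obtain c where c: "c \<in> S" "aff c y = F S" by auto
  have "\<forall>S'\<in>piece_families \<tau>. \<exists>b\<in>S'. aff b y = F S'"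
  proof
    fix S' assume S': "S' \<in> piece_families \<tau>"
    have "F S' \<in> (\<lambda>i. aff i y) ` S'" unfolding F_def using P(3)[OF S'] by (intro Min_in) auto
    then show "\<exists>b\<in>S'. aff b y = F S'" by auto
  qed
  then obtain \<beta>0 where \<beta>0: "\<forall>S'\<in>piece_families \<tau>. \<beta>0 S' \<in> S' \<and> aff (\<beta>0 S') y = F S'" by metis
  define \<beta> where "\<beta> = restrict \<beta>0 (piece_families \<tau>)"
  have \<beta>: "\<beta> \<in> PiE (piece_families \<tau>) id" unfolding \<beta>_def using \<beta>0 by (auto simp: PiE_def Pi_def)
  have r: "(S, c, \<beta>) \<in> regions \<tau>" unfolding regions_def using S c \<beta> by auto
  have "\<forall>i\<in>S. aff c y \<le> aff i y" using c P(3)[OF S(1)] unfolding F_def by auto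
  moreover have "\<forall>S'\<in>piece_families \<tau>. aff (\<beta> S') y \<le> aff c y"
  proof
    fix S' assume S': "S' \<in> piece_families \<tau>"
    have "aff (\<beta> S') y = F S'" using \<beta>0 S' unfolding \<beta>_def by auto
    also have "\<dots> \<le> Max (F ` piece_families \<tau>)" using P S' by auto
    finally show "aff (\<beta> S') y \<le> aff c y" using S(2) c(2) by simp
  qed
  ultimately have "y \<in> ineq_set (region_ineqs \<tau> (S, c, \<beta>))" using mem_region_ineqs_iff by blast
  then show ?thesis using r by blast
qed

definition Theta_ineqs :: "'p \<Rightarrow> ((real^'v) \<times> real) set" where
  "Theta_ineqs \<eta> = (\<lambda>j. (axis j 1, 0)) ` UNIV \<union> (\<lambda>j. (- axis j 1, 0)) ` (- zeta \<eta>) \<union> {(Vf_ind, 1), (- Vf_ind, -1)}"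

lemma finite_Theta_ineqs: "finite (Theta_ineqs \<eta>)" unfolding Theta_ineqs_def by simp

lemma ineq_set_Theta_ineqs: "ineq_set (Theta_ineqs \<eta>) = \<Theta> \<eta>"
proof (intro set_eqI iffI)
  fix x assume x: "x \<in> ineq_set (Theta_ineqs \<eta>)"
  have m: "\<And>a b. (a,b) \<in> Theta_ineqs \<eta> \<Longrightarrow> b \<le> a \<bullet> x" using x unfolding ineq_set_def by auto
  have 1: "\<And>j. 0 \<le> x$j" using m[of "axis _ 1" 0] unfolding Theta_ineqs_def by (auto simp: inner_axis')
  have 2: "\<And>j. j \<notin> zeta \<eta> \<Longrightarrow> x$j = 0"
  proof -
    fix j assume "j \<notin> zeta \<eta>"
    then have "(- axis j 1, 0) \<in> Theta_ineqs \<eta>" unfolding Theta_ineqs_def by auto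
    from m[OF this] have "x$j \<le> 0" by (simp add: inner_axis')
    then show "x$j = 0" using 1[of j] by simp
  qed
  have "(Vf_ind, 1) \<in> Theta_ineqs \<eta>" "(- Vf_ind, -1) \<in> Theta_ineqs \<eta>" unfolding Theta_ineqs_def by auto
  from m[OF this(1)] m[OF this(2)] have 3: "(\<Sum>j\<in>Vf. x$j) = 1" by (simp add: Vf_ind_inner)
  show "x \<in> \<Theta> \<eta>" using 2 1 3 by (rule ThetaI)
next
  fix x assume x: "x \<in> \<Theta> \<eta>"
  show "x \<in> ineq_set (Theta_ineqs \<eta>)" unfolding ineq_set_def Theta_ineqs_def
    using ThetaD[OF x] sum_Vf[OF x] by (auto simp: inner_axis' Vf_ind_inner)
qed

definition off_face :: "'p \<Rightarrow> real^'v" where "off_face \<kappa> = (\<chi> j. if j \<in> zeta \<kappa> then 0 else 1)"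

lemma off_face_inner: "off_face \<kappa> \<bullet> u = (\<Sum>j\<in>UNIV. if j \<in> zeta \<kappa> then 0 else u$j)"
  unfolding off_face_def inner_vec_def by (rule sum.cong) auto

lemma one_le_off_face: assumes "u \<in> \<Theta> \<eta>" "zeta \<kappa> \<inter> Vf = {}" shows "1 \<le> off_face \<kappa> \<bullet> u"
proof -
  have "(\<Sum>j\<in>Vf. u$j) = (\<Sum>j\<in>Vf. if j \<in> zeta \<kappa> then 0 else u$j)"
    using assms(2) by (intro sum.cong) auto
  also have "\<dots> \<le> (\<Sum>j\<in>UNIV. if j \<in> zeta \<kappa> then 0 else u$j)"
    by (rule sum_mono2) (use ThetaD(2)[OF assms(1)] in auto)
  finally show ?thesis using sum_Vf[OF assms(1)] off_face_inner by simp
qed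

lemma off_face_nonneg: assumes "u \<in> \<Theta> \<eta>" shows "0 \<le> off_face \<kappa> \<bullet> u"
  unfolding off_face_inner using ThetaD(2)[OF assms] by (intro sum_nonneg) auto

lemma recession_dir_in_face:
  assumes K: "Theta_ineqs \<eta> \<subseteq> K" and d: "\<forall>(a,b)\<in>K. 0 \<le> a \<bullet> d" and ell: "off_face \<kappa> \<bullet> d \<le> 0"
  shows "\<And>j. 0 \<le> d$j" "\<And>j. d$j \<noteq> 0 \<Longrightarrow> j \<in> zeta \<kappa>"
proof -
  show nn: "\<And>j. 0 \<le> d$j"
  proof -
    fix j
    have "(axis j 1, 0) \<in> K" using K unfolding Theta_ineqs_def by auto
    then show "0 \<le> d$j" using d by (auto simp: inner_axis')
  qed
  fix j assume dj: "d$j \<noteq> 0"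
  show "j \<in> zeta \<kappa>"
  proof (rule ccontr)
    assume nj: "j \<notin> zeta \<kappa>"
    have "(\<Sum>i\<in>UNIV. if i \<in> zeta \<kappa> then 0 else d$i) = 0"
      using ell nn unfolding off_face_inner by (intro antisym sum_nonneg) auto
    then have "\<forall>i\<in>UNIV. (if i \<in> zeta \<kappa> then 0 else d$i) = 0"
      by (subst sum_nonneg_eq_0_iff[symmetric]) (use nn in auto)
    then have "(if j \<in> zeta \<kappa> then 0 else d$j) = 0" by blast
    then show False using nj dj by simp
  qed
qed

lemma Theta_ray:
  assumes p: "p \<in> \<Theta> \<sigma>" and k: "\<kappa> \<le> \<sigma>" "zeta \<kappa> \<inter> Vf = {}"
    and dn: "\<And>j. 0 \<le> d$j" and ds: "\<And>j. d$j \<noteq> 0 \<Longrightarrow> j \<in> zeta \<kappa>" and t: "0 \<le> t"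
  shows "p + t *\<^sub>R d \<in> \<Theta> \<sigma>"
proof (rule ThetaI)
  show "\<And>j. j \<notin> zeta \<sigma> \<Longrightarrow> (p + t *\<^sub>R d) $ j = 0"
    using ThetaD(1)[OF p] ds zeta_mono[OF k(1)] by fastforce
  show "\<And>j. 0 \<le> (p + t *\<^sub>R d) $ j" using ThetaD(2)[OF p] dn t by simp
  have "(\<Sum>j\<in>Vf. (p + t *\<^sub>R d) $ j) = (\<Sum>j\<in>Vf. p$j)" using ds k(2) by (intro sum.cong) auto
  then show "(\<Sum>j\<in>Vf. (p + t *\<^sub>R d) $ j) = 1" using sum_Vf[OF p] by simp
qed

definition max_min_slope :: "'p \<Rightarrow> real^'v \<Rightarrow> real" where
  "max_min_slope \<sigma> d = max_min (piece_families \<sigma>) id (\<lambda>i. real_vec (fst i) \<bullet> d)"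

lemma max_min_form_eventually_affine:
  assumes "\<sigma> \<in> \<Delta>"
  shows "\<exists>c. \<forall>\<^sub>F t in at_top. max_min_form \<sigma> (p + t *\<^sub>R d) = c + t * max_min_slope \<sigma> d"
proof -
  note P = piece_families_props[OF assms]
  have "\<exists>c. \<forall>\<^sub>F t in at_top. max_min (piece_families \<sigma>) id (\<lambda>i. aff i p + t * (real_vec (fst i) \<bullet> d))
      = c + t * max_min (piece_families \<sigma>) id (\<lambda>i. real_vec (fst i) \<bullet> d)"
    by (rule eventually_max_min_affine) (use P in auto)
  then show ?thesis unfolding max_min_form_def max_min_slope_def by (simp add: aff_ray)
qed

text \<open>Both slopes along \<open>d\<close> equal the slope of \<open>f\<close> near infinity, which does not depend on the cell.\<close>

lemma region_slopes_agree:
  assumes \<sigma>: "\<sigma> \<in> \<Delta>" and \<eta>: "\<eta> \<in> \<Delta>" and k: "\<kappa> \<le> \<sigma>" "\<kappa> \<le> \<eta>" "zeta \<kappa> \<inter> Vf = {}"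
    and r1: "r1 \<in> regions \<sigma>" and r2: "r2 \<in> regions \<eta>"
    and x0: "x0 \<in> ineq_set (Theta_ineqs \<eta> \<union> region_ineqs \<sigma> r1 \<union> region_ineqs \<eta> r2)"
    and d: "\<forall>(a,b)\<in>Theta_ineqs \<eta> \<union> region_ineqs \<sigma> r1 \<union> region_ineqs \<eta> r2. 0 \<le> a \<bullet> d"
    and ell: "off_face \<kappa> \<bullet> d \<le> 0"
  shows "real_vec (fst (fst (snd r1))) \<bullet> d = real_vec (fst (fst (snd r2))) \<bullet> d"
proof (cases "d = 0")
  case False
  define c1 where "c1 = fst (snd r1)"
  define c2 where "c2 = fst (snd r2)"
  have dn: "\<And>j. 0 \<le> d$j" and ds: "\<And>j. d$j \<noteq> 0 \<Longrightarrow> j \<in> zeta \<kappa>"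
    using recession_dir_in_face[OF _ d ell] by auto
  have "zeta \<kappa> \<subseteq> Vinf" using zeta_subset[of \<kappa>] k(3) by auto
  then have rd: "rec_dir Vinf zeta \<tau> d" if "\<kappa> \<le> \<tau>" for \<tau>
    unfolding rec_dir_def using False dn ds zeta_mono[OF that] by blast
  have sf: "same_fan_dir Vf zeta \<eta> \<sigma> d" unfolding same_fan_dir_def using k ds by blast
  have ray: "x0 + t *\<^sub>R d \<in> \<Theta> \<eta> \<inter> ineq_set (region_ineqs \<sigma> r1) \<inter> ineq_set (region_ineqs \<eta> r2)"
    if "0 \<le> t" for t
    using ray_in_ineq_set[OF x0 d that] ineq_set_Theta_ineqs by (auto simp: ineq_set_Un)
  have x0T: "x0 \<in> \<Theta> \<eta>" using ray[of 0] by simp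
  have sl\<eta>: "slope_at_infinity (f \<eta>) x0 d (real_vec (fst c2) \<bullet> d)"
  proof (rule slope_at_infinity_affine[where T=0])
    fix t :: real assume t: "0 \<le> t"
    have "x0 + t *\<^sub>R d \<in> \<Theta> \<eta>" "x0 + t *\<^sub>R d \<in> ineq_set (region_ineqs \<eta> r2)" using ray[OF t] by auto
    then have "f \<eta> (x0 + t *\<^sub>R d) = aff c2 (x0 + t *\<^sub>R d)"
      using max_min_form_eq[OF \<eta>] max_min_form_on_region[OF \<eta> r2] unfolding c2_def by metis
    then show "f \<eta> (x0 + t *\<^sub>R d) = aff c2 x0 + t * (real_vec (fst c2) \<bullet> d)" by (simp add: aff_ray)
  qed
  obtain p' where p': "p' \<in> \<Theta> \<sigma>" using Theta_nonempty[OF \<sigma>] by blast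
  obtain c T where cT: "\<And>t. t \<ge> T \<Longrightarrow> max_min_form \<sigma> (p' + t *\<^sub>R d) = c + t * max_min_slope \<sigma> d"
    using max_min_form_eventually_affine[OF \<sigma>] unfolding eventually_at_top_linorder by blast
  have sl\<sigma>: "slope_at_infinity (f \<sigma>) p' d (max_min_slope \<sigma> d)"
  proof (rule slope_at_infinity_affine[where T="max T 0"])
    fix t :: real assume t: "max T 0 \<le> t"
    then have "0 \<le> t" "T \<le> t" by auto
    then show "f \<sigma> (p' + t *\<^sub>R d) = c + t * max_min_slope \<sigma> d"
      using max_min_form_eq[OF \<sigma> Theta_ray[OF p' k(1,3) dn ds]] cT by metis
  qed
  have e2: "real_vec (fst c2) \<bullet> d = max_min_slope \<sigma> d"
    using f_slopes_agree[OF \<eta> \<sigma> x0T p' rd[OF k(2)] rd[OF k(1)] sf sl\<eta> sl\<sigma>] .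
  obtain c' where "\<forall>\<^sub>F t in at_top. max_min_form \<sigma> (x0 + t *\<^sub>R d) = c' + t * max_min_slope \<sigma> d"
    using max_min_form_eventually_affine[OF \<sigma>] by blast
  then have "\<forall>\<^sub>F t in at_top. aff c1 x0 + t * (real_vec (fst c1) \<bullet> d) = c' + t * max_min_slope \<sigma> d"
    using eventually_ge_at_top[of 0]
    by eventually_elim (use max_min_form_on_region[OF \<sigma> r1] ray in \<open>auto simp: c1_def aff_ray\<close>)
  then have e1: "real_vec (fst c1) \<bullet> d = max_min_slope \<sigma> d" by (rule eventually_affine_eq_slope)
  show ?thesis using e1 e2 unfolding c1_def c2_def by simp
qed simp

lemma max_min_form_diff_bound:
  assumes \<sigma>: "\<sigma> \<in> \<Delta>" and \<eta>: "\<eta> \<in> \<Delta>" and k: "\<kappa> \<le> \<sigma>" "\<kappa> \<le> \<eta>" "zeta \<kappa> \<inter> Vf = {}"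
  shows "\<exists>A. \<forall>u\<in>\<Theta> \<eta>. \<bar>max_min_form \<sigma> u - max_min_form \<eta> u\<bar> \<le> A * (off_face \<kappa> \<bullet> u)"
proof -
  define KK where "KK r = Theta_ineqs \<eta> \<union> region_ineqs \<sigma> (fst r) \<union> region_ineqs \<eta> (snd r)" for r
  have KK_Theta: "ineq_set (KK r) \<subseteq> \<Theta> \<eta>" for r
    unfolding KK_def using ineq_set_Theta_ineqs by (auto simp: ineq_set_Un)
  have "\<exists>A\<ge>0. \<forall>r\<in>regions \<sigma> \<times> regions \<eta>. \<forall>y\<in>ineq_set (KK r).
      \<bar>max_min_form \<sigma> y - max_min_form \<eta> y\<bar> \<le> A * (off_face \<kappa> \<bullet> y)"
  proof (rule finite_uniform_bound)
    show "finite (regions \<sigma> \<times> regions \<eta>)" using finite_regions[OF \<sigma>] finite_regions[OF \<eta>] by simp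
    show "0 \<le> off_face \<kappa> \<bullet> y" if "y \<in> ineq_set (KK r)" for r y
      using off_face_nonneg KK_Theta that by blast
    fix r assume "r \<in> regions \<sigma> \<times> regions \<eta>"
    then have r1: "fst r \<in> regions \<sigma>" and r2: "snd r \<in> regions \<eta>" by auto
    define c1 where "c1 = fst (snd (fst r))"
    define c2 where "c2 = fst (snd (snd r))"
    define cv where "cv = real_vec (fst c1) - real_vec (fst c2)"
    define e where "e = real_of_rat (snd c1) - real_of_rat (snd c2)"
    have "max_min_form \<sigma> y - max_min_form \<eta> y = cv \<bullet> y + e" if y: "y \<in> ineq_set (KK r)" for y
    proof -
      have "max_min_form \<sigma> y = aff c1 y" "max_min_form \<eta> y = aff c2 y"
        using max_min_form_on_region[OF \<sigma> r1] max_min_form_on_region[OF \<eta> r2] y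
        unfolding c1_def c2_def KK_def by (auto simp: ineq_set_Un)
      then show ?thesis unfolding cv_def e_def aff_def by (simp add: inner_diff_left)
    qed
    moreover have "\<exists>A. \<forall>y\<in>ineq_set (KK r). \<bar>cv \<bullet> y + e\<bar> \<le> A * (off_face \<kappa> \<bullet> y)"
    proof (rule abs_affine_le_linear)
      show "finite (KK r)"
        unfolding KK_def using finite_Theta_ineqs finite_region_ineqs[OF \<sigma> r1] finite_region_ineqs[OF \<eta> r2] by simp
      show "1 \<le> off_face \<kappa> \<bullet> y" if "y \<in> ineq_set (KK r)" for y
        using one_le_off_face[OF _ k(3)] KK_Theta that by blast
      fix d assume "ineq_set (KK r) \<noteq> {}" "\<forall>(a,b)\<in>KK r. 0 \<le> a \<bullet> d" "off_face \<kappa> \<bullet> d \<le> 0"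
      then have "real_vec (fst c1) \<bullet> d = real_vec (fst c2) \<bullet> d"
        using region_slopes_agree[OF \<sigma> \<eta> k r1 r2] unfolding KK_def c1_def c2_def by blast
      then show "cv \<bullet> d = 0" unfolding cv_def by (simp add: inner_diff_left)
    qed
    ultimately show "\<exists>A. \<forall>y\<in>ineq_set (KK r). \<bar>max_min_form \<sigma> y - max_min_form \<eta> y\<bar> \<le> A * (off_face \<kappa> \<bullet> y)"
      by simp
  qed
  then obtain A where A: "\<forall>r\<in>regions \<sigma> \<times> regions \<eta>. \<forall>y\<in>ineq_set (KK r).
      \<bar>max_min_form \<sigma> y - max_min_form \<eta> y\<bar> \<le> A * (off_face \<kappa> \<bullet> y)" by blast
  have "\<bar>max_min_form \<sigma> u - max_min_form \<eta> u\<bar> \<le> A * (off_face \<kappa> \<bullet> u)" if u: "u \<in> \<Theta> \<eta>" for u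
  proof -
    obtain r1 where r1: "r1 \<in> regions \<sigma>" "u \<in> ineq_set (region_ineqs \<sigma> r1)" using regions_cover[OF \<sigma>] by blast
    obtain r2 where r2: "r2 \<in> regions \<eta>" "u \<in> ineq_set (region_ineqs \<eta> r2)" using regions_cover[OF \<eta>] by blast
    have "u \<in> ineq_set (KK (r1, r2))" unfolding KK_def using u r1 r2 ineq_set_Theta_ineqs by (auto simp: ineq_set_Un)
    then show ?thesis using A r1 r2 by auto
  qed
  then show ?thesis by blast
qed

end

section \<open>Gluing the local max-min forms\<close>

definition norm1 :: "real^'v::finite \<Rightarrow> real" where "norm1 x = (\<Sum>j\<in>UNIV. \<bar>x$j\<bar>)"

lemma Min_lip:
  fixes g1 g2 :: "'i \<Rightarrow> real"
  assumes "finite S" "S \<noteq> {}" "\<And>i. i \<in> S \<Longrightarrow> \<bar>g1 i - g2 i\<bar> \<le> e"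
  shows "\<bar>Min (g1 ` S) - Min (g2 ` S)\<bar> \<le> e"
proof -
  have "Min (g2 ` S) \<in> g2 ` S" using assms by (intro Min_in) auto
  then obtain i2 where i2: "i2 \<in> S" "Min (g2 ` S) = g2 i2" by auto
  have "Min (g1 ` S) \<in> g1 ` S" using assms by (intro Min_in) auto
  then obtain i1 where i1: "i1 \<in> S" "Min (g1 ` S) = g1 i1" by auto
  have "Min (g1 ` S) \<le> g1 i2" using assms i2 by auto
  moreover have "Min (g2 ` S) \<le> g2 i1" using assms i1 by auto
  moreover have "\<bar>g1 i2 - g2 i2\<bar> \<le> e" "\<bar>g1 i1 - g2 i1\<bar> \<le> e" using assms i1 i2 by auto
  ultimately show ?thesis using i1 i2 by linarith
qed

lemma Max_lip:
  fixes g1 g2 :: "'i \<Rightarrow> real"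
  assumes "finite S" "S \<noteq> {}" "\<And>i. i \<in> S \<Longrightarrow> \<bar>g1 i - g2 i\<bar> \<le> e"
  shows "\<bar>Max (g1 ` S) - Max (g2 ` S)\<bar> \<le> e"
proof -
  have "Max (g2 ` S) \<in> g2 ` S" using assms by (intro Max_in) auto
  then obtain i2 where i2: "i2 \<in> S" "Max (g2 ` S) = g2 i2" by auto
  have "Max (g1 ` S) \<in> g1 ` S" using assms by (intro Max_in) auto
  then obtain i1 where i1: "i1 \<in> S" "Max (g1 ` S) = g1 i1" by auto
  have "g1 i2 \<le> Max (g1 ` S)" using assms i2 by auto
  moreover have "g2 i1 \<le> Max (g2 ` S)" using assms i1 by auto
  moreover have "\<bar>g1 i2 - g2 i2\<bar> \<le> e" "\<bar>g1 i1 - g2 i1\<bar> \<le> e" using assms i1 i2 by auto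
  ultimately show ?thesis using i1 i2 by linarith
qed

lemma max_min_lip:
  assumes "finite A" "A \<noteq> {}" "\<And>a. a \<in> A \<Longrightarrow> finite (B a) \<and> B a \<noteq> {}"
    "\<And>a i. a \<in> A \<Longrightarrow> i \<in> B a \<Longrightarrow> \<bar>h1 i - h2 i\<bar> \<le> e"
  shows "\<bar>max_min A B h1 - max_min A B h2\<bar> \<le> e"
  unfolding max_min_def
proof (rule Max_lip[OF assms(1,2)])
  fix a assume a: "a \<in> A"
  show "\<bar>Min (h1 ` B a) - Min (h2 ` B a)\<bar> \<le> e"
    using Min_lip[of "B a" h1 h2 e] assms(3,4)[OF a] by auto
qed

definition coef_norm1 :: "'v::finite piece \<Rightarrow> real" where
  "coef_norm1 i = (\<Sum>j\<in>UNIV. \<bar>real_of_int (fst i $ j)\<bar>)"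

lemma aff_lip:
  fixes x y :: "real^'v::finite" and i :: "(int^'v) \<times> rat"
  shows "\<bar>aff i x - aff i y\<bar> \<le> coef_norm1 i * norm1 (x - y)"
proof -
  have "aff i x - aff i y = (\<Sum>j\<in>UNIV. real_of_int (fst i $ j) * (x - y)$j)"
    unfolding aff_def real_vec_inner by (simp add: sum_subtractf algebra_simps)
  also have "\<bar>\<dots>\<bar> \<le> (\<Sum>j\<in>UNIV. \<bar>real_of_int (fst i $ j)\<bar> * \<bar>(x - y)$j\<bar>)"
    by (rule order_trans[OF sum_abs]) (simp add: abs_mult)
  also have "\<dots> \<le> (\<Sum>j\<in>UNIV. \<bar>real_of_int (fst i $ j)\<bar> * norm1 (x - y))"
  proof (rule sum_mono)
    fix j :: 'v
    have "\<bar>(x - y)$j\<bar> \<le> norm1 (x - y)" unfolding norm1_def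
      by (rule member_le_sum[of j UNIV "\<lambda>j. \<bar>(x - y)$j\<bar>"]) auto
    then show "\<bar>real_of_int (fst i $ j)\<bar> * \<bar>(x - y)$j\<bar> \<le> \<bar>real_of_int (fst i $ j)\<bar> * norm1 (x - y)"
      by (rule mult_left_mono) simp
  qed
  also have "\<dots> = coef_norm1 i * norm1 (x - y)" unfolding coef_norm1_def by (simp add: sum_distrib_right)
  finally show ?thesis .
qed

lemma coef_norm1_nonneg: "0 \<le> coef_norm1 i" unfolding coef_norm1_def by (rule sum_nonneg) simp
lemma norm1_nonneg: "0 \<le> norm1 x" unfolding norm1_def by (rule sum_nonneg) simp

context rat_function begin

definition lip_const :: "'p \<Rightarrow> real" where "lip_const \<tau> = (\<Sum>i\<in>pieces \<tau>. coef_norm1 i)"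

lemma lip_const_nonneg: "0 \<le> lip_const \<tau>" unfolding lip_const_def by (rule sum_nonneg) (rule coef_norm1_nonneg)

lemma max_min_form_lip:
  assumes \<tau>: "\<tau> \<in> \<Delta>"
  shows "\<bar>max_min_form \<tau> x - max_min_form \<tau> y\<bar> \<le> lip_const \<tau> * norm1 (x - y)"
  unfolding max_min_form_def
proof (rule max_min_lip)
  note P = piece_families_props[OF \<tau>]
  show "finite (piece_families \<tau>)" "piece_families \<tau> \<noteq> {}" using P by auto
  show "\<And>a. a \<in> piece_families \<tau> \<Longrightarrow> finite (id a) \<and> id a \<noteq> {}" using P(3) by auto
  fix a i assume a: "a \<in> piece_families \<tau>" and i: "i \<in> id a"
  then have iI: "i \<in> pieces \<tau>" using P(3)[OF a] by auto
  have "coef_norm1 i \<le> lip_const \<tau>" unfolding lip_const_def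
    by (rule member_le_sum[OF iI]) (use coef_norm1_nonneg pieces(1)[OF \<tau>] in auto)
  then have "coef_norm1 i * norm1 (x - y) \<le> lip_const \<tau> * norm1 (x - y)" by (rule mult_right_mono) (rule norm1_nonneg)
  then show "\<bar>aff i x - aff i y\<bar> \<le> lip_const \<tau> * norm1 (x - y)" using aff_lip[of i x y] by linarith
qed

definition face_with :: "'p \<Rightarrow> 'v set \<Rightarrow> 'p" where "face_with \<eta> J = (SOME \<rho>. \<rho> \<le> \<eta> \<and> zeta \<rho> = J)"

lemma face_with: assumes "J \<subseteq> zeta \<eta>" shows "face_with \<eta> J \<le> \<eta>" "zeta (face_with \<eta> J) = J"
proof -
  have "\<exists>\<rho>. \<rho> \<le> \<eta> \<and> zeta \<rho> = J" using face_ex[OF assms] by blast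
  from someI_ex[OF this] show "face_with \<eta> J \<le> \<eta>" "zeta (face_with \<eta> J) = J" unfolding face_with_def by auto
qed

lemma face_with_empty: "face_with \<eta> {} \<le> \<sigma>"
proof -
  obtain z where z: "zeta z = {}" "\<forall>\<tau>. z \<le> \<tau>" using bottom_ex by blast
  have "face_with \<eta> {} = z" using face_unique[OF face_with(1)[of "{}" \<eta>] z(2)[rule_format, of \<eta>]] face_with(2)[of "{}" \<eta>] z(1) by simp
  then show ?thesis using z(2) by simp
qed

definition faces_not_below :: "'p \<Rightarrow> 'p set" where "faces_not_below \<sigma> = {\<rho>. zeta \<rho> \<noteq> {} \<and> \<not> \<rho> \<le> \<sigma>}"

text \<open>The penalty vanishes on \<open>\<Theta> \<sigma>\<close>; on \<open>\<Theta> \<eta>\<close> it controls the mass of \<open>u\<close> outside a suitable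
  face of \<open>\<eta>\<close> below \<open>\<sigma>\<close> (\<open>penalty_threshold\<close>).\<close>

definition penalty :: "'p \<Rightarrow> 'p \<Rightarrow> real^'v \<Rightarrow> real" where
  "penalty \<sigma> \<eta> u = (\<Sum>\<rho>\<in>faces_not_below \<sigma>. face_min \<rho> \<eta> u)"

lemma penalty_nonneg: "u \<in> \<Theta> \<eta> \<Longrightarrow> 0 \<le> penalty \<sigma> \<eta> u"
  unfolding penalty_def faces_not_below_def by (rule sum_nonneg) (use face_min_nonneg in auto)

lemma penalty_self: "penalty \<eta> \<eta> u = 0"
  unfolding penalty_def faces_not_below_def face_min_def by (rule sum.neutral) auto

lemma penalty_ge: assumes "u \<in> \<Theta> \<eta>" "\<rho> \<in> faces_not_below \<sigma>" shows "face_min \<rho> \<eta> u \<le> penalty \<sigma> \<eta> u"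
  unfolding penalty_def by (rule member_le_sum[OF assms(2)]) (use face_min_nonneg assms(1) in \<open>auto simp: faces_not_below_def\<close>)

end

context rat_function begin

lemma sum_outside_le:
  fixes u :: "real^'v" and J :: "'v set"
  assumes "\<And>j. j \<notin> J \<Longrightarrow> u$j \<le> t" "0 \<le> t"
  shows "(\<Sum>j\<in>- J. u$j) \<le> real CARD('v) * t"
proof -
  have "(\<Sum>j\<in>- J. u$j) \<le> real (card (- J)) * t" using sum_mono[of "- J" "\<lambda>j. u$j" "\<lambda>_. t"] assms(1) by simp
  also have "\<dots> \<le> real CARD('v) * t" using assms(2) card_mono[of UNIV "- J"] by (intro mult_right_mono) auto
  finally show ?thesis .
qed

lemma max_min_form_eq_on_common_face:
  assumes "\<sigma> \<in> \<Delta>" "\<eta> \<in> \<Delta>" "\<rho> \<in> \<Delta>" "\<rho> \<le> \<sigma>" "\<rho> \<le> \<eta>" "v \<in> \<Theta> \<rho>"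
  shows "max_min_form \<sigma> v = f \<eta> v"
proof -
  have "max_min_form \<sigma> v = f \<sigma> v" using max_min_form_eq[OF assms(1)] Theta_mono[OF assms(4)] assms(6) by auto
  also have "\<dots> = f \<rho> v" using f_restrict[OF assms(3,1,4,6)] by simp
  also have "\<dots> = f \<eta> v" using f_restrict[OF assms(3,2,5,6)] .
  finally show ?thesis .
qed

lemma upper_level_set_subset_zeta:
  assumes "u \<in> \<Theta> \<eta>" "0 < t"
  shows "{j. t \<le> u$j} \<subseteq> zeta \<eta>"
  using ThetaD(1)[OF assms(1)] assms(2) by force

text \<open>Move the mass of \<open>u\<close> outside \<open>J\<close> to the vertex \<open>a\<close>.\<close>

lemma project_to_face:
  assumes u: "u \<in> \<Theta> \<eta>" and J: "J \<subseteq> zeta \<eta>" and a: "a \<in> J" "a \<in> Vf"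
  shows "\<exists>v\<in>\<Theta> (face_with \<eta> J). norm1 (u - v) \<le> 2 * (\<Sum>j\<in>- J. u$j)"
proof -
  have un: "\<And>j. 0 \<le> u$j" using ThetaD(2)[OF u] .
  define s where "s = (\<Sum>j\<in>Vf - J. u$j)"
  have s0: "0 \<le> s" unfolding s_def using un by (simp add: sum_nonneg)
  have sle: "s \<le> (\<Sum>j\<in>- J. u$j)" unfolding s_def by (rule sum_mono2) (use un in auto)
  define v where "v = (\<chi> j. if j \<in> J then u$j else 0) + s *\<^sub>R axis a 1"
  have "v \<in> \<Theta> (face_with \<eta> J)"
  proof (rule ThetaI)
    show "\<And>j. j \<notin> zeta (face_with \<eta> J) \<Longrightarrow> v $ j = 0"
      unfolding v_def face_with(2)[OF J] using a(1) by (auto simp: axis_def)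
    show "\<And>j. 0 \<le> v $ j" unfolding v_def using un s0 by (auto simp: axis_def)
    have "(\<Sum>j\<in>Vf. s * (if j = a then 1 else 0)) = (\<Sum>j\<in>Vf. if j = a then s else 0)"
      by (rule sum.cong) auto
    then have "(\<Sum>j\<in>Vf. v$j) = (\<Sum>j\<in>Vf. if j \<in> J then u$j else 0) + s"
      unfolding v_def using a(2) by (simp add: sum.distrib axis_def)
    also have "\<dots> = (\<Sum>j\<in>Vf \<inter> J. u$j) + (\<Sum>j\<in>Vf - J. u$j)"
      unfolding s_def by (simp add: sum.If_cases Int_commute)
    also have "\<dots> = 1" using sum.Int_Diff[of Vf "\<lambda>j. u$j" J] sum_Vf[OF u] by simp
    finally show "(\<Sum>j\<in>Vf. v$j) = 1" .
  qed
  moreover have "norm1 (u - v) \<le> 2 * (\<Sum>j\<in>- J. u$j)"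
  proof -
    have "norm1 (u - v) \<le> (\<Sum>j\<in>UNIV. (if j \<in> J then 0 else u$j) + (if j = a then s else 0))"
      unfolding norm1_def v_def by (rule sum_mono) (use s0 un a(1) in \<open>auto simp: axis_def\<close>)
    also have "\<dots> = (\<Sum>j\<in>- J. u$j) + s"
      by (simp add: sum.distrib sum.If_cases Compl_eq_Diff_UNIV)
    finally show ?thesis using sle by simp
  qed
  ultimately show ?thesis by blast
qed

text \<open>The threshold \<open>ts\<close> is the largest coordinate value of \<open>u\<close> whose upper level set spans a face
  not below \<open>\<sigma>\<close>; that face contributes at least \<open>ts\<close> to the penalty.\<close>

lemma penalty_threshold:
  assumes u: "u \<in> \<Theta> \<eta>"
  obtains (support) "face_with \<eta> {j. 0 < u$j} \<le> \<sigma>"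
    | (threshold) ts where "0 < ts" "ts \<le> penalty \<sigma> \<eta> u" "face_with \<eta> {j. ts < u$j} \<le> \<sigma>"
proof -
  have un: "\<And>j. 0 \<le> u$j" using ThetaD(2)[OF u] .
  define W where "W = {t. \<exists>j. t = u$j \<and> 0 < t \<and> \<not> face_with \<eta> {i. t \<le> u$i} \<le> \<sigma>}"
  have fW: "finite W" by (rule finite_subset[of _ "range (\<lambda>j. u$j)"]) (auto simp: W_def)
  have below: "face_with \<eta> J \<le> \<sigma>" if J: "J = {j. t0 < u$j}" "\<forall>t\<in>W. t \<le> t0" "0 \<le> t0" for J t0
  proof (cases "J = {}")
    case False
    define t' where "t' = Min ((\<lambda>j. u$j) ` J)"
    have "t' \<in> (\<lambda>j. u$j) ` J" unfolding t'_def using False by simp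
    then obtain j' where j': "j' \<in> J" "t' = u$j'" by auto
    have "t' \<le> u$i" if "i \<in> J" for i unfolding t'_def using that by (intro Min_le) auto
    then have "{i. t' \<le> u$i} = J" using j' J(1) by fastforce
    moreover have "t' \<notin> W" using J j' by fastforce
    ultimately show ?thesis using j' J(1,3) unfolding W_def by auto
  qed (use face_with_empty in simp)
  show thesis
  proof (cases "W = {}")
    case True
    then show thesis using below[of "{j. 0 < u$j}" 0] support by simp
  next
    case False
    define ts where "ts = Max W"
    have "ts \<in> W" unfolding ts_def using fW False by simp
    then obtain js where js: "ts = u$js" "0 < ts" "\<not> face_with \<eta> {i. ts \<le> u$i} \<le> \<sigma>" unfolding W_def by blast
    define Js where "Js = {i. ts \<le> u$i}"
    have Js: "Js \<subseteq> zeta \<eta>" unfolding Js_def by (rule upper_level_set_subset_zeta[OF u js(2)])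
    have "face_with \<eta> Js \<in> faces_not_below \<sigma>"
      unfolding faces_not_below_def using face_with(2)[OF Js] js unfolding Js_def by auto
    moreover have "ts \<le> face_min (face_with \<eta> Js) \<eta> u"
      using face_with[OF Js] js(1) by (intro face_min_ge) (auto simp: Js_def)
    ultimately have "ts \<le> penalty \<sigma> \<eta> u" using penalty_ge[OF u] by (meson order_trans)
    moreover have "face_with \<eta> {j. ts < u$j} \<le> \<sigma>"
      using below[of _ ts] fW js(2) unfolding ts_def by simp
    ultimately show thesis using threshold js(2) by blast
  qed
qed

text \<open>Near a face below both \<open>\<sigma>\<close> and \<open>\<eta>\<close> the two max-min forms are close: they agree on the face,
  and the distance to it is measured by the mass of \<open>u\<close> outside its vertex set \<open>J\<close>. If the face lies
  at infinity, the bound \<open>A * off_face\<close> takes over the role of the Lipschitz estimate.\<close>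

lemma max_min_form_diff_near_face:
  assumes \<sigma>: "\<sigma> \<in> \<Delta>" and \<eta>: "\<eta> \<in> \<Delta>" and u: "u \<in> \<Theta> \<eta>"
    and J: "J \<subseteq> zeta \<eta>" "face_with \<eta> J \<le> \<sigma>"
    and Lip: "\<And>x y. \<bar>(max_min_form \<sigma> x - max_min_form \<eta> x) - (max_min_form \<sigma> y - max_min_form \<eta> y)\<bar> \<le> \<Lambda> * norm1 (x - y)"
    and L0: "0 \<le> \<Lambda>"
    and BF: "\<And>\<kappa> x. \<kappa> \<le> \<sigma> \<Longrightarrow> \<kappa> \<le> \<eta> \<Longrightarrow> zeta \<kappa> \<inter> Vf = {} \<Longrightarrow> x \<in> \<Theta> \<eta> \<Longrightarrow>
              \<bar>max_min_form \<sigma> x - max_min_form \<eta> x\<bar> \<le> A * (off_face \<kappa> \<bullet> x)"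
    and A0: "0 \<le> A"
  shows "\<bar>max_min_form \<sigma> u - max_min_form \<eta> u\<bar> \<le> (2 * \<Lambda> + A) * (\<Sum>j\<in>- J. u$j)"
proof -
  have \<kappa>: "face_with \<eta> J \<le> \<eta>" "zeta (face_with \<eta> J) = J" using face_with[OF J(1)] by auto
  have out0: "0 \<le> (\<Sum>j\<in>- J. u$j)" using ThetaD(2)[OF u] by (simp add: sum_nonneg)
  show ?thesis
  proof (cases "J \<inter> Vf = {}")
    case True
    have "off_face (face_with \<eta> J) \<bullet> u = (\<Sum>j\<in>- J. u$j)"
      unfolding off_face_inner \<kappa>(2) by (simp add: sum.If_cases Compl_eq_Diff_UNIV)
    then have "\<bar>max_min_form \<sigma> u - max_min_form \<eta> u\<bar> \<le> A * (\<Sum>j\<in>- J. u$j)"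
      using BF[OF J(2) \<kappa>(1) _ u] True \<kappa>(2) by simp
    also have "\<dots> \<le> (2 * \<Lambda> + A) * (\<Sum>j\<in>- J. u$j)" using L0 out0 by (intro mult_right_mono) auto
    finally show ?thesis .
  next
    case False
    then obtain a where a: "a \<in> J" "a \<in> Vf" by auto
    obtain v where v: "v \<in> \<Theta> (face_with \<eta> J)" "norm1 (u - v) \<le> 2 * (\<Sum>j\<in>- J. u$j)"
      using project_to_face[OF u J(1) a] by blast
    have "max_min_form \<sigma> v = max_min_form \<eta> v"
      using max_min_form_eq_on_common_face[OF \<sigma> \<eta> Delta_if_Theta[OF v(1)] J(2) \<kappa>(1) v(1)]
        max_min_form_eq[OF \<eta>] Theta_mono[OF \<kappa>(1)] v(1) by auto
    then have "\<bar>max_min_form \<sigma> u - max_min_form \<eta> u\<bar> \<le> \<Lambda> * norm1 (u - v)" using Lip[of u v] by simp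
    also have "\<dots> \<le> \<Lambda> * (2 * (\<Sum>j\<in>- J. u$j))" using v(2) L0 by (rule mult_left_mono)
    also have "\<dots> \<le> (2 * \<Lambda> + A) * (\<Sum>j\<in>- J. u$j)" using A0 out0 by (simp add: algebra_simps)
    finally show ?thesis .
  qed
qed

lemma max_min_form_le_penalty:
  assumes \<sigma>: "\<sigma> \<in> \<Delta>" and \<eta>: "\<eta> \<in> \<Delta>" and u: "u \<in> \<Theta> \<eta>"
    and Lip: "\<And>x y. \<bar>(max_min_form \<sigma> x - max_min_form \<eta> x) - (max_min_form \<sigma> y - max_min_form \<eta> y)\<bar> \<le> \<Lambda> * norm1 (x - y)"
    and L0: "0 \<le> \<Lambda>"
    and BF: "\<And>\<kappa> x. \<kappa> \<le> \<sigma> \<Longrightarrow> \<kappa> \<le> \<eta> \<Longrightarrow> zeta \<kappa> \<inter> Vf = {} \<Longrightarrow> x \<in> \<Theta> \<eta> \<Longrightarrow>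
              \<bar>max_min_form \<sigma> x - max_min_form \<eta> x\<bar> \<le> A * (off_face \<kappa> \<bullet> x)"
    and A0: "0 \<le> A"
  shows "max_min_form \<sigma> u - f \<eta> u \<le> (2 * real CARD('v) * \<Lambda> + real CARD('v) * A) * penalty \<sigma> \<eta> u"
proof -
  define N where "N = real CARD('v)"
  have ps0: "0 \<le> penalty \<sigma> \<eta> u" by (rule penalty_nonneg[OF u])
  have un: "\<And>j. 0 \<le> u$j" using ThetaD(2)[OF u] .
  from u show ?thesis
  proof (cases rule: penalty_threshold[where \<sigma>=\<sigma>])
    case support
    define J where "J = {j. 0 < u$j}"
    have J: "J \<subseteq> zeta \<eta>" using ThetaD(1)[OF u] unfolding J_def by force
    have uJ: "u \<in> \<Theta> (face_with \<eta> J)"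
      by (rule ThetaI) (use face_with(2)[OF J] un sum_Vf[OF u] in \<open>auto simp: J_def order_le_less\<close>)
    then have "max_min_form \<sigma> u = f \<eta> u"
      using max_min_form_eq_on_common_face[OF \<sigma> \<eta> Delta_if_Theta[OF uJ] _ face_with(1)[OF J] uJ] support
      unfolding J_def by simp
    then show ?thesis using N_def L0 A0 ps0 by simp
  next
    case (threshold ts)
    define J where "J = {j. ts < u$j}"
    have J: "J \<subseteq> zeta \<eta>" using upper_level_set_subset_zeta[OF u threshold(1)] unfolding J_def by auto
    have "(\<Sum>j\<in>- J. u$j) \<le> N * ts" unfolding N_def using threshold(1) by (intro sum_outside_le) (auto simp: J_def)
    also have "\<dots> \<le> N * penalty \<sigma> \<eta> u" using threshold(2) unfolding N_def by (simp add: mult_left_mono)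
    finally have "(2 * \<Lambda> + A) * (\<Sum>j\<in>- J. u$j) \<le> (2 * \<Lambda> + A) * (N * penalty \<sigma> \<eta> u)"
      using L0 A0 by (intro mult_left_mono) auto
    then have "\<bar>max_min_form \<sigma> u - max_min_form \<eta> u\<bar> \<le> (2 * \<Lambda> + A) * (N * penalty \<sigma> \<eta> u)"
      using max_min_form_diff_near_face[OF \<sigma> \<eta> u J _ Lip L0 BF A0] threshold(3) unfolding J_def by fastforce
    then show ?thesis using max_min_form_eq[OF \<eta> u] unfolding N_def by (simp add: algebra_simps)
  qed
qed
end

context polyhedral_complex begin

definition nonempty_faces :: "'p list" where "nonempty_faces = (SOME xs. set xs = {\<rho>. zeta \<rho> \<noteq> {}} \<and> distinct xs)"

lemma nonempty_faces: "set nonempty_faces = {\<rho>. zeta \<rho> \<noteq> {}}"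
proof -
  have "\<exists>xs. set xs = {\<rho>. zeta \<rho> \<noteq> {}} \<and> distinct xs" by (rule finite_distinct_list) simp
  from someI_ex[OF this] show ?thesis unfolding nonempty_faces_def by blast
qed

definition generators :: "('p \<Rightarrow> real^'v \<Rightarrow> real) list" where "generators = map face_min nonempty_faces"

lemma face_min_in_trop_closure: assumes "zeta \<rho> \<noteq> {}" shows "face_min \<rho> \<in> trop_closure generators"
proof -
  have "\<rho> \<in> set nonempty_faces" using nonempty_faces assms by simp
  then obtain k where k: "k < length nonempty_faces" "nonempty_faces ! k = \<rho>" by (auto simp: in_set_conv_nth)
  then have e: "generators ! k = face_min \<rho>" unfolding generators_def by simp
  have "k < length generators" using k unfolding generators_def by simp
  then have "generators ! k \<in> trop_closure generators" by (rule trop_closure.gen)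
  then show ?thesis unfolding e .
qed

definition vertex_face :: "'v \<Rightarrow> 'p" where "vertex_face j = (THE \<rho>. zeta \<rho> = {j})"

lemma vertex_face: "j \<in> V \<Longrightarrow> zeta (vertex_face j) = {j}"
  unfolding vertex_face_def by (rule theI') (rule vertex_unique)

definition coord_fun :: "'v \<Rightarrow> 'p \<Rightarrow> real^'v \<Rightarrow> real" where
  "coord_fun j = (\<lambda>\<eta> u. if j \<in> V then face_min (vertex_face j) \<eta> u else 0)"

lemma coord_fun_in_trop_closure: "coord_fun j \<in> trop_closure generators"
proof (cases "j \<in> V")
  case True
  then have "coord_fun j = face_min (vertex_face j)" unfolding coord_fun_def by auto
  then show ?thesis using face_min_in_trop_closure[of "vertex_face j"] vertex_face[OF True] by simp
next
  case False
  then have "coord_fun j = (\<lambda>\<eta> u. 0)" unfolding coord_fun_def by auto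
  then show ?thesis using trop_closure_zero by simp
qed

lemma coord_fun_val: assumes u: "u \<in> \<Theta> \<eta>" shows "coord_fun j \<eta> u = u$j"
proof (cases "j \<in> V")
  case True
  note z = vertex_face[OF True]
  show ?thesis
  proof (cases "vertex_face j \<le> \<eta>")
    case True
    then show ?thesis unfolding coord_fun_def face_min_def z using \<open>j \<in> V\<close> by simp
  next
    case False
    have "j \<notin> zeta \<eta>" using vertex_le[of j \<eta> "vertex_face j"] z False by auto
    then have "u$j = 0" using ThetaD(1)[OF u] by simp
    then show ?thesis unfolding coord_fun_def face_min_def using False True by simp
  qed
next
  case False
  then have "j \<notin> zeta \<eta>" using zeta_subset[of \<eta>] by auto
  then have "u$j = 0" using ThetaD(1)[OF u] by simp
  then show ?thesis unfolding coord_fun_def using False by simp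
qed

definition aff_expr :: "'v piece \<Rightarrow> 'p \<Rightarrow> real^'v \<Rightarrow> real" where
  "aff_expr i = (\<lambda>\<eta> u. (\<Sum>j\<in>UNIV. real_of_int (fst i $ j) * coord_fun j \<eta> u) + real_of_rat (snd i))"

lemma aff_expr_in_trop_closure: "aff_expr i \<in> trop_closure generators"
proof -
  have "(\<lambda>\<eta> u. \<Sum>j\<in>UNIV. real_of_int (fst i $ j) * coord_fun j \<eta> u) \<in> trop_closure generators"
    by (rule trop_closure_sum) (auto intro: trop_closure_of_int_mult coord_fun_in_trop_closure)
  then show ?thesis unfolding aff_expr_def by (intro trop_closure.add trop_closure.const)
qed

lemma aff_expr_val: assumes "u \<in> \<Theta> \<eta>" shows "aff_expr i \<eta> u = aff i u"
  unfolding aff_expr_def aff_def real_vec_inner using coord_fun_val[OF assms] by simp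

end

context rat_function begin

definition max_min_expr :: "'p \<Rightarrow> 'p \<Rightarrow> real^'v \<Rightarrow> real" where
  "max_min_expr \<sigma> = (\<lambda>\<eta> u. Max ((\<lambda>S. Min ((\<lambda>i. aff_expr i \<eta> u) ` S)) ` piece_families \<sigma>))"

lemma max_min_expr_in_trop_closure: assumes \<sigma>: "\<sigma> \<in> \<Delta>" shows "max_min_expr \<sigma> \<in> trop_closure generators"
  unfolding max_min_expr_def
proof (rule trop_closure_Max)
  note P = piece_families_props[OF \<sigma>]
  show "finite (piece_families \<sigma>)" "piece_families \<sigma> \<noteq> {}" using P by auto
  fix S assume S: "S \<in> piece_families \<sigma>"
  show "(\<lambda>\<eta> u. Min ((\<lambda>i. aff_expr i \<eta> u) ` S)) \<in> trop_closure generators"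
    by (rule trop_closure_Min) (use P(3)[OF S] aff_expr_in_trop_closure in auto)
qed

lemma max_min_expr_val: assumes "u \<in> \<Theta> \<eta>" shows "max_min_expr \<sigma> \<eta> u = max_min_form \<sigma> u"
  unfolding max_min_expr_def max_min_form_def max_min_def using aff_expr_val[OF assms] by simp

lemma penalty_in_trop_closure: "penalty \<sigma> \<in> trop_closure generators"
proof -
  have "(\<lambda>\<eta> u. \<Sum>\<rho>\<in>faces_not_below \<sigma>. face_min \<rho> \<eta> u) \<in> trop_closure generators"
    by (rule trop_closure_sum) (auto simp: faces_not_below_def intro: face_min_in_trop_closure)
  moreover have "penalty \<sigma> = (\<lambda>\<eta> u. \<Sum>\<rho>\<in>faces_not_below \<sigma>. face_min \<rho> \<eta> u)" unfolding penalty_def by (intro ext) simp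
  ultimately show ?thesis by simp
qed

lemma max_min_form_diff_lip:
  assumes "\<sigma> \<in> \<Delta>" "\<eta> \<in> \<Delta>"
  shows "\<bar>(max_min_form \<sigma> x - max_min_form \<eta> x) - (max_min_form \<sigma> y - max_min_form \<eta> y)\<bar> \<le> (lip_const \<sigma> + lip_const \<eta>) * norm1 (x - y)"
proof -
  have "\<bar>max_min_form \<sigma> x - max_min_form \<sigma> y\<bar> \<le> lip_const \<sigma> * norm1 (x - y)" by (rule max_min_form_lip[OF assms(1)])
  moreover have "\<bar>max_min_form \<eta> x - max_min_form \<eta> y\<bar> \<le> lip_const \<eta> * norm1 (x - y)" by (rule max_min_form_lip[OF assms(2)])
  moreover have "(max_min_form \<sigma> x - max_min_form \<eta> x) - (max_min_form \<sigma> y - max_min_form \<eta> y) = (max_min_form \<sigma> x - max_min_form \<sigma> y) - (max_min_form \<eta> x - max_min_form \<eta> y)" by simp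
  moreover have "\<bar>(max_min_form \<sigma> x - max_min_form \<sigma> y) - (max_min_form \<eta> x - max_min_form \<eta> y)\<bar> \<le> \<bar>max_min_form \<sigma> x - max_min_form \<sigma> y\<bar> + \<bar>max_min_form \<eta> x - max_min_form \<eta> y\<bar>"
    by (rule abs_triangle_ineq4)
  moreover have "(lip_const \<sigma> + lip_const \<eta>) * norm1 (x - y) = lip_const \<sigma> * norm1 (x - y) + lip_const \<eta> * norm1 (x - y)"
    by (simp add: distrib_right)
  ultimately show ?thesis by linarith
qed

lemma penalty_bound:
  "\<exists>K::nat. \<forall>\<sigma>\<in>\<Delta>. \<forall>\<eta>\<in>\<Delta>. \<forall>u\<in>\<Theta> \<eta>. max_min_form \<sigma> u - f \<eta> u \<le> real K * penalty \<sigma> \<eta> u"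
proof -
  have "\<exists>K\<ge>0. \<forall>r\<in>\<Delta> \<times> \<Delta>. \<forall>u\<in>\<Theta> (snd r). max_min_form (fst r) u - f (snd r) u \<le> K * penalty (fst r) (snd r) u"
  proof (rule finite_uniform_bound)
    show "finite (\<Delta> \<times> \<Delta>)" by simp
    show "0 \<le> penalty (fst r) (snd r) u" if "u \<in> \<Theta> (snd r)" for r u using penalty_nonneg[OF that] .
    fix r assume "r \<in> \<Delta> \<times> \<Delta>"
    then obtain \<sigma> \<eta> where r: "r = (\<sigma>, \<eta>)" "\<sigma> \<in> \<Delta>" "\<eta> \<in> \<Delta>" by auto
    obtain A where A0: "0 \<le> A" and A: "\<forall>\<kappa>\<in>{\<kappa>. \<kappa> \<le> \<sigma> \<and> \<kappa> \<le> \<eta> \<and> zeta \<kappa> \<inter> Vf = {}}. \<forall>x\<in>\<Theta> \<eta>.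
        \<bar>max_min_form \<sigma> x - max_min_form \<eta> x\<bar> \<le> A * (off_face \<kappa> \<bullet> x)"
      using finite_uniform_bound[of "{\<kappa>. \<kappa> \<le> \<sigma> \<and> \<kappa> \<le> \<eta> \<and> zeta \<kappa> \<inter> Vf = {}}" "\<lambda>_. \<Theta> \<eta>"
          "\<lambda>_ x. \<bar>max_min_form \<sigma> x - max_min_form \<eta> x\<bar>" "\<lambda>\<kappa> x. off_face \<kappa> \<bullet> x"]
        max_min_form_diff_bound[OF r(2,3)] off_face_nonneg by auto
    have "max_min_form \<sigma> u - f \<eta> u \<le> (2 * real CARD('v) * (lip_const \<sigma> + lip_const \<eta>) + real CARD('v) * A) * penalty \<sigma> \<eta> u"
      if "u \<in> \<Theta> \<eta>" for u
      using lip_const_nonneg[of \<sigma>] lip_const_nonneg[of \<eta>] A A0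
      by (intro max_min_form_le_penalty[OF r(2,3) that max_min_form_diff_lip[OF r(2,3)]]) auto
    then show "\<exists>K. \<forall>u\<in>\<Theta> (snd r). max_min_form (fst r) u - f (snd r) u \<le> K * penalty (fst r) (snd r) u"
      unfolding r(1) by auto
  qed
  then obtain K where K: "\<forall>\<sigma>\<in>\<Delta>. \<forall>\<eta>\<in>\<Delta>. \<forall>u\<in>\<Theta> \<eta>. max_min_form \<sigma> u - f \<eta> u \<le> K * penalty \<sigma> \<eta> u"
    by auto
  have "K * penalty \<sigma> \<eta> u \<le> real (nat \<lceil>K\<rceil>) * penalty \<sigma> \<eta> u" if "u \<in> \<Theta> \<eta>" for \<sigma> \<eta> u
    using penalty_nonneg[OF that] by (intro mult_right_mono) linarith+
  then show ?thesis using K by (meson order_trans)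
qed

lemma f_in_trop_closure:
  "\<exists>G\<in>trop_closure generators. \<forall>\<eta>\<in>\<Delta>. \<forall>u\<in>\<Theta> \<eta>. G \<eta> u = f \<eta> u"
proof -
  obtain K :: nat where K: "\<forall>\<sigma>\<in>\<Delta>. \<forall>\<eta>\<in>\<Delta>. \<forall>u\<in>\<Theta> \<eta>. max_min_form \<sigma> u - f \<eta> u \<le> real K * penalty \<sigma> \<eta> u"
    using penalty_bound by blast
  define G where "G = (\<lambda>\<eta> u. Max ((\<lambda>\<sigma>. max_min_expr \<sigma> \<eta> u - real K * penalty \<sigma> \<eta> u) ` \<Delta>))"
  have "G \<in> trop_closure generators" unfolding G_def
  proof (rule trop_closure_Max)
    show "finite \<Delta>" "\<Delta> \<noteq> {}" using Delta_nonempty by auto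
    show "(\<lambda>\<eta> u. max_min_expr \<sigma> \<eta> u - real K * penalty \<sigma> \<eta> u) \<in> trop_closure generators" if "\<sigma> \<in> \<Delta>" for \<sigma>
      by (intro trop_closure_diff trop_closure_of_nat_mult max_min_expr_in_trop_closure[OF that] penalty_in_trop_closure)
  qed
  moreover have "\<forall>\<eta>\<in>\<Delta>. \<forall>u\<in>\<Theta> \<eta>. G \<eta> u = f \<eta> u"
  proof (intro ballI)
    fix \<eta> u assume \<eta>: "\<eta> \<in> \<Delta>" and u: "u \<in> \<Theta> \<eta>"
    have "max_min_expr \<eta> \<eta> u - real K * penalty \<eta> \<eta> u = f \<eta> u"
      using max_min_expr_val[OF u] max_min_form_eq[OF \<eta> u] penalty_self by simp
    moreover have "max_min_expr \<sigma> \<eta> u - real K * penalty \<sigma> \<eta> u \<le> f \<eta> u" if "\<sigma> \<in> \<Delta>" for \<sigma>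
      using K that \<eta> u max_min_expr_val[OF u] by fastforce
    ultimately show "G \<eta> u = f \<eta> u" unfolding G_def using \<eta> by (intro Max_eqI) (auto intro: rev_image_eqI)
  qed
  ultimately show ?thesis by blast
qed

end

context polyhedral_complex begin

lemma generators_in_RatD: "set (ereal_list generators) \<subseteq> RatD Vf Vinf zeta"
  using face_min_in_RatD nonempty_faces unfolding generators_def by auto

lemma trop_closure_trop_eval:
  assumes "G \<in> trop_closure generators"
  shows "\<exists>p q. (\<exists>\<tau>\<in>\<Delta>. \<exists>u\<in>\<Theta> \<tau>. trop_eval q (ereal_list generators) \<tau> u \<noteq> \<infinity>) \<and>
    (\<forall>\<tau>\<in>\<Delta>. \<forall>u\<in>\<Theta> \<tau>. ereal (G \<tau> u) = trop_eval p (ereal_list generators) \<tau> u - trop_eval q (ereal_list generators) \<tau> u)"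
proof -
  obtain P Q where PQ: "P \<noteq> []" "Q \<noteq> []" "\<forall>\<eta> u. G \<eta> u = trop_min P generators \<eta> u - trop_min Q generators \<eta> u"
    using trop_closure_diff_rep[OF assms] by blast
  obtain \<tau> u where "\<tau> \<in> \<Delta>" "u \<in> \<Theta> \<tau>" using Delta_nonempty Theta_nonempty by blast
  then show ?thesis using PQ by (intro exI[of _ P] exI[of _ Q]) (auto simp: trop_eval_eq_trop_min)
qed

lemma infinity_trop_eval:
  "(\<exists>\<tau>\<in>\<Delta>. \<exists>u\<in>\<Theta> \<tau>. trop_eval [(0, \<lambda>_. 0)] ss \<tau> u \<noteq> \<infinity>) \<and>
   (\<forall>\<tau>\<in>\<Delta>. \<forall>u\<in>\<Theta> \<tau>. \<infinity> = trop_eval [] ss \<tau> u - trop_eval [(0, \<lambda>_. 0)] ss \<tau> u)"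
proof -
  have "trop_eval [(0, \<lambda>_. 0)] ss \<tau> u = 0" for \<tau> u
    unfolding trop_eval_def by (simp add: zero_ereal_def[symmetric])
  moreover obtain \<tau> u where "\<tau> \<in> \<Delta>" "u \<in> \<Theta> \<tau>" using Delta_nonempty Theta_nonempty by blast
  ultimately show ?thesis by (auto simp: trop_eval_Nil)
qed

end

theorem theorem1p2:
  fixes Vf Vinf :: "'v::finite set" and zeta :: "'p::{finite,order} \<Rightarrow> 'v set"
  assumes "apc_data Vf Vinf zeta"
  shows "\<exists>ss :: ('p \<Rightarrow> real^'v \<Rightarrow> ereal) list. set ss \<subseteq> RatD Vf Vinf zeta \<and>
           (\<forall>F\<in>RatD Vf Vinf zeta. \<exists>p q.
              (\<exists>\<tau>\<in>cDelta Vf zeta. \<exists>u\<in>Theta Vf zeta \<tau>. trop_eval q ss \<tau> u \<noteq> \<infinity>) \<and>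
              (\<forall>\<tau>\<in>cDelta Vf zeta. \<forall>u\<in>Theta Vf zeta \<tau>.
                  F \<tau> u = trop_eval p ss \<tau> u - trop_eval q ss \<tau> u))"
proof -
  interpret polyhedral_complex Vf Vinf zeta by unfold_locales (rule assms)
  have "\<exists>p q. (\<exists>\<tau>\<in>\<Delta>. \<exists>u\<in>\<Theta> \<tau>. trop_eval q (ereal_list generators) \<tau> u \<noteq> \<infinity>) \<and>
      (\<forall>\<tau>\<in>\<Delta>. \<forall>u\<in>\<Theta> \<tau>. F \<tau> u = trop_eval p (ereal_list generators) \<tau> u - trop_eval q (ereal_list generators) \<tau> u)"
    if "F \<in> RatD Vf Vinf zeta" for F
    using that unfolding RatD_def
  proof (elim CollectE disjE exE conjE)
    assume "\<forall>\<tau>\<in>\<Delta>. \<forall>u\<in>\<Theta> \<tau>. F \<tau> u = \<infinity>"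
    then show ?thesis using infinity_trop_eval[of "ereal_list generators"]
      by (intro exI[of _ "[]"] exI[of _ "[(0, \<lambda>_. 0)]"]) auto
  next
    fix f assume f: "rat_fun Vf Vinf zeta f" and F: "\<forall>\<tau>\<in>\<Delta>. \<forall>u\<in>\<Theta> \<tau>. F \<tau> u = ereal (f \<tau> u)"
    interpret rat_function Vf Vinf zeta f by unfold_locales (rule f)
    obtain G where G: "G \<in> trop_closure generators" "\<forall>\<eta>\<in>\<Delta>. \<forall>u\<in>\<Theta> \<eta>. G \<eta> u = f \<eta> u"
      using f_in_trop_closure by blast
    obtain p q where "\<exists>\<tau>\<in>\<Delta>. \<exists>u\<in>\<Theta> \<tau>. trop_eval q (ereal_list generators) \<tau> u \<noteq> \<infinity>"
      "\<forall>\<tau>\<in>\<Delta>. \<forall>u\<in>\<Theta> \<tau>. ereal (G \<tau> u) = trop_eval p (ereal_list generators) \<tau> u - trop_eval q (ereal_list generators) \<tau> u"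
      using trop_closure_trop_eval[OF G(1)] by blast
    then show ?thesis using G(2) F by (intro exI[of _ p] exI[of _ q]) auto
  qed
  then show ?thesis using generators_in_RatD by blast
qed

end
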